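(* The tangent space of the model \(\mathbf{P}\) at \(P_{0}\) is the set \(\dot{\mathbf{P}} \subseteq L_{2}(P_{0})\) of all functions \(h\) such that (a) for every \(a \in \{0,1\}\), \(\int h(y,a,z)\, q_{a}(y,z;Q_{0})\, \nu_{a}(\mathrm{d}y,\mathrm{d}z) = 0\); (b) \(\int_{\mathbb{R}} h(y,1,z)\, q_{1}(y,z;Q_{0})\, \mu_{1}(\mathrm{d}y) = \int h(y,0,z)\, q_{0}(y,z;Q_{0})\, \mu_{0}(\mathrm{d}y)\) for \(\mu_{Z}\)-almost every \(z\).
   Context: Let \(W = (Y(0), Y(1), Z')'\) be a random vector in \(\mathbb{R}^{2+k}\) (potential outcomes and baseline covariates) whose distribution \(Q\) belongs to a family \(\mathbf{Q}\) of distributions, each dominated by the product measure \(\mu\) of \(\sigma\)-finite measures \(\mu_{0}, \mu_{1}\) on \(\mathbb{R}\) and \(\mu_{Z}\) on \(\mathbb{R}^{k}\), with \(\mathbb{E}_{Q}[Y(a)^{2}] < \infty\) for \(a \in \{0,1\}\); the true distribution is \(Q_{0}\). For \(a \in \{0,1\}\), let \(\nu_{a} = \mu_{a} \times \mu_{Z}\) and let \(q_{a}(y,z;Q)\) be the \(\nu_{a}\)-density of \((Y(a), Z)\) under \(Q\). Let \(\mathbb{S} : \mathbb{R}^{k} \to \{1, \dots, \mathcal{S}\}\) be a known measurable stratification function and \(\pi(s) \in (0,1)\) known target treatment probabilities. \(\mathbf{P}\) is the family of distributions of \(X = (Y, A, Z')'\) where \(Y = Y(1)A + Y(0)(1-A)\),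 \(A\) is independent of \((Y(0),Y(1),Z)\) conditional on \(\mathbb{S}(Z)\), and \(A \mid \mathbb{S}(Z) = s \sim \mathrm{Bernoulli}(\pi(s))\), with \(W \sim Q \in \mathbf{Q}\); \(P_{0}\) is the member corresponding to \(Q_{0}\). Each \(P \in \mathbf{P}\) has density \(p(y,a,z) = [q_{1}(y,z;Q)\pi(\mathbb{S}(z))]^{a}[q_{0}(y,z;Q)(1-\pi(\mathbb{S}(z)))]^{1-a}\) with respect to the measure \(\nu\) defined by \(\nu(\mathcal{Y}\times\mathcal{A}\times\mathcal{Z}) = \nu_{1}(\mathcal{Y}\times\mathcal{Z})\mathbb{I}(1\in\mathcal{A}) + \nu_{0}(\mathcal{Y}\times\mathcal{Z})\mathbb{I}(0\in\mathcal{A})\). A regular parametric submodel \(\{P_{\theta}\}\) of \(\mathbf{P}\) through \(P_{0}\) is one of this form with densities \(q_{a}(\cdot;\theta)\) sharing a common \(Z\)-marginal density for all \(\theta\), identifying \(P_{0}\) uniquely at \(\theta_{0}\), with \(\theta \mapsto \sqrt{q_{a}(\cdot;\theta)}\) differentiable in quadratic mean at \(\theta_{0}\) with derivative \(D_{a}\) and nonsingular information; its score is \(h(y,a,z) = 2 D_{a}(y,z) / \sqrt{q_{a}(y,z;Q_{0})}\, \mathbb{I}\{q_{a}(y,z;Q_{0}) > 0\}\). The tangent space is the closed linear span in \(L_{2}(P_{0})\) of the scores of all such regular parametric submodels. *)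

theory Defs
  imports "HOL-Probability.Probability"
begin

text \<open>Setting: Y(0), Y(1) real, Z in (real^'k). Treatment indicator a :: bool (True = 1).
  mu0, mu1 on the reals, muZ on (real^'k); nu_a = mu_a x muZ; mu = mu0 x mu1 x muZ.\<close>

definition nuM :: "real measure \<Rightarrow> real measure \<Rightarrow> (real^'k) measure \<Rightarrow> bool \<Rightarrow> (real \<times> (real^'k)) measure" where
  "nuM mu0 mu1 muZ a = (if a then mu1 else mu0) \<Otimes>\<^sub>M muZ"

text \<open>Density of (Y(a),Z) w.r.t. nu_a obtained from the joint density q of (Y(0),Y(1),Z) w.r.t. mu.\<close>
definition qmarg :: "real measure \<Rightarrow> real measure \<Rightarrow> (real \<times> real \<times> (real^'k) \<Rightarrow> real) \<Rightarrow> bool \<Rightarrow> real \<times> (real^'k) \<Rightarrow> real" where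
  "qmarg mu0 mu1 q a x = (case x of (y, z) \<Rightarrow>
     if a then enn2real (\<integral>\<^sup>+ y0. ennreal (q (y0, y, z)) \<partial>mu0)
     else enn2real (\<integral>\<^sup>+ y1. ennreal (q (y, y1, z)) \<partial>mu1))"

text \<open>The family Q: all distributions of W = (Y(0),Y(1),Z) dominated by mu with finite second
  moments of Y(0) and Y(1), represented by their mu-densities.\<close>
definition Qfam :: "real measure \<Rightarrow> real measure \<Rightarrow> (real^'k) measure \<Rightarrow> (real \<times> real \<times> (real^'k) \<Rightarrow> real) set" where
  "Qfam mu0 mu1 muZ = {q.
     q \<in> borel_measurable (mu0 \<Otimes>\<^sub>M (mu1 \<Otimes>\<^sub>M muZ)) \<and> (\<forall>w. 0 \<le> q w) \<and>
     (\<integral>\<^sup>+ w. ennreal (q w) \<partial>(mu0 \<Otimes>\<^sub>M (mu1 \<Otimes>\<^sub>M muZ))) = 1 \<and>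
     (\<integral>\<^sup>+ w. ennreal ((fst w)\<^sup>2 * q w) \<partial>(mu0 \<Otimes>\<^sub>M (mu1 \<Otimes>\<^sub>M muZ))) < \<infinity> \<and>
     (\<integral>\<^sup>+ w. ennreal ((fst (snd w))\<^sup>2 * q w) \<partial>(mu0 \<Otimes>\<^sub>M (mu1 \<Otimes>\<^sub>M muZ))) < \<infinity>}"

text \<open>Treatment assignment probability P(A = a | S(Z) = S z).\<close>
definition pw :: "(nat \<Rightarrow> real) \<Rightarrow> ((real^'k) \<Rightarrow> nat) \<Rightarrow> bool \<Rightarrow> (real^'k) \<Rightarrow> real" where
  "pw ppi S a z = (if a then ppi (S z) else 1 - ppi (S z))"

text \<open>Integrals with respect to P (the law of X=(Y,A,Z) built from density q), via
  p(y,a,z) = q_a(y,z) pi_a(S z) w.r.t. nu.  Nonnegative version and Bochner version.\<close>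
definition Pnn :: "real measure \<Rightarrow> real measure \<Rightarrow> (real^'k) measure \<Rightarrow> (nat \<Rightarrow> real) \<Rightarrow> ((real^'k) \<Rightarrow> nat)
    \<Rightarrow> (real \<times> real \<times> (real^'k) \<Rightarrow> real) \<Rightarrow> (real \<times> bool \<times> (real^'k) \<Rightarrow> real) \<Rightarrow> ennreal" where
  "Pnn mu0 mu1 muZ ppi S q f = (\<Sum>a\<in>UNIV.
     \<integral>\<^sup>+ x. ennreal (f (fst x, a, snd x) * qmarg mu0 mu1 q a x * pw ppi S a (snd x)) \<partial>nuM mu0 mu1 muZ a)"

definition Pint :: "real measure \<Rightarrow> real measure \<Rightarrow> (real^'k) measure \<Rightarrow> (nat \<Rightarrow> real) \<Rightarrow> ((real^'k) \<Rightarrow> nat)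
    \<Rightarrow> (real \<times> real \<times> (real^'k) \<Rightarrow> real) \<Rightarrow> (real \<times> bool \<times> (real^'k) \<Rightarrow> real) \<Rightarrow> real" where
  "Pint mu0 mu1 muZ ppi S q f = (\<Sum>a\<in>UNIV.
     \<integral> x. f (fst x, a, snd x) * qmarg mu0 mu1 q a x * pw ppi S a (snd x) \<partial>nuM mu0 mu1 muZ a)"

text \<open>L_2(P) (as a set of functions, not equivalence classes).\<close>
definition L2P :: "real measure \<Rightarrow> real measure \<Rightarrow> (real^'k) measure \<Rightarrow> (nat \<Rightarrow> real) \<Rightarrow> ((real^'k) \<Rightarrow> nat)
    \<Rightarrow> (real \<times> real \<times> (real^'k) \<Rightarrow> real) \<Rightarrow> (real \<times> bool \<times> (real^'k) \<Rightarrow> real) set" where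
  "L2P mu0 mu1 muZ ppi S q = {h.
     (\<forall>a. (\<lambda>x. h (fst x, a, snd x)) \<in> borel_measurable (nuM mu0 mu1 muZ a)) \<and>
     Pnn mu0 mu1 muZ ppi S q (\<lambda>w. (h w)\<^sup>2) < \<infinity>}"

text \<open>R^d embedded in nat \<Rightarrow> real (coordinates >= d vanish) and its Euclidean norm.\<close>
definition Rd :: "nat \<Rightarrow> (nat \<Rightarrow> real) set" where
  "Rd d = {th. \<forall>i\<ge>d. th i = 0}"

definition normd :: "nat \<Rightarrow> (nat \<Rightarrow> real) \<Rightarrow> real" where
  "normd d th = sqrt (\<Sum>i<d. (th i)\<^sup>2)"

definition score :: "real measure \<Rightarrow> real measure \<Rightarrow> (real \<times> real \<times> (real^'k) \<Rightarrow> real)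
    \<Rightarrow> (bool \<Rightarrow> nat \<Rightarrow> real \<times> (real^'k) \<Rightarrow> real) \<Rightarrow> nat \<Rightarrow> real \<times> bool \<times> (real^'k) \<Rightarrow> real" where
  "score mu0 mu1 q0 D j w = (case w of (y, a, z) \<Rightarrow>
     (if 0 < qmarg mu0 mu1 q0 a (y, z)
      then 2 * D a j (y, z) / sqrt (qmarg mu0 mu1 q0 a (y, z)) else 0))"

text \<open>Regular parametric submodel through P0 (true joint density q0), with parameter set
  Theta, an open subset of R^d, true parameter th0, member densities qth th in Q, and
  quadratic-mean derivatives D a j (j < d) of th \<mapsto> sqrt(q_a(.;th)) in L_2(nu_a).\<close>
definition regular_submodel :: "real measure \<Rightarrow> real measure \<Rightarrow> (real^'k) measure \<Rightarrow> (nat \<Rightarrow> real) \<Rightarrow> ((real^'k) \<Rightarrow> nat)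
    \<Rightarrow> (real \<times> real \<times> (real^'k) \<Rightarrow> real) \<Rightarrow> nat \<Rightarrow> (nat \<Rightarrow> real) set \<Rightarrow> (nat \<Rightarrow> real)
    \<Rightarrow> ((nat \<Rightarrow> real) \<Rightarrow> real \<times> real \<times> (real^'k) \<Rightarrow> real)
    \<Rightarrow> (bool \<Rightarrow> nat \<Rightarrow> real \<times> (real^'k) \<Rightarrow> real) \<Rightarrow> bool" where
  "regular_submodel mu0 mu1 muZ ppi S q0 d Theta th0 qth D \<longleftrightarrow>
     Theta \<subseteq> Rd d \<and> th0 \<in> Theta \<and>
     (\<forall>th\<in>Theta. \<exists>r>0. \<forall>th'\<in>Rd d. normd d (\<lambda>i. th' i - th i) < r \<longrightarrow> th' \<in> Theta) \<and>
     (\<forall>th\<in>Theta. qth th \<in> Qfam mu0 mu1 muZ) \<and>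
     (\<forall>th\<in>Theta.
        (\<forall>a. AE x in nuM mu0 mu1 muZ a.
           qmarg mu0 mu1 (qth th) a x * pw ppi S a (snd x) = qmarg mu0 mu1 q0 a x * pw ppi S a (snd x))
        \<longleftrightarrow> th = th0) \<and>
     (\<forall>a. \<forall>j<d. D a j \<in> borel_measurable (nuM mu0 mu1 muZ a) \<and>
                 (\<integral>\<^sup>+ x. ennreal ((D a j x)\<^sup>2) \<partial>nuM mu0 mu1 muZ a) < \<infinity>) \<and>
     (\<forall>a. \<forall>e>0. \<exists>del>0. \<forall>th\<in>Theta. normd d (\<lambda>i. th i - th0 i) < del \<longrightarrow>
        (\<integral>\<^sup>+ x. ennreal ((sqrt (qmarg mu0 mu1 (qth th) a x) - sqrt (qmarg mu0 mu1 (qth th0) a x)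
              - (\<Sum>j<d. (th j - th0 j) * D a j x))\<^sup>2) \<partial>nuM mu0 mu1 muZ a)
        \<le> ennreal (e * (normd d (\<lambda>i. th i - th0 i))\<^sup>2)) \<and>
     (\<forall>c::nat \<Rightarrow> real.
        (\<forall>i<d. (\<Sum>j<d. Pint mu0 mu1 muZ ppi S q0 (\<lambda>w. score mu0 mu1 q0 D i w * score mu0 mu1 q0 D j w) * c j) = 0)
        \<longrightarrow> (\<forall>j<d. c j = 0))"

definition scores :: "real measure \<Rightarrow> real measure \<Rightarrow> (real^'k) measure \<Rightarrow> (nat \<Rightarrow> real) \<Rightarrow> ((real^'k) \<Rightarrow> nat)
    \<Rightarrow> (real \<times> real \<times> (real^'k) \<Rightarrow> real) \<Rightarrow> (real \<times> bool \<times> (real^'k) \<Rightarrow> real) set" where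
  "scores mu0 mu1 muZ ppi S q0 = {score mu0 mu1 q0 D j | d Theta th0 qth D j.
     regular_submodel mu0 mu1 muZ ppi S q0 d Theta th0 qth D \<and> j < d}"

definition lin_span :: "('a \<Rightarrow> real) set \<Rightarrow> ('a \<Rightarrow> real) set" where
  "lin_span A = {g. \<exists>(n::nat) (c::nat \<Rightarrow> real) f. (\<forall>i<n. f i \<in> A) \<and> g = (\<lambda>w. \<Sum>i<n. c i * f i w)}"

definition tangent_space :: "real measure \<Rightarrow> real measure \<Rightarrow> (real^'k) measure \<Rightarrow> (nat \<Rightarrow> real) \<Rightarrow> ((real^'k) \<Rightarrow> nat)
    \<Rightarrow> (real \<times> real \<times> (real^'k) \<Rightarrow> real) \<Rightarrow> (real \<times> bool \<times> (real^'k) \<Rightarrow> real) set" where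
  "tangent_space mu0 mu1 muZ ppi S q0 = {h \<in> L2P mu0 mu1 muZ ppi S q0.
     \<forall>e>0. \<exists>g\<in>lin_span (scores mu0 mu1 muZ ppi S q0).
        Pnn mu0 mu1 muZ ppi S q0 (\<lambda>w. (h w - g w)\<^sup>2) < ennreal e}"

end

theory Submission
  imports Defs
begin

(* Every score of a regular parametric submodel satisfies (a) and (b): differentiability in quadratic
   mean yields an expansion q_t = q_0 + 2 t D sqrt(q_0) + o(t) of the arm densities in L_1, while
   every q_t has total mass 1 and both of its arms have the same Z-marginal. The functions satisfying
   (a) and (b) form a linear subspace, closed in L_2(P_0) because on each arm P_0 dominates q_0 up to
   the factor min_s min(pi(s), 1 - pi(s)); hence it contains the tangent space.
   Conversely, a bounded h satisfying (a) and (b) is the score of the one-dimensional submodel that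
   tilts each arm density by 1 + theta h and couples the two arms conditionally independently given
   Z; an arbitrary h is the L_2(P_0)-limit of such functions, obtained by clipping h and recentring
   the clipped function so that (a) and (b) hold again. *)

lemma discriminant_le:
  fixes A B C :: real
  assumes "C \<ge> 0" "\<And>c. 0 \<le> A - 2 * c * B + c^2 * C"
  shows "B^2 \<le> A * C"
proof (cases "C = 0")
  case True
  have "B = 0"
  proof (rule ccontr)
    assume "B \<noteq> 0"
    have "0 \<le> A - 2 * ((A + 1) / (2 * B)) * B + ((A + 1) / (2 * B))^2 * C" by (rule assms(2))
    with True \<open>B \<noteq> 0\<close> show False by (simp add: field_simps)
  qed
  then show ?thesis using True by simp
next
  case False
  then have Cp: "C > 0" using assms(1) by simp
  have "0 \<le> A - 2 * (B / C) * B + (B / C)^2 * C" by (rule assms(2))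
  then have "B^2 / C \<le> A" using Cp by (simp add: field_simps power2_eq_square)
  then show ?thesis using Cp by (simp add: field_simps)
qed

lemma abs_le_half_sq_plus_half: "\<bar>t::real\<bar> \<le> t^2 / 2 + 1 / 2"
proof -
  have "0 \<le> (\<bar>t\<bar> - 1)^2" by simp
  also have "(\<bar>t\<bar> - 1)^2 = t^2 - 2 * \<bar>t\<bar> + 1" by (simp add: power2_diff)
  finally show ?thesis by simp
qed

lemma abs_mult_le_weighted_squares:
  fixes E X l :: real
  assumes "l > 0"
  shows "\<bar>E * X\<bar> \<le> E^2 / (2 * l) + l * X^2 / 2"
proof -
  have "0 \<le> (\<bar>E\<bar> - l * \<bar>X\<bar>)^2" by simp
  then have "2 * l * (\<bar>E\<bar> * \<bar>X\<bar>) \<le> E^2 + l^2 * X^2"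
    by (simp add: power2_eq_square algebra_simps)
  then have "\<bar>E\<bar> * \<bar>X\<bar> \<le> (E^2 + l^2 * X^2) / (2 * l)"
    using assms by (simp add: field_simps)
  also have "(E^2 + l^2 * X^2) / (2 * l) = E^2 / (2 * l) + l * X^2 / 2"
    using assms by (simp add: field_simps power2_eq_square)
  finally show ?thesis by (simp add: abs_mult)
qed

lemma sq_sum3_le: "((a::real) + b + c)^2 \<le> 3 * (a^2 + b^2 + c^2)"
proof -
  have "0 \<le> (a - b)^2 + (b - c)^2 + (a - c)^2" by simp
  then show ?thesis by (simp add: power2_eq_square algebra_simps)
qed

text \<open>Behind the passage from differentiability in quadratic mean to an \<open>L\<^sub>1\<close> expansion of the
  densities: with \<open>R = \<surd>q\<^sub>t\<close> and \<open>Q = \<surd>q\<close>, \<open>R\<^sup>2 - Q\<^sup>2 - 2tDQ = (R - Q - tD)(R + Q + tD) + t\<^sup>2D\<^sup>2\<close>.\<close>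

lemma abs_sq_diff_linearization_le:
  fixes R Q D t l :: real
  assumes "l > 0"
  shows "\<bar>R^2 - Q^2 - 2 * t * D * Q\<bar>
    \<le> (R - Q - t * D)^2 / (2 * l) + 3 * l / 2 * (R^2 + Q^2 + t^2 * D^2) + t^2 * D^2"
proof -
  let ?E = "R - Q - t * D" and ?X = "R + Q + t * D"
  have id: "R^2 - Q^2 - 2 * t * D * Q = ?E * ?X + t^2 * D^2"
    by (simp add: power2_eq_square algebra_simps)
  have "?X^2 \<le> 3 * (R^2 + Q^2 + (t * D)^2)" by (rule sq_sum3_le)
  then have "l * ?X^2 / 2 \<le> 3 * l / 2 * (R^2 + Q^2 + t^2 * D^2)"
    using assms by (simp add: power_mult_distrib)
  then have "\<bar>?E * ?X\<bar> \<le> ?E^2 / (2 * l) + 3 * l / 2 * (R^2 + Q^2 + t^2 * D^2)"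
    using abs_mult_le_weighted_squares[OF assms, of ?E ?X] by linarith
  then show ?thesis unfolding id by (smt (verit) zero_le_power2 zero_le_mult_iff)
qed

lemma abs_sqrt_one_plus_remainder:
  fixes x :: real
  assumes "-1 \<le> x"
  shows "\<bar>sqrt (1 + x) - 1 - x / 2\<bar> \<le> x^2 / 2"
proof -
  define s where "s = sqrt (1 + x)"
  have s0: "0 \<le> s" and s2: "s^2 = 1 + x" using assms by (simp_all add: s_def)
  have e: "s - 1 - x / 2 = - ((s - 1)^2 / 2)" using s2 by (simp add: power2_eq_square field_simps)
  have "(s - 1) * (s + 1) = x" using s2 by (simp add: power2_eq_square algebra_simps)
  then have "\<bar>x\<bar> = \<bar>s - 1\<bar> * (s + 1)" using s0 by (metis abs_mult abs_of_nonneg add_nonneg_nonneg zero_le_one)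
  then have "\<bar>s - 1\<bar> \<le> \<bar>x\<bar>" using s0 by (metis abs_ge_zero le_add_same_cancel2 mult_le_cancel_left1 not_le)
  then have "(s - 1)^2 \<le> x^2" by (metis abs_ge_zero power2_abs power_mono)
  then show ?thesis unfolding s_def[symmetric] e by simp
qed

lemma sqrt_mult_one_plus_remainder_sq:
  fixes q x :: real
  assumes q: "0 \<le> q" and x: "-1 \<le> x"
  shows "(sqrt (q * (1 + x)) - sqrt q - x * sqrt q / 2)^2 \<le> q * x^4 / 4"
proof -
  have "sqrt (q * (1 + x)) = sqrt q * sqrt (1 + x)" by (rule real_sqrt_mult)
  then have "sqrt (q * (1 + x)) - sqrt q - x * sqrt q / 2 = sqrt q * (sqrt (1 + x) - 1 - x / 2)"
    by (simp add: algebra_simps)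
  then have "(sqrt (q * (1 + x)) - sqrt q - x * sqrt q / 2)^2 = q * (sqrt (1 + x) - 1 - x / 2)^2"
    using q by (simp add: power_mult_distrib)
  also have "(sqrt (1 + x) - 1 - x / 2)^2 \<le> (x^2 / 2)^2"
    using power_mono[OF abs_sqrt_one_plus_remainder[OF x], of 2] by simp
  then have "q * (sqrt (1 + x) - 1 - x / 2)^2 \<le> q * (x^2 / 2)^2" using q by (rule mult_left_mono)
  also have "q * (x^2 / 2)^2 = q * x^4 / 4" by (simp add: power2_eq_square power4_eq_xxxx)
  finally show ?thesis .
qed

lemma clip_diff_sq_le: "0 \<le> (N::real) \<Longrightarrow> (x - max (- N) (min N x))^2 \<le> x^2"
proof -
  assume N: "0 \<le> N"
  have "\<bar>x - max (- N) (min N x)\<bar> \<le> \<bar>x\<bar>" using N by (auto simp: max_def min_def)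
  then show ?thesis by (metis abs_ge_zero power2_abs power_mono)
qed

lemma abs_sq_mult_mono:
  fixes A B q :: real
  assumes "A^2 \<le> B^2" "0 \<le> q"
  shows "\<bar>A^2 * q\<bar> \<le> \<bar>B^2 * q\<bar>"
  using mult_right_mono[OF assms] assms(2) by simp

lemma linearization_error_le:
  fixes E I K eps t :: real
  assumes K: "0 < K" and eps: "0 < eps" and t: "0 < t" "t \<le> 1" "t * (4 * K) \<le> eps"
    and E: "E \<le> eps / (3 * (2 + K)) * eps / 2 * t^2" and I: "0 \<le> I" "I \<le> K"
  defines "l \<equiv> t * (eps / (3 * (2 + K)))"
  shows "E / (2 * l) + 3 * l / 2 * (1 + 1 + t^2 * I) + t^2 * I \<le> t * eps"
proof -
  have lp: "0 < l" using K eps t by (simp add: l_def)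
  have b1: "E / (2 * l) \<le> t * (eps / 4)"
  proof -
    have "E / (2 * l) \<le> eps / (3 * (2 + K)) * eps / 2 * t^2 / (2 * l)"
      using E lp by (intro divide_right_mono) auto
    also have "\<dots> = t * (eps / 4)"
    proof -
      define c where "c = eps / (3 * (2 + K))"
      have "0 < c" using K eps by (simp add: c_def)
      have "eps / (3 * (2 + K)) * eps / 2 * t^2 / (2 * l) = c * eps / 2 * t^2 / (2 * (t * c))"
        by (simp add: c_def l_def)
      also have "\<dots> = t * (eps / 4)" using \<open>0 < c\<close> t by (simp add: power2_eq_square field_simps)
      finally show ?thesis .
    qed
    finally show ?thesis .
  qed
  have t2: "t^2 \<le> 1" using t by (simp add: power_le_one)
  have "3 * l / 2 * (1 + 1 + t^2 * I) \<le> 3 * l / 2 * (2 + K)"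
    using lp I t2 t by (intro mult_left_mono) (auto intro: order.trans[OF mult_left_le_one_le])
  also have "3 * l / 2 * (2 + K) = t * (eps / 2)" using K by (simp add: l_def field_simps)
  finally have b2: "3 * l / 2 * (1 + 1 + t^2 * I) \<le> t * (eps / 2)" .
  have "t^2 * I \<le> t * (t * K)" using I t by (simp add: power2_eq_square mult_left_mono)
  also have "\<dots> \<le> t * (eps / 4)" using t by (intro mult_left_mono) auto
  finally have b3: "t^2 * I \<le> t * (eps / 4)" .
  have "t * (eps / 4) + t * (eps / 2) + t * (eps / 4) = t * eps" by (simp add: field_simps)
  then show ?thesis using b1 b2 b3 by linarith
qed

lemma weighted_Cauchy_Schwarz:
  fixes f w :: "'a \<Rightarrow> real"
  assumes f[measurable]: "f \<in> borel_measurable M" and w0: "\<And>x. 0 \<le> w x"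
    and iw: "integrable M w" and ifw: "integrable M (\<lambda>x. (f x)^2 * w x)"
  shows "integrable M (\<lambda>x. f x * w x)"
    "(\<integral>x. f x * w x \<partial>M)^2 \<le> (\<integral>x. (f x)^2 * w x \<partial>M) * (\<integral>x. w x \<partial>M)"
proof -
  have bnd: "\<bar>f x * w x\<bar> \<le> \<bar>(f x)^2 * w x / 2 + w x / 2\<bar>" for x
  proof -
    have "\<bar>f x\<bar> * w x \<le> ((f x)^2 / 2 + 1/2) * w x"
      using w0 abs_le_half_sq_plus_half by (intro mult_right_mono) auto
    moreover have "0 \<le> ((f x)^2 / 2 + 1/2) * w x" using w0[of x] by simp
    ultimately show ?thesis using w0[of x] by (simp add: abs_mult distrib_right)
  qed
  have i3: "integrable M (\<lambda>x. (f x)^2 * w x / 2 + w x / 2)" using ifw iw by simp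
  show ifw1: "integrable M (\<lambda>x. f x * w x)"
    by (rule Bochner_Integration.integrable_bound[OF i3]) (use iw in \<open>simp_all add: bnd\<close>)
  let ?A = "\<integral>x. (f x)^2 * w x \<partial>M" and ?B = "\<integral>x. f x * w x \<partial>M" and ?C = "\<integral>x. w x \<partial>M"
  show "?B^2 \<le> ?A * ?C"
  proof (rule discriminant_le)
    show "0 \<le> ?C" using w0 by simp
    fix c :: real
    have "0 \<le> (\<integral>x. (f x - c)^2 * w x \<partial>M)" using w0 by simp
    also have "(\<integral>x. (f x - c)^2 * w x \<partial>M) = (\<integral>x. (f x)^2 * w x - 2 * c * (f x * w x)
        + c^2 * w x \<partial>M)"
      by (rule Bochner_Integration.integral_cong) (auto simp: power2_eq_square algebra_simps)
    also have "\<dots> = ?A - 2 * c * ?B + c^2 * ?C"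
      using ifw ifw1 iw by simp
    finally show "0 \<le> ?A - 2 * c * ?B + c^2 * ?C" .
  qed
qed

lemma abs_integral_le_nn_integral:
  fixes f :: "'a \<Rightarrow> real"
  shows "ennreal \<bar>\<integral>x. f x \<partial>M\<bar> \<le> (\<integral>\<^sup>+x. ennreal \<bar>f x\<bar> \<partial>M)"
proof (cases "integrable M f")
  case True
  then show ?thesis using integral_norm_bound_ennreal[OF True] by simp
next
  case False
  then show ?thesis by (simp add: not_integrable_integral_eq)
qed

lemma AE_zero_if_nn_integral_abs_arbitrarily_small:
  fixes f :: "'a \<Rightarrow> real"
  assumes [measurable]: "f \<in> borel_measurable M"
    and small: "\<And>e. 0 < e \<Longrightarrow> (\<integral>\<^sup>+x. ennreal \<bar>f x\<bar> \<partial>M) \<le> ennreal e"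
  shows "AE x in M. f x = 0"
proof -
  have "(\<integral>\<^sup>+x. ennreal \<bar>f x\<bar> \<partial>M) \<le> 0"
    by (rule ennreal_le_epsilon) (use small in auto)
  then have "(\<integral>\<^sup>+x. ennreal \<bar>f x\<bar> \<partial>M) = 0" by simp
  then have "AE x in M. ennreal \<bar>f x\<bar> = 0"
    by (subst (asm) nn_integral_0_iff_AE) auto
  then show ?thesis by (auto elim!: eventually_mono)
qed

lemma integral_abs_sq_diff_linearization_le:
  fixes R Q D :: "'a \<Rightarrow> real"
  assumes [measurable]: "R \<in> borel_measurable M" "Q \<in> borel_measurable M" "D \<in> borel_measurable M"
    and iR: "integrable M (\<lambda>x. (R x)^2)" and iQ: "integrable M (\<lambda>x. (Q x)^2)"
    and iD: "integrable M (\<lambda>x. (D x)^2)" and iE: "integrable M (\<lambda>x. (R x - Q x - t * D x)^2)"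
    and l: "0 < l"
  shows "(\<integral>x. \<bar>(R x)^2 - (Q x)^2 - 2 * t * D x * Q x\<bar> \<partial>M)
        \<le> (\<integral>x. (R x - Q x - t * D x)^2 \<partial>M) / (2 * l)
          + 3 * l / 2 * ((\<integral>x. (R x)^2 \<partial>M) + (\<integral>x. (Q x)^2 \<partial>M) + t^2 * (\<integral>x. (D x)^2 \<partial>M))
          + t^2 * (\<integral>x. (D x)^2 \<partial>M)"
proof -
  define B where "B x = (R x - Q x - t * D x)^2 / (2 * l)
    + 3 * l / 2 * ((R x)^2 + (Q x)^2 + t^2 * (D x)^2) + t^2 * (D x)^2" for x
  have iB: "integrable M B" unfolding B_def using iE iR iQ iD by simp
  have pw: "\<bar>(R x)^2 - (Q x)^2 - 2 * t * D x * Q x\<bar> \<le> B x" for x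
    unfolding B_def by (rule abs_sq_diff_linearization_le[OF l])
  have iG: "integrable M (\<lambda>x. \<bar>(R x)^2 - (Q x)^2 - 2 * t * D x * Q x\<bar>)"
    by (rule Bochner_Integration.integrable_bound[OF iB]) (auto intro: order.trans[OF pw abs_ge_self])
  have "(\<integral>x. \<bar>(R x)^2 - (Q x)^2 - 2 * t * D x * Q x\<bar> \<partial>M) \<le> (\<integral>x. B x \<partial>M)"
    by (rule integral_mono[OF iG iB pw])
  also have "\<dots> = (\<integral>x. (R x - Q x - t * D x)^2 \<partial>M) / (2 * l)
      + 3 * l / 2 * ((\<integral>x. (R x)^2 \<partial>M) + (\<integral>x. (Q x)^2 \<partial>M) + t^2 * (\<integral>x. (D x)^2 \<partial>M))
      + t^2 * (\<integral>x. (D x)^2 \<partial>M)"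
    unfolding B_def using iE iR iQ iD by simp
  finally show ?thesis .
qed

lemma AE_nn_integral_normalized_product:
  fixes f c :: "'a \<Rightarrow> real"
  assumes f[measurable]: "f \<in> borel_measurable M" and c[measurable]: "c \<in> borel_measurable N"
    and f0: "\<And>u. 0 \<le> f u" and c0: "\<And>y. 0 \<le> c y" and g: "0 \<le> g"
    and fg: "(\<integral>\<^sup>+u. ennreal (f u) \<partial>M) = ennreal g" and cg: "(\<integral>\<^sup>+y. ennreal (c y) \<partial>N) = ennreal g"
  shows "AE y in N. (\<integral>\<^sup>+u. ennreal (f u * c y / g) \<partial>M) = ennreal (c y)"
proof (cases "g = 0")
  case True
  then have "(\<integral>\<^sup>+y. ennreal (c y) \<partial>N) = 0" using cg by simp
  then have "AE y in N. ennreal (c y) = 0" by (subst (asm) nn_integral_0_iff_AE) auto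
  then show ?thesis using True by (auto elim!: eventually_mono)
next
  case False
  have "(\<integral>\<^sup>+u. ennreal (f u * c y / g) \<partial>M) = ennreal (c y)" for y
  proof -
    have "(\<integral>\<^sup>+u. ennreal (f u * c y / g) \<partial>M) = (\<integral>\<^sup>+u. ennreal (f u) * ennreal (c y / g) \<partial>M)"
      using f0 c0 g by (intro nn_integral_cong) (simp add: ennreal_mult[symmetric])
    also have "\<dots> = ennreal g * ennreal (c y / g)" using fg by (simp add: nn_integral_multc)
    also have "\<dots> = ennreal (c y)" using False g c0 by (simp add: ennreal_mult[symmetric])
    finally show ?thesis .
  qed
  then show ?thesis by simp
qed

section \<open>Densities of the potential outcomes and their marginals\<close>

locale potential_outcomes =
  fixes mu0 mu1 :: "real measure" and muZ :: "(real^'k) measure"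
  assumes sigma_finite_mu0: "sigma_finite_measure mu0"
    and sigma_finite_mu1: "sigma_finite_measure mu1"
    and sigma_finite_muZ: "sigma_finite_measure muZ"
    and sets_mu0: "sets mu0 = sets borel" and sets_mu1: "sets mu1 = sets borel"
    and sets_muZ: "sets muZ = sets borel"
begin

definition muY :: "bool \<Rightarrow> real measure" where "muY a = (if a then mu1 else mu0)"

abbreviation muW where "muW \<equiv> mu0 \<Otimes>\<^sub>M (mu1 \<Otimes>\<^sub>M muZ)"
abbreviation nu where "nu a \<equiv> nuM mu0 mu1 muZ a"
abbreviation qm where "qm q a \<equiv> qmarg mu0 mu1 q a"

lemma muY_simps: "muY True = mu1" "muY False = mu0" by (simp_all add: muY_def)

lemma nu_eq: "nu a = muY a \<Otimes>\<^sub>M muZ" by (simp add: nuM_def muY_def)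

lemma sigma_finite_muY: "sigma_finite_measure (muY a)"
  using sigma_finite_mu0 sigma_finite_mu1 by (simp add: muY_def)

lemma sets_muY: "sets (muY a) = sets borel" using sets_mu0 sets_mu1 by (simp add: muY_def)

lemma space_muY[simp]: "space (muY a) = UNIV" using sets_eq_imp_space_eq[OF sets_muY] by simp
lemma space_mu0[simp]: "space mu0 = UNIV" using sets_eq_imp_space_eq[OF sets_mu0] by simp
lemma space_mu1[simp]: "space mu1 = UNIV" using sets_eq_imp_space_eq[OF sets_mu1] by simp
lemma space_muZ[simp]: "space muZ = UNIV" using sets_eq_imp_space_eq[OF sets_muZ] by simp
declare space_pair_measure[simp]

lemma pair_sigma_finite_muY: "pair_sigma_finite (muY a) muZ"
  by (simp add: pair_sigma_finite_def sigma_finite_muY sigma_finite_muZ)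

lemma sigma_finite_mu1_muZ: "sigma_finite_measure (mu1 \<Otimes>\<^sub>M muZ)"
  by (rule sigma_finite_pair_measure[OF sigma_finite_mu1 sigma_finite_muZ])

lemma nn_integral_muW_integrate_Y0:
  fixes f :: "real \<times> real \<times> (real^'k) \<Rightarrow> ennreal"
  assumes "f \<in> borel_measurable muW"
  shows "(\<integral>\<^sup>+w. f w \<partial>muW) = (\<integral>\<^sup>+x. (\<integral>\<^sup>+y0. f (y0, fst x, snd x) \<partial>mu0) \<partial>nu True)"
proof -
  interpret pair_sigma_finite mu0 "mu1 \<Otimes>\<^sub>M muZ"
    by (simp add: pair_sigma_finite_def sigma_finite_mu0 sigma_finite_mu1_muZ)
  show ?thesis using nn_integral_snd[OF assms] by (simp add: nu_eq muY_def)
qed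

lemma nn_integral_muW_integrate_Y1:
  fixes f :: "real \<times> real \<times> (real^'k) \<Rightarrow> ennreal"
  assumes f[measurable]: "f \<in> borel_measurable muW"
  shows "(\<integral>\<^sup>+w. f w \<partial>muW) = (\<integral>\<^sup>+x. (\<integral>\<^sup>+y1. f (fst x, y1, snd x) \<partial>mu1) \<partial>nu False)"
proof -
  interpret B: sigma_finite_measure "mu1 \<Otimes>\<^sub>M muZ" by (rule sigma_finite_mu1_muZ)
  interpret P1: pair_sigma_finite mu1 muZ using pair_sigma_finite_muY[of True]
      by (simp add: muY_def)
  have "(\<integral>\<^sup>+w. f w \<partial>muW) = (\<integral>\<^sup>+y0. (\<integral>\<^sup>+w. f (y0, w) \<partial>(mu1 \<Otimes>\<^sub>M muZ)) \<partial>mu0)"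
    using B.nn_integral_fst[OF f] by simp
  also have "\<dots> = (\<integral>\<^sup>+y0. (\<integral>\<^sup>+z. (\<integral>\<^sup>+y1. f (y0, y1, z) \<partial>mu1) \<partial>muZ) \<partial>mu0)"
  proof (rule nn_integral_cong)
    fix y0
    have "(\<lambda>w. f (y0, w)) \<in> borel_measurable (mu1 \<Otimes>\<^sub>M muZ)" by (rule measurable_Pair2[OF f]) simp
    from P1.nn_integral_snd[OF this]
    show "(\<integral>\<^sup>+w. f (y0, w) \<partial>(mu1 \<Otimes>\<^sub>M muZ)) = (\<integral>\<^sup>+z. (\<integral>\<^sup>+y1. f (y0, y1, z) \<partial>mu1) \<partial>muZ)"
      by simp
  qed
  also have "\<dots> = (\<integral>\<^sup>+x. (\<integral>\<^sup>+y1. f (fst x, y1, snd x) \<partial>mu1) \<partial>(mu0 \<Otimes>\<^sub>M muZ))"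
  proof -
    have "(\<lambda>x. \<integral>\<^sup>+y1. f (fst x, y1, snd x) \<partial>mu1) \<in> borel_measurable (mu0 \<Otimes>\<^sub>M muZ)"
      by measurable
    from P1.M2.nn_integral_fst[OF this] show ?thesis by simp
  qed
  finally show ?thesis by (simp add: nu_eq muY_def)
qed

lemma nn_integral_nu_fibres:
  fixes f :: "real \<times> (real^'k) \<Rightarrow> ennreal"
  assumes "f \<in> borel_measurable (nu a)"
  shows "(\<integral>\<^sup>+x. f x \<partial>nu a) = (\<integral>\<^sup>+z. (\<integral>\<^sup>+y. f (y, z) \<partial>muY a) \<partial>muZ)"
proof -
  interpret pair_sigma_finite "muY a" muZ by (rule pair_sigma_finite_muY)
  show ?thesis using nn_integral_snd[of f] assms by (simp add: nu_eq)
qed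

lemma measurable_fibre:
  fixes F :: "real \<times> (real^'k) \<Rightarrow> 'b::topological_space"
  assumes "F \<in> borel_measurable (nu a)"
  shows "(\<lambda>y. F (y, z)) \<in> borel_measurable (muY a)"
  using measurable_Pair1[of F "muY a" muZ] assms by (simp add: nu_eq)

lemma borel_measurable_fibre_integral:
  fixes F :: "real \<times> (real^'k) \<Rightarrow> real"
  assumes "F \<in> borel_measurable (nu a)"
  shows "(\<lambda>z. \<integral>y. F (y, z) \<partial>muY a) \<in> borel_measurable muZ"
proof -
  interpret P: pair_sigma_finite "muY a" muZ by (rule pair_sigma_finite_muY)
  have [measurable]: "F \<in> borel_measurable (muY a \<Otimes>\<^sub>M muZ)" using assms by (simp add: nu_eq)
  have "case_prod (\<lambda>z y. F (y, z)) \<in> borel_measurable (muZ \<Otimes>\<^sub>M muY a)" by measurable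
  then show ?thesis by (rule P.M1.borel_measurable_lebesgue_integral)
qed

lemma borel_measurable_fibre_nn_integral:
  fixes F :: "real \<times> (real^'k) \<Rightarrow> ennreal"
  assumes "F \<in> borel_measurable (nu a)"
  shows "(\<lambda>z. \<integral>\<^sup>+y. F (y, z) \<partial>muY a) \<in> borel_measurable muZ"
proof -
  interpret P: pair_sigma_finite "muY a" muZ by (rule pair_sigma_finite_muY)
  have [measurable]: "F \<in> borel_measurable (muY a \<Otimes>\<^sub>M muZ)" using assms by (simp add: nu_eq)
  have "(\<lambda>x. F (snd x, fst x)) \<in> borel_measurable (muZ \<Otimes>\<^sub>M muY a)" by measurable
  then have "case_prod (\<lambda>z y. F (y, z)) \<in> borel_measurable (muZ \<Otimes>\<^sub>M muY a)"
    by (simp add: split_beta')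
  then show ?thesis by (rule P.M1.borel_measurable_nn_integral)
qed

lemma AE_integrable_fibre:
  fixes F :: "real \<times> (real^'k) \<Rightarrow> real"
  assumes "integrable (nu a) F"
  shows "AE z in muZ. integrable (muY a) (\<lambda>y. F (y, z))"
proof -
  interpret P: pair_sigma_finite "muY a" muZ by (rule pair_sigma_finite_muY)
  have "integrable (muY a \<Otimes>\<^sub>M muZ) (case_prod (\<lambda>y z. F (y, z)))" using assms by (simp add: nu_eq)
  then show ?thesis by (rule P.AE_integrable_snd)
qed

lemma
  fixes F :: "real \<times> (real^'k) \<Rightarrow> real"
  assumes "integrable (nu a) F"
  shows integrable_fibre_integral: "integrable muZ (\<lambda>z. \<integral>y. F (y, z) \<partial>muY a)"
    and integral_fibre_integral: "(\<integral>z. (\<integral>y. F (y, z) \<partial>muY a) \<partial>muZ) = (\<integral>x. F x \<partial>nu a)"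
proof -
  interpret P: pair_sigma_finite "muY a" muZ by (rule pair_sigma_finite_muY)
  have F: "integrable (muY a \<Otimes>\<^sub>M muZ) (case_prod (\<lambda>y z. F (y, z)))" using assms by (simp add: nu_eq)
  show "integrable muZ (\<lambda>z. \<integral>y. F (y, z) \<partial>muY a)" using P.integrable_snd[OF F] by simp
  show "(\<integral>z. (\<integral>y. F (y, z) \<partial>muY a) \<partial>muZ) = (\<integral>x. F x \<partial>nu a)"
    using P.integral_snd[OF F] by (simp add: nu_eq)
qed

lemma AE_nu_fibres:
  assumes P: "{x \<in> space (nu a). P x} \<in> sets (nu a)"
    and ae: "AE z in muZ. AE y in muY a. P (y, z)"
  shows "AE x in nu a. P x"
proof -
  interpret PS: pair_sigma_finite "muY a" muZ by (rule pair_sigma_finite_muY)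
  have P': "{x \<in> space (muY a \<Otimes>\<^sub>M muZ). P x} \<in> sets (muY a \<Otimes>\<^sub>M muZ)" using P by (simp add: nu_eq)
  then have "AE y in muY a. AE z in muZ. P (y, z)"
    using PS.AE_commute[of "\<lambda>y z. P (y, z)"] ae by simp
  then have "AE x in muY a \<Otimes>\<^sub>M muZ. P x" by (intro PS.AE_pair_measure P')
  then show ?thesis unfolding nu_eq .
qed

lemma borel_measurable_fst_nu[measurable]: "fst \<in> borel_measurable (nu a)"
  using measurable_fst[of "muY a" muZ] by (simp add: nu_eq measurable_cong_sets[OF refl sets_muY])

lemma measurable_snd_nu[measurable]: "snd \<in> measurable (nu a) muZ"
  by (simp add: nu_eq)

lemma nn_integral_fibre_difference_le:
  fixes F1 F0 :: "real \<times> (real^'k) \<Rightarrow> real"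
  assumes F1: "integrable (nu True) F1" and F0: "integrable (nu False) F0"
  shows "(\<integral>\<^sup>+z. ennreal \<bar>(\<integral>y. F1 (y, z) \<partial>mu1) - (\<integral>y. F0 (y, z) \<partial>mu0)\<bar> \<partial>muZ)
    \<le> ennreal (\<integral>x. \<bar>F1 x\<bar> \<partial>nu True) + ennreal (\<integral>x. \<bar>F0 x\<bar> \<partial>nu False)"
proof -
  define G where "G a = (if a then F1 else F0)" for a
  have iG: "integrable (nu a) (G a)" for a using F1 F0 by (simp add: G_def)
  have m: "(\<lambda>x. ennreal \<bar>G a x\<bar>) \<in> borel_measurable (nu a)" for a using iG by measurable
  have "(\<integral>\<^sup>+z. ennreal \<bar>(\<integral>y. F1 (y, z) \<partial>mu1) - (\<integral>y. F0 (y, z) \<partial>mu0)\<bar> \<partial>muZ)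
    \<le> (\<integral>\<^sup>+z. (\<integral>\<^sup>+y. ennreal \<bar>G True (y, z)\<bar> \<partial>muY True)
        + (\<integral>\<^sup>+y. ennreal \<bar>G False (y, z)\<bar> \<partial>muY False) \<partial>muZ)"
  proof (intro nn_integral_mono)
    fix z
    have "ennreal \<bar>(\<integral>y. F1 (y, z) \<partial>mu1) - (\<integral>y. F0 (y, z) \<partial>mu0)\<bar>
        \<le> ennreal \<bar>\<integral>y. F1 (y, z) \<partial>mu1\<bar> + ennreal \<bar>\<integral>y. F0 (y, z) \<partial>mu0\<bar>"
      by (simp add: ennreal_plus[symmetric] del: ennreal_plus)
    also have "\<dots> \<le> (\<integral>\<^sup>+y. ennreal \<bar>F1 (y, z)\<bar> \<partial>mu1) + (\<integral>\<^sup>+y. ennreal \<bar>F0 (y, z)\<bar> \<partial>mu0)"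
      by (intro add_mono abs_integral_le_nn_integral)
    finally show "ennreal \<bar>(\<integral>y. F1 (y, z) \<partial>mu1) - (\<integral>y. F0 (y, z) \<partial>mu0)\<bar>
      \<le> (\<integral>\<^sup>+y. ennreal \<bar>G True (y, z)\<bar> \<partial>muY True) + (\<integral>\<^sup>+y. ennreal \<bar>G False (y, z)\<bar> \<partial>muY False)"
      by (simp add: G_def muY_simps)
  qed
  also have "\<dots> = (\<integral>\<^sup>+x. ennreal \<bar>G True x\<bar> \<partial>nu True) + (\<integral>\<^sup>+x. ennreal \<bar>G False x\<bar> \<partial>nu False)"
    using nn_integral_nu_fibres[OF m] borel_measurable_fibre_nn_integral[OF m]
    by (simp add: nn_integral_add)
  also have "\<dots> = ennreal (\<integral>x. \<bar>G True x\<bar> \<partial>nu True) + ennreal (\<integral>x. \<bar>G False x\<bar> \<partial>nu False)"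
    using iG by (simp add: nn_integral_eq_integral)
  finally show ?thesis by (simp only: G_def if_True if_False)
qed

lemma qmarg_True: "qm q True x = enn2real (\<integral>\<^sup>+y0. ennreal (q (y0, fst x, snd x)) \<partial>mu0)"
  by (simp add: qmarg_def split_beta)

lemma qmarg_False: "qm q False x = enn2real (\<integral>\<^sup>+y1. ennreal (q (fst x, y1, snd x)) \<partial>mu1)"
  by (simp add: qmarg_def split_beta)

lemma qmarg_nonneg: "0 \<le> qm q a x"
  by (cases a) (simp_all add: qmarg_True qmarg_False enn2real_nonneg)

text \<open>The marginal before truncation to a real number: \<^const>\<open>qmarg\<close> is its \<^const>\<open>enn2real\<close>, which loses
  information only where it is infinite.\<close>

definition qmarg_nn :: "(real \<times> real \<times> (real^'k) \<Rightarrow> real) \<Rightarrow> bool \<Rightarrow> real \<times> (real^'k) \<Rightarrow> ennreal" where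
  "qmarg_nn q a x = (if a then \<integral>\<^sup>+y0. ennreal (q (y0, fst x, snd x)) \<partial>mu0
                     else \<integral>\<^sup>+y1. ennreal (q (fst x, y1, snd x)) \<partial>mu1)"

definition arm_proj :: "bool \<Rightarrow> real \<times> real \<times> (real^'k) \<Rightarrow> real \<times> (real^'k)" where
  "arm_proj a w = (if a then (fst (snd w), snd (snd w)) else (fst w, snd (snd w)))"

lemma qmarg_eq_enn2real: "qm q a x = enn2real (qmarg_nn q a x)"
  by (cases a) (simp_all add: qmarg_nn_def qmarg_True qmarg_False)

context
  fixes q :: "real \<times> real \<times> (real^'k) \<Rightarrow> real"
  assumes q[measurable]: "q \<in> borel_measurable muW"
begin

lemma borel_measurable_qmarg_nn: "qmarg_nn q a \<in> borel_measurable (nu a)"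
proof -
  interpret M0: sigma_finite_measure mu0 by (rule sigma_finite_mu0)
  interpret M1: sigma_finite_measure mu1 by (rule sigma_finite_mu1)
  have "(\<lambda>x. \<integral>\<^sup>+y0. ennreal (q (y0, fst x, snd x)) \<partial>mu0) \<in> borel_measurable (mu1 \<Otimes>\<^sub>M muZ)"
    "(\<lambda>x. \<integral>\<^sup>+y1. ennreal (q (fst x, y1, snd x)) \<partial>mu1) \<in> borel_measurable (mu0 \<Otimes>\<^sub>M muZ)"
    by measurable
  then show ?thesis by (cases a) (simp_all add: qmarg_nn_def[abs_def] nu_eq muY_def)
qed

lemma borel_measurable_qmarg: "qm q a \<in> borel_measurable (nu a)"
  unfolding qmarg_eq_enn2real[abs_def] using borel_measurable_qmarg_nn by measurable

lemma nn_integral_arm_proj: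
  assumes g[measurable]: "g \<in> borel_measurable (nu a)"
  shows "(\<integral>\<^sup>+w. g (arm_proj a w) * ennreal (q w) \<partial>muW) = (\<integral>\<^sup>+x. g x * qmarg_nn q a x \<partial>nu a)"
proof (cases a)
  case True
  have [measurable]: "g \<in> borel_measurable (mu1 \<Otimes>\<^sub>M muZ)" using g True by (simp add: nu_eq muY_def)
  have "(\<lambda>w. g (arm_proj a w) * ennreal (q w)) \<in> borel_measurable muW"
    using True by (simp add: arm_proj_def) measurable
  from nn_integral_muW_integrate_Y0[OF this] show ?thesis
    using True by (simp add: arm_proj_def qmarg_nn_def nn_integral_cmult)
next
  case False
  have [measurable]: "g \<in> borel_measurable (mu0 \<Otimes>\<^sub>M muZ)" using g False by (simp add: nu_eq muY_def)
  have "(\<lambda>w. g (arm_proj a w) * ennreal (q w)) \<in> borel_measurable muW"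
    using False by (simp add: arm_proj_def) measurable
  from nn_integral_muW_integrate_Y1[OF this] show ?thesis
    using False by (simp add: arm_proj_def qmarg_nn_def nn_integral_cmult)
qed

lemma nn_integral_qmarg_le:
  assumes "g \<in> borel_measurable (nu a)"
  shows "(\<integral>\<^sup>+x. g x * ennreal (qm q a x) \<partial>nu a) \<le> (\<integral>\<^sup>+w. g (arm_proj a w) * ennreal (q w) \<partial>muW)"
  unfolding nn_integral_arm_proj[OF assms] qmarg_eq_enn2real
  by (intro nn_integral_mono mult_left_mono) (simp_all add: ennreal_enn2real_if)

lemma nn_integral_qmarg_eq:
  assumes fin: "(\<integral>\<^sup>+w. ennreal (q w) \<partial>muW) \<noteq> \<infinity>" and g: "g \<in> borel_measurable (nu a)"
  shows "(\<integral>\<^sup>+x. g x * ennreal (qm q a x) \<partial>nu a) = (\<integral>\<^sup>+w. g (arm_proj a w) * ennreal (q w) \<partial>muW)"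
proof -
  have "(\<integral>\<^sup>+x. qmarg_nn q a x \<partial>nu a) = (\<integral>\<^sup>+w. ennreal (q w) \<partial>muW)"
    using nn_integral_arm_proj[of "\<lambda>_. 1" a] by simp
  then have "AE x in nu a. qmarg_nn q a x \<noteq> \<infinity>"
    using fin by (intro nn_integral_PInf_AE borel_measurable_qmarg_nn) simp
  then have "(\<integral>\<^sup>+x. g x * ennreal (qm q a x) \<partial>nu a) = (\<integral>\<^sup>+x. g x * qmarg_nn q a x \<partial>nu a)"
    by (intro nn_integral_cong_AE)
      (auto elim!: eventually_mono simp: qmarg_eq_enn2real ennreal_enn2real_if)
  then show ?thesis by (simp add: nn_integral_arm_proj[OF g])
qed

text \<open>Both arms carry the same \<open>Z\<close>-marginal: Tonelli in the order \<open>(Y(0), Y(1))\<close> and in the order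
  \<open>(Y(1), Y(0))\<close>.\<close>

lemma AE_fibre_masses_agree:
  assumes fin: "(\<integral>\<^sup>+w. ennreal (q w) \<partial>muW) \<noteq> \<infinity>"
  shows "AE z in muZ. (\<integral>\<^sup>+y. ennreal (qm q True (y, z)) \<partial>mu1)
      = (\<integral>\<^sup>+y. ennreal (qm q False (y, z)) \<partial>mu0)
      \<and> (\<integral>\<^sup>+y. ennreal (qm q True (y, z)) \<partial>mu1) \<noteq> \<infinity>"
proof -
  interpret M0: sigma_finite_measure mu0 by (rule sigma_finite_mu0)
  interpret M1: sigma_finite_measure mu1 by (rule sigma_finite_mu1)
  interpret P01: pair_sigma_finite mu0 mu1
    by (simp add: pair_sigma_finite_def sigma_finite_mu0 sigma_finite_mu1)
  define J1 where "J1 z = (\<integral>\<^sup>+y1. (\<integral>\<^sup>+y0. ennreal (q (y0, y1, z)) \<partial>mu0) \<partial>mu1)" for z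
  define J0 where "J0 z = (\<integral>\<^sup>+y0. (\<integral>\<^sup>+y1. ennreal (q (y0, y1, z)) \<partial>mu1) \<partial>mu0)" for z
  have J: "J1 z = J0 z" for z
  proof -
    have "case_prod (\<lambda>y0 y1. ennreal (q (y0, y1, z))) \<in> borel_measurable (mu0 \<Otimes>\<^sub>M mu1)"
      by measurable
    then show ?thesis unfolding J1_def J0_def by (rule P01.Fubini')
  qed
  have J1m: "J1 \<in> borel_measurable muZ" unfolding J1_def by measurable
  have "(\<integral>\<^sup>+z. J1 z \<partial>muZ) = (\<integral>\<^sup>+w. ennreal (q w) \<partial>muW)"
    using nn_integral_muW_integrate_Y0[of "\<lambda>w. ennreal (q w)"]
      nn_integral_nu_fibres[OF borel_measurable_qmarg_nn[of True]]
    by (simp add: J1_def muY_def qmarg_nn_def)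
  then have AEf: "AE z in muZ. J1 z \<noteq> \<infinity>"
    using fin by (intro nn_integral_PInf_AE J1m) simp
  have e1: "(\<integral>\<^sup>+y. ennreal (qm q True (y, z)) \<partial>mu1) = J1 z" if "J1 z \<noteq> \<infinity>" for z
  proof -
    have "AE y1 in mu1. (\<integral>\<^sup>+y0. ennreal (q (y0, y1, z)) \<partial>mu0) \<noteq> \<infinity>"
      using that unfolding J1_def by (intro nn_integral_PInf_AE) simp_all
    then show ?thesis unfolding J1_def qmarg_True
      by (intro nn_integral_cong_AE) (auto elim!: eventually_mono simp: ennreal_enn2real_if)
  qed
  have e0: "(\<integral>\<^sup>+y. ennreal (qm q False (y, z)) \<partial>mu0) = J0 z" if "J0 z \<noteq> \<infinity>" for z
  proof -
    have "AE y0 in mu0. (\<integral>\<^sup>+y1. ennreal (q (y0, y1, z)) \<partial>mu1) \<noteq> \<infinity>"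
      using that unfolding J0_def by (intro nn_integral_PInf_AE) simp_all
    then show ?thesis unfolding J0_def qmarg_False
      by (intro nn_integral_cong_AE) (auto elim!: eventually_mono simp: ennreal_enn2real_if)
  qed
  show ?thesis using AEf by eventually_elim (use e1 e0 J in simp)
qed

end

lemma QfamD:
  assumes "q \<in> Qfam mu0 mu1 muZ"
  shows "q \<in> borel_measurable muW" "\<And>w. 0 \<le> q w" "(\<integral>\<^sup>+w. ennreal (q w) \<partial>muW) = 1"
  using assms by (auto simp: Qfam_def)

context
  fixes q :: "real \<times> real \<times> (real^'k) \<Rightarrow> real"
  assumes q: "q \<in> Qfam mu0 mu1 muZ"
begin

lemma Qfam_borel_measurable_qmarg: "qm q a \<in> borel_measurable (nu a)"
  by (rule borel_measurable_qmarg[OF QfamD(1)[OF q]])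

lemma Qfam_nn_integral_qmarg: "(\<integral>\<^sup>+x. ennreal (qm q a x) \<partial>nu a) = 1"
  using nn_integral_qmarg_eq[OF QfamD(1)[OF q], of "\<lambda>_. 1" a] QfamD(3)[OF q] by simp

lemma Qfam_integrable_qmarg: "integrable (nu a) (qm q a)"
  using Qfam_nn_integral_qmarg Qfam_borel_measurable_qmarg
  by (intro integrableI_nonneg) (auto simp: qmarg_nonneg)

lemma Qfam_integral_qmarg: "(\<integral>x. qm q a x \<partial>nu a) = 1"
  using Qfam_nn_integral_qmarg[of a] Qfam_integrable_qmarg[of a]
  by (subst (asm) nn_integral_eq_integral) (auto simp: qmarg_nonneg)

lemma Qfam_AE_fibre_integrals:
  "AE z in muZ. integrable mu1 (\<lambda>y. qm q True (y, z)) \<and> integrable mu0 (\<lambda>y. qm q False (y, z))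
     \<and> (\<integral>y. qm q True (y, z) \<partial>mu1) = (\<integral>y. qm q False (y, z) \<partial>mu0)"
proof -
  have "(\<integral>\<^sup>+w. ennreal (q w) \<partial>muW) \<noteq> \<infinity>" using QfamD(3)[OF q] by simp
  from AE_fibre_masses_agree[OF QfamD(1)[OF q] this] show ?thesis
  proof eventually_elim
    case (elim z)
    have m: "(\<lambda>y. qm q a (y, z)) \<in> borel_measurable (muY a)" for a
      by (rule measurable_fibre[OF Qfam_borel_measurable_qmarg])
    have i1: "integrable mu1 (\<lambda>y. qm q True (y, z))"
      using elim m[of True] by (intro integrableI_nonneg) (auto simp: qmarg_nonneg less_top muY_simps)
    have i0: "integrable mu0 (\<lambda>y. qm q False (y, z))"
      using elim m[of False] by (intro integrableI_nonneg) (auto simp: qmarg_nonneg less_top muY_simps)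
    have "ennreal (\<integral>y. qm q True (y, z) \<partial>mu1) = ennreal (\<integral>y. qm q False (y, z) \<partial>mu0)"
      using elim i1 i0 by (subst (1 2) nn_integral_eq_integral[symmetric]) (auto simp: qmarg_nonneg)
    then show ?case using i1 i0 by (subst (asm) ennreal_inj) (auto simp: qmarg_nonneg)
  qed
qed

end

end

section \<open>The space \<open>L\<^sub>2(P\<^sub>0)\<close> and the conditions (a) and (b)\<close>

lemma lin_span_base: "f \<in> A \<Longrightarrow> f \<in> lin_span A"
  unfolding lin_span_def by (rule CollectI, rule exI[of _ 1],
      rule exI[of _ "\<lambda>_. 1"], rule exI[of _ "\<lambda>_. f"]) simp

lemma lin_span_zero: "(\<lambda>w. 0) \<in> lin_span A"
  unfolding lin_span_def by (rule CollectI, rule exI[of _ 0]) simp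

locale stratified_design = potential_outcomes mu0 mu1 muZ
  for mu0 mu1 :: "real measure" and muZ :: "(real^'k) measure" +
  fixes S :: "(real^'k) \<Rightarrow> nat" and nS :: nat and ppi :: "nat \<Rightarrow> real"
    and q0 :: "real \<times> real \<times> (real^'k) \<Rightarrow> real"
  assumes S_measurable: "S \<in> measurable muZ (count_space UNIV)"
    and S_range: "\<forall>z. S z \<in> {1..nS}"
    and ppi_bounds: "\<forall>s\<in>{1..nS}. 0 < ppi s \<and> ppi s < 1"
    and q0_Qfam: "q0 \<in> Qfam mu0 mu1 muZ"
begin

abbreviation pwz where "pwz a z \<equiv> pw ppi S a z"
abbreviation on_arm :: "(real \<times> bool \<times> (real^'k) \<Rightarrow> real) \<Rightarrow> bool \<Rightarrow> real \<times> (real^'k) \<Rightarrow> real" where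
  "on_arm h a \<equiv> (\<lambda>x. h (fst x, a, snd x))"
abbreviation Pnn0 where "Pnn0 \<equiv> Pnn mu0 mu1 muZ ppi S q0"
abbreviation L2P0 where "L2P0 \<equiv> L2P mu0 mu1 muZ ppi S q0"

definition pmin :: real where
  "pmin = Min ((\<lambda>s. min (ppi s) (1 - ppi s)) ` {1..nS})"

lemma pmin_pos: "0 < pmin"
proof -
  have "1 \<le> nS" using S_range by auto
  then show ?thesis unfolding pmin_def using ppi_bounds by (subst Min_gr_iff) auto
qed

lemma pmin_le_pw: "pmin \<le> pwz a z"
proof -
  have "S z \<in> {1..nS}" using S_range by auto
  then have "pmin \<le> min (ppi (S z)) (1 - ppi (S z))" unfolding pmin_def by (intro Min_le) auto
  then show ?thesis by (auto simp: pw_def)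
qed

lemma pw_le_1: "pwz a z \<le> 1"
proof -
  have "0 < ppi (S z) \<and> ppi (S z) < 1" using S_range ppi_bounds by blast
  then show ?thesis by (auto simp: pw_def)
qed

lemma pw_pos: "0 < pwz a z" using pmin_le_pw[of a z] pmin_pos by linarith

lemma borel_measurable_pw[measurable]: "pwz a \<in> borel_measurable muZ"
proof -
  have "(\<lambda>z. (\<lambda>s. if a then ppi s else 1 - ppi s) (S z)) \<in> borel_measurable muZ"
    by (rule measurable_compose[OF S_measurable]) simp
  then show ?thesis by (simp add: pw_def[abs_def])
qed

lemma borel_measurable_pw_nu: "(\<lambda>x. pwz a (snd x)) \<in> borel_measurable (nu a)"
  by measurable

lemma borel_measurable_q0[measurable]: "qm q0 a \<in> borel_measurable (nu a)"
  by (rule Qfam_borel_measurable_qmarg[OF q0_Qfam])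

lemma integrable_q0: "integrable (nu a) (qm q0 a)"
  by (rule Qfam_integrable_qmarg[OF q0_Qfam])

lemma integral_q0: "(\<integral>x. qm q0 a x \<partial>nu a) = 1"
  by (rule Qfam_integral_qmarg[OF q0_Qfam])

definition Parm :: "bool \<Rightarrow> (real \<times> bool \<times> (real^'k) \<Rightarrow> real) \<Rightarrow> ennreal" where
  "Parm a f = (\<integral>\<^sup>+ x. ennreal (f (fst x, a, snd x) * qm q0 a x * pwz a (snd x)) \<partial>nu a)"

lemma Pnn_eq_Parm: "Pnn0 f = Parm False f + Parm True f"
  by (simp add: Pnn_def Parm_def UNIV_bool)

lemma Parm_le_Pnn: "Parm a f \<le> Pnn0 f"
  by (cases a) (simp_all add: Pnn_eq_Parm)

lemma Parm_le:
  assumes "\<And>w. 0 \<le> f w"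
  shows "Parm a f \<le> (\<integral>\<^sup>+ x. ennreal (f (fst x, a, snd x) * qm q0 a x) \<partial>nu a)"
  unfolding Parm_def
proof (intro nn_integral_mono ennreal_leI)
  fix x
  have "0 \<le> f (fst x, a, snd x) * qm q0 a x" by (intro mult_nonneg_nonneg assms qmarg_nonneg)
  then show "f (fst x, a, snd x) * qm q0 a x * pwz a (snd x) \<le> f (fst x, a, snd x) * qm q0 a x"
    using pw_le_1[of a "snd x"] by (simp add: mult_left_le)
qed

lemma Parm_ge:
  assumes "\<And>w. 0 \<le> f w" and [measurable]: "on_arm f a \<in> borel_measurable (nu a)"
  shows "ennreal pmin * (\<integral>\<^sup>+ x. ennreal (f (fst x, a, snd x) * qm q0 a x) \<partial>nu a) \<le> Parm a f"
proof -
  have F0: "0 \<le> f (fst x, a, snd x) * qm q0 a x" for x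
      by (intro mult_nonneg_nonneg assms(1) qmarg_nonneg)
  have "ennreal pmin * (\<integral>\<^sup>+ x. ennreal (f (fst x, a, snd x) * qm q0 a x) \<partial>nu a)
      = (\<integral>\<^sup>+ x. ennreal (pmin * (f (fst x, a, snd x) * qm q0 a x)) \<partial>nu a)"
    using pmin_pos F0 by (subst nn_integral_cmult[symmetric]) (auto simp: ennreal_mult)
  also have "\<dots> \<le> Parm a f" unfolding Parm_def
    using F0 pmin_le_pw by (intro nn_integral_mono ennreal_leI) (simp add: mult_right_mono mult.commute)
  finally show ?thesis .
qed

lemma Parm_cong_AE_support:
  assumes "AE x in nu a. qm q0 a x \<noteq> 0 \<longrightarrow> f (fst x, a, snd x) = g (fst x, a, snd x)"
  shows "Parm a f = Parm a g"
  unfolding Parm_def using assms by (intro nn_integral_cong_AE) (auto elim!: eventually_mono)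

lemma
  fixes f :: "real \<times> (real^'k) \<Rightarrow> real"
  assumes [measurable]: "f \<in> borel_measurable (nu a)"
    and i2: "integrable (nu a) (\<lambda>x. (f x)^2 * qm q0 a x)"
  shows integrable_mult_q0: "integrable (nu a) (\<lambda>x. f x * qm q0 a x)"
    and integral_mult_q0_sq_le: "(\<integral>x. f x * qm q0 a x \<partial>nu a)^2 \<le> (\<integral>x. (f x)^2 * qm q0 a x \<partial>nu a)"
  using weighted_Cauchy_Schwarz[of f "nu a" "qm q0 a", OF _ qmarg_nonneg integrable_q0 i2] integral_q0
  by simp_all

lemma L2P_iff:
  "h \<in> L2P0 \<longleftrightarrow> (\<forall>a. on_arm h a \<in> borel_measurable (nu a) \<and>
       integrable (nu a) (\<lambda>x. (on_arm h a x)^2 * qm q0 a x))"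
proof (intro iffI allI conjI)
  fix a assume h: "h \<in> L2P0"
  then show hm: "on_arm h a \<in> borel_measurable (nu a)" by (simp add: L2P_def)
  have "Pnn0 (\<lambda>w. (h w)^2) < \<infinity>" using h by (simp add: L2P_def)
  then have "ennreal pmin * (\<integral>\<^sup>+ x. ennreal ((on_arm h a x)^2 * qm q0 a x) \<partial>nu a) < \<infinity>"
    using Parm_ge[of "\<lambda>w. (h w)^2" a] Parm_le_Pnn[of a "\<lambda>w. (h w)^2"] hm by simp
  then have "(\<integral>\<^sup>+ x. ennreal ((on_arm h a x)^2 * qm q0 a x) \<partial>nu a) < \<infinity>"
    using pmin_pos by (auto simp add: ennreal_mult_less_top)
  then show "integrable (nu a) (\<lambda>x. (on_arm h a x)^2 * qm q0 a x)"
    using hm by (intro integrableI_nonneg) (auto simp: qmarg_nonneg)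
next
  assume A: "\<forall>a. on_arm h a \<in> borel_measurable (nu a)
      \<and> integrable (nu a) (\<lambda>x. (on_arm h a x)^2 * qm q0 a x)"
  have "Parm a (\<lambda>w. (h w)^2) < \<infinity>" for a
  proof -
    have "Parm a (\<lambda>w. (h w)^2) \<le> (\<integral>\<^sup>+ x. ennreal ((on_arm h a x)^2 * qm q0 a x) \<partial>nu a)"
      by (rule Parm_le) simp
    also have "\<dots> = ennreal (\<integral>x. (on_arm h a x)^2 * qm q0 a x \<partial>nu a)"
      using A by (intro nn_integral_eq_integral) (auto intro!: mult_nonneg_nonneg qmarg_nonneg)
    also have "\<dots> < \<infinity>" by simp
    finally show ?thesis .
  qed
  then show "h \<in> L2P0" using A by (simp add: L2P_def Pnn_eq_Parm)
qed

lemma L2P_borel_measurable: "h \<in> L2P0 \<Longrightarrow> on_arm h a \<in> borel_measurable (nu a)"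
  by (simp add: L2P_iff)

lemma L2P_integrable_sq: "h \<in> L2P0 \<Longrightarrow> integrable (nu a) (\<lambda>x. (on_arm h a x)^2 * qm q0 a x)"
  by (simp add: L2P_iff)

lemma L2P_integrable: "h \<in> L2P0 \<Longrightarrow> integrable (nu a) (\<lambda>x. on_arm h a x * qm q0 a x)"
  by (rule integrable_mult_q0[OF L2P_borel_measurable L2P_integrable_sq])

lemma L2P_AE_integrable_fibre:
  "h \<in> L2P0 \<Longrightarrow> AE z in muZ. integrable (muY a) (\<lambda>y. h (y, a, z) * qm q0 a (y, z))"
  using AE_integrable_fibre[OF L2P_integrable] by simp

lemma L2P_lincomb:
  assumes f: "f \<in> L2P0" and g: "g \<in> L2P0"
  shows "(\<lambda>w. c * f w + d * g w) \<in> L2P0"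
  unfolding L2P_iff
proof (intro allI conjI)
  fix a
  have [measurable]: "on_arm f a \<in> borel_measurable (nu a)" "on_arm g a \<in> borel_measurable (nu a)"
    using f g by (simp_all add: L2P_borel_measurable)
  show "on_arm (\<lambda>w. c * f w + d * g w) a \<in> borel_measurable (nu a)" by measurable
  have bi: "integrable (nu a) (\<lambda>x. 2 * c^2 * ((on_arm f a x)^2 * qm q0 a x)
      + 2 * d^2 * ((on_arm g a x)^2 * qm q0 a x))"
    using f g by (simp add: L2P_integrable_sq)
  show "integrable (nu a) (\<lambda>x. (on_arm (\<lambda>w. c * f w + d * g w) a x)^2 * qm q0 a x)"
  proof (rule Bochner_Integration.integrable_bound[OF bi])
    show "(\<lambda>x. (on_arm (\<lambda>w. c * f w + d * g w) a x)^2 * qm q0 a x) \<in> borel_measurable (nu a)"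
      by measurable
    show "AE x in nu a. norm ((on_arm (\<lambda>w. c * f w + d * g w) a x)^2 * qm q0 a x)
        \<le> norm (2 * c^2 * ((on_arm f a x)^2 * qm q0 a x)
            + 2 * d^2 * ((on_arm g a x)^2 * qm q0 a x))"
    proof (intro AE_I2)
      fix x
      let ?u = "on_arm f a x" and ?v = "on_arm g a x" and ?q = "qm q0 a x"
      have "0 \<le> (c * ?u - d * ?v)^2" by simp
      then have "(c * ?u + d * ?v)^2 \<le> 2 * c^2 * ?u^2 + 2 * d^2 * ?v^2"
        by (simp add: power2_eq_square algebra_simps)
      then have "(c * ?u + d * ?v)^2 * ?q \<le> (2 * c^2 * ?u^2 + 2 * d^2 * ?v^2) * ?q"
        by (rule mult_right_mono[OF _ qmarg_nonneg])
      then show "norm ((on_arm (\<lambda>w. c * f w + d * g w) a x)^2 * ?q)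
          \<le> norm (2 * c^2 * (?u^2 * ?q) + 2 * d^2 * (?v^2 * ?q))"
        using qmarg_nonneg[of q0 a x] by (simp add: algebra_simps)
    qed
  qed
qed

lemma L2P_diff: "f \<in> L2P0 \<Longrightarrow> g \<in> L2P0 \<Longrightarrow> (\<lambda>w. f w - g w) \<in> L2P0"
  using L2P_lincomb[of f g 1 "-1"] by simp

lemma integral_abs_q0_le_of_Pnn:
  assumes d: "d \<in> L2P0" and eps: "0 < eps" and P: "Pnn0 (\<lambda>w. (d w)^2) < ennreal (pmin * eps^2)"
  shows "(\<integral>x. \<bar>on_arm d a x\<bar> * qm q0 a x \<partial>nu a) \<le> eps"
proof -
  have i: "integrable (nu a) (\<lambda>x. (on_arm d a x)^2 * qm q0 a x)" by (rule L2P_integrable_sq[OF d])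
  have I0: "0 \<le> (\<integral>x. (on_arm d a x)^2 * qm q0 a x \<partial>nu a)" by (simp add: qmarg_nonneg)
  have "ennreal pmin * (\<integral>\<^sup>+ x. ennreal ((on_arm d a x)^2 * qm q0 a x) \<partial>nu a)
      < ennreal (pmin * eps^2)"
    using Parm_ge[of "\<lambda>w. (d w)^2" a] Parm_le_Pnn[of a "\<lambda>w. (d w)^2"] P L2P_borel_measurable[OF d]
    by (auto intro: order.strict_trans1)
  also have "(\<integral>\<^sup>+ x. ennreal ((on_arm d a x)^2 * qm q0 a x) \<partial>nu a)
      = ennreal (\<integral>x. (on_arm d a x)^2 * qm q0 a x \<partial>nu a)"
    using i by (intro nn_integral_eq_integral) (auto intro!: mult_nonneg_nonneg qmarg_nonneg)
  finally have "pmin * (\<integral>x. (on_arm d a x)^2 * qm q0 a x \<partial>nu a) < pmin * eps^2"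
    using I0 pmin_pos by (simp add: ennreal_mult[symmetric] ennreal_less_iff)
  then have "(\<integral>x. (\<bar>on_arm d a x\<bar>)^2 * qm q0 a x \<partial>nu a) \<le> eps^2" using pmin_pos by simp
  moreover have "(\<lambda>x. \<bar>on_arm d a x\<bar>) \<in> borel_measurable (nu a)" using L2P_borel_measurable[OF d]
      by measurable
  from integral_mult_q0_sq_le[OF this]
  have "(\<integral>x. \<bar>on_arm d a x\<bar> * qm q0 a x \<partial>nu a)^2 \<le> (\<integral>x. (\<bar>on_arm d a x\<bar>)^2 * qm q0 a x \<partial>nu a)"
    using i by simp
  ultimately show ?thesis using eps by (smt (verit) power2_le_imp_le)
qed

definition centered_compatible :: "(real \<times> bool \<times> (real^'k) \<Rightarrow> real) set" where
  "centered_compatible = {h \<in> L2P0.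
       (\<forall>a. (\<integral> x. h (fst x, a, snd x) * qmarg mu0 mu1 q0 a x \<partial>nuM mu0 mu1 muZ a) = 0) \<and>
       (AE z in muZ. (\<integral> y. h (y, True, z) * qmarg mu0 mu1 q0 True (y, z) \<partial>mu1)
                   = (\<integral> y. h (y, False, z) * qmarg mu0 mu1 q0 False (y, z) \<partial>mu0))}"

lemma centered_compatibleD:
  assumes "h \<in> centered_compatible"
  shows "h \<in> L2P0" "(\<integral> x. on_arm h a x * qm q0 a x \<partial>nu a) = 0"
    "AE z in muZ. (\<integral> y. h (y, True, z) * qm q0 True (y, z) \<partial>mu1)
                = (\<integral> y. h (y, False, z) * qm q0 False (y, z) \<partial>mu0)"
  using assms by (simp_all add: centered_compatible_def)

lemma centered_compatible_lincomb:
  assumes f: "f \<in> centered_compatible" and g: "g \<in> centered_compatible"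
  shows "(\<lambda>w. c * f w + d * g w) \<in> centered_compatible"
proof -
  note fL = centered_compatibleD(1)[OF f] and gL = centered_compatibleD(1)[OF g]
  have A: "(\<integral> x. (c * f (fst x, a, snd x) + d * g (fst x, a, snd x)) * qm q0 a x \<partial>nu a) = 0" for a
  proof -
    have "(\<integral> x. (c * f (fst x, a, snd x) + d * g (fst x, a, snd x)) * qm q0 a x \<partial>nu a)
        = (\<integral> x. c * (on_arm f a x * qm q0 a x) + d * (on_arm g a x * qm q0 a x) \<partial>nu a)"
      by (simp add: algebra_simps)
    also have "\<dots> = c * (\<integral> x. on_arm f a x * qm q0 a x \<partial>nu a)
        + d * (\<integral> x. on_arm g a x * qm q0 a x \<partial>nu a)"
      using L2P_integrable[OF fL] L2P_integrable[OF gL] by simp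
    finally show ?thesis using centered_compatibleD(2)[OF f] centered_compatibleD(2)[OF g] by simp
  qed
  have B: "AE z in muZ. (\<integral> y. (c * f (y, True, z) + d * g (y, True, z)) * qm q0 True (y, z) \<partial>mu1)
       = (\<integral> y. (c * f (y, False, z) + d * g (y, False, z)) * qm q0 False (y, z) \<partial>mu0)"
    using L2P_AE_integrable_fibre[OF fL, of True] L2P_AE_integrable_fibre[OF fL, of False]
      L2P_AE_integrable_fibre[OF gL, of True] L2P_AE_integrable_fibre[OF gL, of False]
      centered_compatibleD(3)[OF f] centered_compatibleD(3)[OF g]
    by eventually_elim (simp add: muY_simps algebra_simps)
  show ?thesis using L2P_lincomb[OF fL gL] A B by (simp add: centered_compatible_def)
qed

lemma zero_in_centered_compatible: "(\<lambda>w. 0) \<in> centered_compatible"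
  by (simp add: centered_compatible_def L2P_iff)

lemma lin_span_subset_centered_compatible:
  assumes "A \<subseteq> centered_compatible"
  shows "lin_span A \<subseteq> centered_compatible"
proof
  fix g assume "g \<in> lin_span A"
  then obtain n :: nat and c f where f: "\<forall>i<n. f i \<in> A" and g: "g = (\<lambda>w. \<Sum>i<n. c i * f i w)"
    by (auto simp: lin_span_def)
  have "(\<lambda>w. \<Sum>i<m. c i * f i w) \<in> centered_compatible" if "m \<le> n" for m
    using that
  proof (induction m)
    case 0
    then show ?case using zero_in_centered_compatible by simp
  next
    case (Suc m)
    have "(\<lambda>w. 1 * (\<Sum>i<m. c i * f i w) + c m * f m w) \<in> centered_compatible"
      using Suc f assms by (intro centered_compatible_lincomb) auto
    then show ?case by simp
  qed
  then show "g \<in> centered_compatible" using g by simp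
qed

text \<open>Closedness: \<open>P\<^sub>0\<close>-approximation controls the \<open>L\<^sub>1(q\<^sub>0)\<close> distance on each arm, which in turn
  controls both the means (a) and, after integrating out \<open>Y\<close>, the fibre means (b).\<close>

context
  fixes h assumes h: "h \<in> L2P0"
    and near: "\<And>eps. 0 < eps \<Longrightarrow> \<exists>g\<in>centered_compatible.
      \<forall>a. (\<integral>x. \<bar>on_arm (\<lambda>w. h w - g w) a x\<bar> * qm q0 a x \<partial>nu a) \<le> eps"
begin

lemma centered_of_L1_approx: "(\<integral> x. on_arm h a x * qm q0 a x \<partial>nu a) = 0"
proof -
  have "\<bar>\<integral> x. on_arm h a x * qm q0 a x \<partial>nu a\<bar> \<le> 0 + eps" if eps: "0 < eps" for eps
  proof -
    obtain g where g: "g \<in> centered_compatible"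
      and d: "(\<integral>x. \<bar>on_arm (\<lambda>w. h w - g w) a x\<bar> * qm q0 a x \<partial>nu a) \<le> eps"
      using near[OF eps] by blast
    have "(\<integral> x. on_arm (\<lambda>w. h w - g w) a x * qm q0 a x \<partial>nu a)
        = (\<integral> x. on_arm h a x * qm q0 a x \<partial>nu a) - (\<integral> x. on_arm g a x * qm q0 a x \<partial>nu a)"
      using L2P_integrable[OF h] L2P_integrable[OF centered_compatibleD(1)[OF g]]
      by (simp add: left_diff_distrib)
    then have "(\<integral> x. on_arm h a x * qm q0 a x \<partial>nu a)
        = (\<integral> x. on_arm (\<lambda>w. h w - g w) a x * qm q0 a x \<partial>nu a)"
      using centered_compatibleD(2)[OF g] by simp
    moreover have "\<bar>\<integral> x. on_arm (\<lambda>w. h w - g w) a x * qm q0 a x \<partial>nu a\<bar>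
        \<le> (\<integral>x. \<bar>on_arm (\<lambda>w. h w - g w) a x\<bar> * qm q0 a x \<partial>nu a)"
      using integral_abs_bound[of "nu a" "\<lambda>x. on_arm (\<lambda>w. h w - g w) a x * qm q0 a x"]
      by (simp add: abs_mult qmarg_nonneg)
    ultimately show ?thesis using d by simp
  qed
  then have "\<bar>\<integral> x. on_arm h a x * qm q0 a x \<partial>nu a\<bar> \<le> 0" by (rule field_le_epsilon)
  then show ?thesis by simp
qed

lemma compatible_of_L1_approx:
  "AE z in muZ. (\<integral> y. h (y, True, z) * qm q0 True (y, z) \<partial>mu1)
    = (\<integral> y. h (y, False, z) * qm q0 False (y, z) \<partial>mu0)"
proof -
  define Delta where "Delta f z = (\<integral> y. f (y, True, z) * qm q0 True (y, z) \<partial>mu1)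
    - (\<integral> y. f (y, False, z) * qm q0 False (y, z) \<partial>mu0)" for f z
  have "AE z in muZ. Delta h z = 0"
  proof (rule AE_zero_if_nn_integral_abs_arbitrarily_small)
    have "(\<lambda>z. \<integral>y. h (y, a, z) * qm q0 a (y, z) \<partial>muY a) \<in> borel_measurable muZ" for a
      using borel_measurable_fibre_integral[OF borel_measurable_integrable[OF L2P_integrable[OF h]]]
      by simp
    from this[of True] this[of False] show "Delta h \<in> borel_measurable muZ"
      by (simp add: Delta_def[abs_def] muY_simps)
    fix e :: real assume e: "0 < e"
    obtain g where g: "g \<in> centered_compatible"
      and d: "\<And>a. (\<integral>x. \<bar>on_arm (\<lambda>w. h w - g w) a x\<bar> * qm q0 a x \<partial>nu a) \<le> e / 2"
      using near[of "e / 2"] e by auto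
    note gL = centered_compatibleD(1)[OF g] and dL = L2P_diff[OF h centered_compatibleD(1)[OF g]]
    have "AE z in muZ. Delta h z = Delta (\<lambda>w. h w - g w) z"
      using L2P_AE_integrable_fibre[OF h, of True] L2P_AE_integrable_fibre[OF h, of False]
        L2P_AE_integrable_fibre[OF gL, of True] L2P_AE_integrable_fibre[OF gL, of False]
        centered_compatibleD(3)[OF g]
      by eventually_elim (simp add: Delta_def muY_simps left_diff_distrib)
    then have "(\<integral>\<^sup>+z. ennreal \<bar>Delta h z\<bar> \<partial>muZ) = (\<integral>\<^sup>+z. ennreal \<bar>Delta (\<lambda>w. h w - g w) z\<bar> \<partial>muZ)"
      by (intro nn_integral_cong_AE) (auto elim!: eventually_mono)
    also have "\<dots> \<le> ennreal (\<integral>x. \<bar>on_arm (\<lambda>w. h w - g w) True x * qm q0 True x\<bar> \<partial>nu True)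
        + ennreal (\<integral>x. \<bar>on_arm (\<lambda>w. h w - g w) False x * qm q0 False x\<bar> \<partial>nu False)"
      using nn_integral_fibre_difference_le[OF L2P_integrable[OF dL] L2P_integrable[OF dL]]
      by (simp add: Delta_def)
    also have "\<dots> \<le> ennreal (e / 2) + ennreal (e / 2)"
      using d by (intro add_mono ennreal_leI) (simp_all add: abs_mult qmarg_nonneg)
    finally show "(\<integral>\<^sup>+z. ennreal \<bar>Delta h z\<bar> \<partial>muZ) \<le> ennreal e"
      using e by (simp add: ennreal_plus[symmetric] del: ennreal_plus)
  qed
  then show ?thesis by (simp add: Delta_def)
qed

end

lemma centered_compatible_closed:
  assumes h: "h \<in> L2P0"
    and approx: "\<And>e. e > 0 \<Longrightarrow> \<exists>g\<in>centered_compatible. Pnn0 (\<lambda>w. (h w - g w)^2) < ennreal e"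
  shows "h \<in> centered_compatible"
proof -
  have near: "\<exists>g\<in>centered_compatible. \<forall>a. (\<integral>x. \<bar>on_arm (\<lambda>w. h w - g w) a x\<bar> * qm q0 a x \<partial>nu a)
      \<le> eps"
    if eps: "0 < eps" for eps
  proof -
    obtain g where g: "g \<in> centered_compatible"
      and P: "Pnn0 (\<lambda>w. (h w - g w)^2) < ennreal (pmin * eps^2)"
      using approx[of "pmin * eps^2"] pmin_pos eps by auto
    show ?thesis using integral_abs_q0_le_of_Pnn[OF L2P_diff[OF h centered_compatibleD(1)[OF g]] eps P] g
      by blast
  qed
  show ?thesis
    using h centered_of_L1_approx[OF h near] compatible_of_L1_approx[OF h near]
    by (simp add: centered_compatible_def)
qed

end

section \<open>Scores of regular submodels satisfy (a) and (b)\<close>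

lemma normd_axis:
  assumes "j < d"
  shows "normd d (\<lambda>i. if i = j then t else 0) = \<bar>t\<bar>"
proof -
  have "(\<Sum>i<d. (if i = j then t else 0)^2) = (\<Sum>i<d. if i = j then t^2 else 0)"
    by (intro sum.cong) auto
  then have "(\<Sum>i<d. (if i = j then t else 0)^2) = t^2" using assms by simp
  then show ?thesis by (simp add: normd_def)
qed

context stratified_design
begin

lemma score_mult_q0:
  "score mu0 mu1 q0 D j (y, a, z) * qm q0 a (y, z) = 2 * D a j (y, z) * sqrt (qm q0 a (y, z))"
proof (cases "0 < qm q0 a (y, z)")
  case True
  then show ?thesis by (simp add: score_def field_simps)
next
  case False
  then have "qm q0 a (y, z) = 0" using qmarg_nonneg[of q0 a "(y, z)"] by simp
  then show ?thesis by (simp add: score_def)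
qed

lemma score_sq_mult_q0_le: "(score mu0 mu1 q0 D j (y, a, z))^2 * qm q0 a (y, z)
    \<le> 4 * (D a j (y, z))^2"
  by (cases "0 < qm q0 a (y, z)") (simp_all add: score_def power_divide power_mult_distrib)

lemma score_L2P:
  assumes Dm: "\<And>a. D a j \<in> borel_measurable (nu a)" and Di: "\<And>a. integrable (nu a) (\<lambda>x. (D a j x)^2)"
  shows "score mu0 mu1 q0 D j \<in> L2P0"
  unfolding L2P_iff
proof (intro allI conjI)
  fix a
  note Dm[measurable]
  have "on_arm (score mu0 mu1 q0 D j) a = (\<lambda>x. if 0
      < qm q0 a x then 2 * D a j x / sqrt (qm q0 a x) else 0)"
    by (auto simp: score_def)
  then show m: "on_arm (score mu0 mu1 q0 D j) a \<in> borel_measurable (nu a)" by simp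
  show "integrable (nu a) (\<lambda>x. (on_arm (score mu0 mu1 q0 D j) a x)^2 * qm q0 a x)"
  proof (rule Bochner_Integration.integrable_bound[where f="\<lambda>x. 4 * (D a j x)^2"])
    show "integrable (nu a) (\<lambda>x. 4 * (D a j x)^2)" using Di by simp
    show "(\<lambda>x. (on_arm (score mu0 mu1 q0 D j) a x)^2 * qm q0 a x) \<in> borel_measurable (nu a)"
      using m by measurable
    show "AE x in nu a. norm ((on_arm (score mu0 mu1 q0 D j) a x)^2 * qm q0 a x)
        \<le> norm (4 * (D a j x)^2)"
    proof (intro AE_I2)
      fix x :: "real \<times> (real^'k)"
      obtain y z where x: "x = (y, z)" by (cases x)
      show "norm ((on_arm (score mu0 mu1 q0 D j) a x)^2 * qm q0 a x) \<le> norm (4 * (D a j x)^2)"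
        using score_sq_mult_q0_le[of D j y a z] qmarg_nonneg[of q0 a x] by (simp add: x)
    qed
  qed
qed

lemma regular_submodel_derivD:
  assumes "regular_submodel mu0 mu1 muZ ppi S q0 d Theta th0 qth D" and "j < d"
  shows "D a j \<in> borel_measurable (nu a)" "integrable (nu a) (\<lambda>x. (D a j x)^2)"
proof -
  have m: "D a j \<in> borel_measurable (nu a)" and f: "(\<integral>\<^sup>+ x. ennreal ((D a j x)\<^sup>2) \<partial>nu a) < \<infinity>"
    using assms unfolding regular_submodel_def by blast+
  show "D a j \<in> borel_measurable (nu a)" by (rule m)
  show "integrable (nu a) (\<lambda>x. (D a j x)^2)" using m f by (intro integrableI_nonneg) auto
qed

lemma integrable_mult_sqrt_q0:
  assumes [measurable]: "f \<in> borel_measurable (nu a)" and fi: "integrable (nu a) (\<lambda>x. (f x)^2)"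
  shows "integrable (nu a) (\<lambda>x. f x * sqrt (qm q0 a x))"
proof (rule Bochner_Integration.integrable_bound[where f="\<lambda>x. (f x)^2 / 2 + qm q0 a x / 2"])
  show "integrable (nu a) (\<lambda>x. (f x)^2 / 2 + qm q0 a x / 2)" using fi integrable_q0 by simp
  show "(\<lambda>x. f x * sqrt (qm q0 a x)) \<in> borel_measurable (nu a)" by measurable
  show "AE x in nu a. norm (f x * sqrt (qm q0 a x)) \<le> norm ((f x)^2 / 2 + qm q0 a x / 2)"
  proof (intro AE_I2)
    fix x
    let ?s = "sqrt (qm q0 a x)"
    have s2: "?s^2 = qm q0 a x" by (simp add: qmarg_nonneg)
    have "0 \<le> (\<bar>f x\<bar> - ?s)^2" by simp
    then have "2 * (\<bar>f x\<bar> * ?s) \<le> (f x)^2 + ?s^2" by (simp add: power2_eq_square algebra_simps)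
    then have "\<bar>f x * ?s\<bar> \<le> (f x)^2 / 2 + qm q0 a x / 2" using s2 by (simp add: abs_mult)
    moreover have "0 \<le> (f x)^2 / 2 + qm q0 a x / 2" by (simp add: qmarg_nonneg)
    ultimately show "norm (f x * ?s) \<le> norm ((f x)^2 / 2 + qm q0 a x / 2)" by simp
  qed
qed

lemma regular_submodel_AE_qmarg_base:
  assumes "regular_submodel mu0 mu1 muZ ppi S q0 d Theta th0 qth D"
  shows "AE x in nu a. qm (qth th0) a x = qm q0 a x"
proof -
  have "AE x in nu a. qm (qth th0) a x * pwz a (snd x) = qm q0 a x * pwz a (snd x)"
    using assms unfolding regular_submodel_def by blast
  then show ?thesis by eventually_elim (use pw_pos in \<open>auto simp: less_le\<close>)
qed

text \<open>Moving along the \<open>j\<close>-th coordinate axis of a regular submodel, differentiability in quadratic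
  mean gives densities \<open>q\<close> in \<open>Q\<close> with \<open>\<surd>q\<^sub>a = \<surd>q\<^sub>0\<^sub>,\<^sub>a + t D\<^sub>a\<^sub>,\<^sub>j + o(t)\<close> in \<open>L\<^sub>2(\<nu>\<^sub>a)\<close>;
  identifiability at \<open>\<theta>\<^sub>0\<close> is what lets us compare with \<open>q\<^sub>0\<close> itself.\<close>

lemma regular_submodel_direction:
  assumes RS: "regular_submodel mu0 mu1 muZ ppi S q0 d Theta th0 qth D" and j: "j < d"
    and e: "0 < e" and del: "0 < del"
  obtains t q where "0 < t" "t < del" "q \<in> Qfam mu0 mu1 muZ"
    "\<And>a. (\<integral>\<^sup>+ x. ennreal ((sqrt (qm q a x) - sqrt (qm q0 a x) - t * D a j x)^2) \<partial>nu a)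
        \<le> ennreal (e * t^2)"
proof -
  have Th: "Theta \<subseteq> Rd d" and th0T: "th0 \<in> Theta"
    and opn: "\<forall>th\<in>Theta. \<exists>r>0. \<forall>th'\<in>Rd d. normd d (\<lambda>i. th' i - th i) < r \<longrightarrow> th' \<in> Theta"
    and QF: "\<forall>th\<in>Theta. qth th \<in> Qfam mu0 mu1 muZ"
    using RS unfolding regular_submodel_def by blast+
  define err where "err th a = (\<integral>\<^sup>+ x. ennreal ((sqrt (qm (qth th) a x) - sqrt (qm (qth th0) a x)
    - (\<Sum>j<d. (th j - th0 j) * D a j x))\<^sup>2) \<partial>nu a)" for th a
  have "\<forall>a. \<exists>dl>0. \<forall>th\<in>Theta. normd d (\<lambda>i. th i - th0 i) < dl \<longrightarrow>
      err th a \<le> ennreal (e * (normd d (\<lambda>i. th i - th0 i))\<^sup>2)"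
    using RS e unfolding regular_submodel_def err_def by blast
  from choice[OF this] obtain dl where dl: "\<forall>a. 0 < dl a \<and> (\<forall>th\<in>Theta. normd d (\<lambda>i. th i - th0 i) < dl a \<longrightarrow>
      err th a \<le> ennreal (e * (normd d (\<lambda>i. th i - th0 i))\<^sup>2))" ..
  define tht where "tht t = (\<lambda>i. th0 i + (if i = j then t else 0))" for t :: real
  have thtR: "tht t \<in> Rd d" for t using Th th0T j by (auto simp: Rd_def tht_def)
  have dif: "(\<lambda>i. tht t i - th0 i) = (\<lambda>i. if i = j then t else 0)" for t by (auto simp: tht_def)
  have nrm: "normd d (\<lambda>i. tht t i - th0 i) = \<bar>t\<bar>" for t
    unfolding dif by (rule normd_axis[OF j])
  have sD: "(\<Sum>i<d. (tht t i - th0 i) * D a i x) = t * D a j x" for t a x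
  proof -
    have "(\<Sum>i<d. (tht t i - th0 i) * D a i x) = (\<Sum>i<d. if i = j then t * D a j x else 0)"
      by (intro sum.cong) (auto simp: tht_def)
    then show ?thesis using j by simp
  qed
  obtain r where r: "r > 0" "\<forall>th'\<in>Rd d. normd d (\<lambda>i. th' i - th0 i) < r \<longrightarrow> th' \<in> Theta"
    using opn th0T by blast
  define t where "t = min (min (dl True / 2) (dl False / 2)) (min (r / 2) (del / 2))"
  have dlp: "0 < dl a" for a using dl by blast
  have tp: "0 < t" and tdel: "t < del" and tr: "t < r"
    using dlp r del by (auto simp: t_def)
  have tdl: "t < dl a" for a using dlp[of True] dlp[of False] by (cases a) (auto simp: t_def)
  have thT: "tht t \<in> Theta" using r thtR nrm tr tp by auto
  have "(\<integral>\<^sup>+ x. ennreal ((sqrt (qm (qth (tht t)) a x) - sqrt (qm q0 a x) - t * D a j x)^2) \<partial>nu a)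
      \<le> ennreal (e * t^2)" for a
  proof -
    have "(\<integral>\<^sup>+ x. ennreal ((sqrt (qm (qth (tht t)) a x) - sqrt (qm q0 a x) - t * D a j x)^2) \<partial>nu a)
        = err (tht t) a"
      using regular_submodel_AE_qmarg_base[OF RS, of a]
      by (simp add: err_def sD) (intro nn_integral_cong_AE, auto elim!: eventually_mono)
    also have "\<dots> \<le> ennreal (e * (normd d (\<lambda>i. tht t i - th0 i))\<^sup>2)"
      using dl thT tdl[of a] tp nrm[of t] by (metis abs_of_pos)
    also have "\<dots> = ennreal (e * t^2)" by (simp add: nrm)
    finally show ?thesis .
  qed
  then show thesis using that tp tdel QF thT by blast
qed

lemma regular_submodel_L1_expansion:
  assumes RS: "regular_submodel mu0 mu1 muZ ppi S q0 d Theta th0 qth D" and j: "j < d" and eps: "0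
      < eps"
  obtains t q where "0 < t" "q \<in> Qfam mu0 mu1 muZ"
    "\<And>a. (\<integral>x. \<bar>qm q a x - qm q0 a x - 2 * t * D a j x * sqrt (qm q0 a x)\<bar> \<partial>nu a) \<le> t * eps"
proof -
  note Dm = regular_submodel_derivD(1)[OF RS j] and Di = regular_submodel_derivD(2)[OF RS j]
  define K where "K = 1 + (\<integral>x. (D True j x)^2 \<partial>nu True) + (\<integral>x. (D False j x)^2 \<partial>nu False)"
  have D0: "0 \<le> (\<integral>x. (D b j x)^2 \<partial>nu b)" for b by simp
  have DK: "(\<integral>x. (D a j x)^2 \<partial>nu a) \<le> K" for a
    using D0 by (cases a) (auto simp: K_def add_increasing2)
  have K: "0 < K" using D0[of True] D0[of False] unfolding K_def by linarith
  define e0 where "e0 = eps / (3 * (2 + K)) * eps / 2"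
  obtain t q where t: "0 < t" "t < min 1 (eps / (4 * K))" and q: "q \<in> Qfam mu0 mu1 muZ"
    and dqm: "\<And>a. (\<integral>\<^sup>+ x. ennreal ((sqrt (qm q a x) - sqrt (qm q0 a x) - t * D a j x)^2) \<partial>nu a)
        \<le> ennreal (e0 * t^2)"
    using regular_submodel_direction[OF RS j, of e0 "min 1 (eps / (4 * K))"] eps K
    by (auto simp: e0_def)
  have t1: "t \<le> 1" and tK: "t * (4 * K) \<le> eps" using t K by (auto simp: field_simps)
  have "(\<integral>x. \<bar>qm q a x - qm q0 a x - 2 * t * D a j x * sqrt (qm q0 a x)\<bar> \<partial>nu a) \<le> t * eps" for a
  proof -
    note [measurable] = Qfam_borel_measurable_qmarg[OF q, of a] Dm[of a]
    have sq: "(sqrt (qm p a x))^2 = qm p a x" for p x by (simp add: qmarg_nonneg)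
    have iR: "integrable (nu a) (\<lambda>x. (sqrt (qm q a x))^2)"
        and iQ: "integrable (nu a) (\<lambda>x. (sqrt (qm q0 a x))^2)"
      using Qfam_integrable_qmarg[OF q] integrable_q0 by (simp_all add: sq)
    have iE: "integrable (nu a) (\<lambda>x. (sqrt (qm q a x) - sqrt (qm q0 a x) - t * D a j x)^2)"
      using dqm[of a] by (intro integrableI_nonneg) (auto intro: order.strict_trans1)
    have E: "(\<integral>x. (sqrt (qm q a x) - sqrt (qm q0 a x) - t * D a j x)^2 \<partial>nu a) \<le> e0 * t^2"
      using dqm[of a] iE eps K by (simp add: nn_integral_eq_integral e0_def)
    define l where "l = t * (eps / (3 * (2 + K)))"
    have l: "0 < l" using t eps K by (simp add: l_def)
    have "(\<integral>x. \<bar>qm q a x - qm q0 a x - 2 * t * D a j x * sqrt (qm q0 a x)\<bar> \<partial>nu a)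
      \<le> (\<integral>x. (sqrt (qm q a x) - sqrt (qm q0 a x) - t * D a j x)^2 \<partial>nu a) / (2 * l)
          + 3 * l / 2 * (1 + 1 + t^2 * (\<integral>x. (D a j x)^2 \<partial>nu a)) + t^2 * (\<integral>x. (D a j x)^2 \<partial>nu a)"
      using integral_abs_sq_diff_linearization_le[OF _ _ _ iR iQ Di iE l]
        Qfam_integral_qmarg[OF q] integral_q0
      by (simp add: sq)
    also have "\<dots> \<le> t * eps"
      unfolding l_def by (rule linearization_error_le[OF K eps t(1) t1 tK E[unfolded e0_def] D0 DK])
    finally show ?thesis .
  qed
  then show thesis using that t q by blast
qed

text \<open>Both conditions on the scores are read off the expansion \<open>q\<^sub>a - q\<^sub>0\<^sub>,\<^sub>a = 2t D\<^sub>a\<^sub>,\<^sub>j \<surd>q\<^sub>0\<^sub>,\<^sub>a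
  + o(t)\<close> in \<open>L\<^sub>1(\<nu>\<^sub>a)\<close>: every \<open>q\<^sub>a\<close> has total mass \<open>1\<close>, and \<open>q\<^sub>1\<close> and \<open>q\<^sub>0\<close> have the same
  \<open>Z\<close>-marginal.\<close>

lemma integral_deriv_mult_sqrt_q0_eq_0:
  assumes RS: "regular_submodel mu0 mu1 muZ ppi S q0 d Theta th0 qth D" and j: "j < d"
  shows "(\<integral>x. 2 * D a j x * sqrt (qm q0 a x) \<partial>nu a) = 0"
proof -
  define I where "I = (\<integral>x. D a j x * sqrt (qm q0 a x) \<partial>nu a)"
  have iDQ: "integrable (nu a) (\<lambda>x. D a j x * sqrt (qm q0 a x))"
    by (rule integrable_mult_sqrt_q0[OF regular_submodel_derivD[OF RS j]])
  have "\<bar>2 * I\<bar> \<le> 0 + eps" if eps: "0 < eps" for eps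
  proof -
    obtain t q where t: "0 < t" and q: "q \<in> Qfam mu0 mu1 muZ"
      and L1: "\<And>a. (\<integral>x. \<bar>qm q a x - qm q0 a x - 2 * t * D a j x * sqrt (qm q0 a x)\<bar> \<partial>nu a)
          \<le> t * eps"
      by (rule regular_submodel_L1_expansion[OF RS j eps], rule that)
    have "(\<integral>x. qm q a x - qm q0 a x - 2 * t * D a j x * sqrt (qm q0 a x) \<partial>nu a)
        = (\<integral>x. qm q a x - qm q0 a x - (2 * t) * (D a j x * sqrt (qm q0 a x)) \<partial>nu a)"
      by (simp add: mult.assoc)
    also have "\<dots> = (\<integral>x. qm q a x \<partial>nu a) - (\<integral>x. qm q0 a x \<partial>nu a) - 2 * t * I"
      using Qfam_integrable_qmarg[OF q] integrable_q0 iDQ by (simp add: I_def)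
    also have "\<dots> = - (t * (2 * I))" using Qfam_integral_qmarg[OF q] integral_q0 by simp
    finally have eq: "(\<integral>x. qm q a x - qm q0 a x - 2 * t * D a j x * sqrt (qm q0 a x) \<partial>nu a)
        = - (t * (2 * I))" .
    have "\<bar>- (t * (2 * I))\<bar> \<le> (\<integral>x. \<bar>qm q a x - qm q0 a x - 2 * t * D a j x * sqrt (qm q0 a x)\<bar> \<partial>nu a)"
      unfolding eq[symmetric] by (rule integral_abs_bound)
    then have "t * \<bar>2 * I\<bar> \<le> (\<integral>x. \<bar>qm q a x - qm q0 a x - 2 * t * D a j x * sqrt (qm q0 a x)\<bar> \<partial>nu a)"
      using t by (simp add: abs_mult)
    also have "\<dots> \<le> t * eps" by (rule L1)
    finally have "t * \<bar>2 * I\<bar> \<le> t * eps" .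
    then show ?thesis using t by simp
  qed
  then have "\<bar>2 * I\<bar> \<le> 0" by (rule field_le_epsilon)
  then show ?thesis by (simp add: I_def mult.assoc)
qed

lemma AE_fibre_integrals_deriv_agree:
  assumes RS: "regular_submodel mu0 mu1 muZ ppi S q0 d Theta th0 qth D" and j: "j < d"
  shows "AE z in muZ. (\<integral> y. 2 * D True j (y, z) * sqrt (qm q0 True (y, z)) \<partial>mu1)
     = (\<integral> y. 2 * D False j (y, z) * sqrt (qm q0 False (y, z)) \<partial>mu0)"
proof -
  note Dm = regular_submodel_derivD(1)[OF RS j] and Di = regular_submodel_derivD(2)[OF RS j]
  define J where "J a z = (\<integral> y. 2 * D a j (y, z) * sqrt (qm q0 a (y, z)) \<partial>muY a)" for a z
  have iDQ: "integrable (nu a) (\<lambda>x. 2 * D a j x * sqrt (qm q0 a x))" for a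
    using integrable_mult_sqrt_q0[OF Dm Di, of a] by (simp add: mult.assoc)
  have [measurable]: "J a \<in> borel_measurable muZ" for a
    unfolding J_def by (rule borel_measurable_fibre_integral[OF borel_measurable_integrable[OF iDQ]])
  have "AE z in muZ. J True z - J False z = 0"
  proof (rule AE_zero_if_nn_integral_abs_arbitrarily_small)
    show "(\<lambda>z. J True z - J False z) \<in> borel_measurable muZ" by measurable
    fix e :: real assume e: "0 < e"
    obtain t q where t: "0 < t" and q: "q \<in> Qfam mu0 mu1 muZ"
      and L1: "\<And>a. (\<integral>x. \<bar>qm q a x - qm q0 a x - 2 * t * D a j x * sqrt (qm q0 a x)\<bar> \<partial>nu a)
          \<le> t * (e / 2)"
      by (rule regular_submodel_L1_expansion[OF RS j half_gt_zero[OF e]], rule that)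
    define F where "F a x = qm q a x - qm q0 a x - t * (2 * D a j x * sqrt (qm q0 a x))" for a x
    have iF': "integrable (nu a) (F a)" for a
      unfolding F_def using Qfam_integrable_qmarg[OF q] integrable_q0 iDQ by simp
    have "AE z in muZ. (\<integral>y. F True (y, z) \<partial>mu1) - (\<integral>y. F False (y, z) \<partial>mu0)
        = - (t * (J True z - J False z))"
      using Qfam_AE_fibre_integrals[OF q] Qfam_AE_fibre_integrals[OF q0_Qfam]
        AE_integrable_fibre[OF iDQ[of True]] AE_integrable_fibre[OF iDQ[of False]]
      by eventually_elim (simp add: F_def J_def muY_simps algebra_simps)
    then have "(\<integral>\<^sup>+z. ennreal \<bar>(\<integral>y. F True (y, z) \<partial>mu1) - (\<integral>y. F False (y, z) \<partial>mu0)\<bar> \<partial>muZ)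
        = (\<integral>\<^sup>+z. ennreal t * ennreal \<bar>J True z - J False z\<bar> \<partial>muZ)"
      using t by (intro nn_integral_cong_AE)
          (auto elim!: eventually_mono simp: ennreal_mult[symmetric] abs_mult)
    also have "\<dots> = ennreal t * (\<integral>\<^sup>+z. ennreal \<bar>J True z - J False z\<bar> \<partial>muZ)"
      by (rule nn_integral_cmult) measurable
    finally have "ennreal t * (\<integral>\<^sup>+z. ennreal \<bar>J True z - J False z\<bar> \<partial>muZ)
        = (\<integral>\<^sup>+z. ennreal \<bar>(\<integral>y. F True (y, z) \<partial>mu1) - (\<integral>y. F False (y, z) \<partial>mu0)\<bar> \<partial>muZ)" ..
    also have "\<dots> \<le> ennreal (\<integral>x. \<bar>F True x\<bar> \<partial>nu True) + ennreal (\<integral>x. \<bar>F False x\<bar> \<partial>nu False)"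
      by (rule nn_integral_fibre_difference_le[OF iF' iF'])
    also have "\<dots> \<le> ennreal (t * (e / 2)) + ennreal (t * (e / 2))"
      using L1 by (intro add_mono ennreal_leI) (simp_all add: F_def mult_ac)
    also have "\<dots> = ennreal t * ennreal e"
      using t e by (simp add: ennreal_plus[symmetric] ennreal_mult[symmetric] del: ennreal_plus)
    finally show "(\<integral>\<^sup>+z. ennreal \<bar>J True z - J False z\<bar> \<partial>muZ) \<le> ennreal e"
      using t by (subst (asm) ennreal_mult_le_mult_iff) auto
  qed
  then show ?thesis by (auto elim!: eventually_mono simp: J_def muY_simps)
qed

lemma score_in_centered_compatible:
  assumes RS: "regular_submodel mu0 mu1 muZ ppi S q0 d Theta th0 qth D" and j: "j < d"
  shows "score mu0 mu1 q0 D j \<in> centered_compatible"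
proof -
  have "on_arm (score mu0 mu1 q0 D j) a x * qm q0 a x = 2 * D a j x * sqrt (qm q0 a x)" for a x
    using score_mult_q0[of D j "fst x" a "snd x"] by simp
  then show ?thesis
    using score_L2P[of D j, OF regular_submodel_derivD[OF RS j]] integral_deriv_mult_sqrt_q0_eq_0[OF RS j]
      AE_fibre_integrals_deriv_agree[OF RS j]
    by (simp add: centered_compatible_def score_mult_q0)
qed

end

section \<open>Bounded directions are scores\<close>

locale bounded_direction = stratified_design mu0 mu1 muZ S nS ppi q0
  for mu0 mu1 :: "real measure" and muZ :: "(real^'k) measure"
    and S nS ppi q0 +
  fixes h :: "real \<times> bool \<times> (real^'k) \<Rightarrow> real" and C :: real
  assumes h_measurable[measurable]: "\<And>a. (\<lambda>x. h (fst x, a, snd x)) \<in> borel_measurable (nu a)"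
    and h_bounded: "\<And>w. \<bar>h w\<bar> \<le> C" and C_pos: "0 < C"
    and h_centered: "\<And>a. (\<integral>x. h (fst x, a, snd x) * qm q0 a x \<partial>nu a) = 0"
    and h_compatible: "AE z in muZ. (\<integral> y. h (y, True, z) * qm q0 True (y, z) \<partial>mu1)
                   = (\<integral> y. h (y, False, z) * qm q0 False (y, z) \<partial>mu0)"
    and h_nonzero: "Pnn0 (\<lambda>w. (h w)^2) \<noteq> 0"
begin

text \<open>The one-dimensional submodel through \<open>q\<^sub>0\<close> in direction \<open>h\<close>: tilt each arm's marginal by \<open>1 +
  \<theta>h\<close> and couple the two tilted arms conditionally independently given \<open>Z\<close>. Condition (a) keeps the
  tilted marginals probability densities and condition (b) gives them a common \<open>Z\<close>-marginal
  \<^term>\<open>tilted_Z \<theta>\<close>, which is what makes the coupling possible. That \<open>h\<close> does not vanish in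
  \<open>L\<^sub>2(P\<^sub>0)\<close> is needed only for identifiability and a non-singular information.\<close>

definition tilted :: "real \<Rightarrow> bool \<Rightarrow> real \<times> (real^'k) \<Rightarrow> real" where
  "tilted th a x = qm q0 a x * (1 + th * h (fst x, a, snd x))"

definition tilted_Z :: "real \<Rightarrow> (real^'k) \<Rightarrow> real" where
  "tilted_Z th z = enn2real (\<integral>\<^sup>+ y. ennreal (tilted th True (y, z)) \<partial>mu1)"

definition tilted_joint :: "real \<Rightarrow> real \<times> real \<times> (real^'k) \<Rightarrow> real" where
  "tilted_joint th w = tilted th False (fst w, snd (snd w)) * tilted th True (fst (snd w), snd (snd w))
     / tilted_Z th (snd (snd w))"

lemma tilt_factor_bounds:
  assumes "\<bar>th\<bar> \<le> 1 / (2 * C)"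
  shows "1 / 2 \<le> 1 + th * h w" "1 + th * h w \<le> 3 / 2"
proof -
  have "\<bar>th * h w\<bar> \<le> 1 / (2 * C) * C"
    unfolding abs_mult using assms h_bounded[of w] by (intro mult_mono) auto
  also have "\<dots> = 1 / 2" using C_pos by simp
  finally show "1 / 2 \<le> 1 + th * h w" "1 + th * h w \<le> 3 / 2" by linarith+
qed

lemma tilted_nonneg: "\<bar>th\<bar> \<le> 1 / (2 * C) \<Longrightarrow> 0 \<le> tilted th a x"
  using tilt_factor_bounds(1)[of th "(fst x, a, snd x)"] qmarg_nonneg[of q0 a x]
      by (simp add: tilted_def)

lemma tilted_le:
  assumes "\<bar>th\<bar> \<le> 1 / (2 * C)"
  shows "tilted th a x \<le> 3 / 2 * qm q0 a x"
proof -
  have "qm q0 a x * (1 + th * h (fst x, a, snd x)) \<le> qm q0 a x * (3 / 2)"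
    by (rule mult_left_mono[OF tilt_factor_bounds(2)[OF assms] qmarg_nonneg])
  then show ?thesis by (simp add: tilted_def mult.commute)
qed

lemma tilted_0: "tilted 0 a x = qm q0 a x" by (simp add: tilted_def)

lemma tilted_Z_nonneg: "0 \<le> tilted_Z th z" by (simp add: tilted_Z_def enn2real_nonneg)

lemma tilted_joint_nonneg: "\<bar>th\<bar> \<le> 1 / (2 * C) \<Longrightarrow> 0 \<le> tilted_joint th w"
  by (simp add: tilted_joint_def tilted_nonneg tilted_Z_nonneg)

lemma borel_measurable_tilted[measurable]: "tilted th a \<in> borel_measurable (nu a)"
  unfolding tilted_def[abs_def] by measurable

lemma borel_measurable_tilted_Z[measurable]: "tilted_Z th \<in> borel_measurable muZ"
proof -
  have "(\<lambda>x. ennreal (tilted th True x)) \<in> borel_measurable (nu True)" by measurable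
  from borel_measurable_fibre_nn_integral[OF this] show ?thesis
    unfolding tilted_Z_def[abs_def] by (simp add: muY_simps)
qed

lemma borel_measurable_tilted_joint[measurable]: "tilted_joint th \<in> borel_measurable muW"
proof -
  have [measurable]: "tilted th True \<in> borel_measurable (mu1 \<Otimes>\<^sub>M muZ)"
    "tilted th False \<in> borel_measurable (mu0 \<Otimes>\<^sub>M muZ)"
    using borel_measurable_tilted[of th True] borel_measurable_tilted[of th False]
    by (simp_all add: nu_eq muY_def)
  show ?thesis unfolding tilted_joint_def[abs_def] by measurable
qed

lemma integrable_h_mult_q0: "integrable (nu a) (\<lambda>x. h (fst x, a, snd x) * qm q0 a x)"
proof (rule Bochner_Integration.integrable_bound[where f="\<lambda>x. C * qm q0 a x"])
  show "integrable (nu a) (\<lambda>x. C * qm q0 a x)" using integrable_q0 by simp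
  show "AE x in nu a. norm (h (fst x, a, snd x) * qm q0 a x) \<le> norm (C * qm q0 a x)"
    using h_bounded C_pos qmarg_nonneg by (intro AE_I2) (auto simp: abs_mult intro!: mult_right_mono)
qed simp

lemma
  assumes th: "\<bar>th\<bar> \<le> 1 / (2 * C)"
  shows integrable_tilted: "integrable (nu a) (tilted th a)"
    and integral_tilted: "(\<integral>x. tilted th a x \<partial>nu a) = 1"
proof -
  have e: "tilted th a = (\<lambda>x. qm q0 a x + th * (on_arm h a x * qm q0 a x))"
    by (auto simp: tilted_def algebra_simps)
  show "integrable (nu a) (tilted th a)" unfolding e using integrable_h_mult_q0 integrable_q0
      by simp
  show "(\<integral>x. tilted th a x \<partial>nu a) = 1"
    unfolding e using integrable_h_mult_q0 integrable_q0 integral_q0 h_centered by simp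
qed

lemma AE_tilted_fibre_masses:
  assumes th: "\<bar>th\<bar> \<le> 1 / (2 * C)"
  shows "AE z in muZ. (\<integral>\<^sup>+ y. ennreal (tilted th True (y, z)) \<partial>mu1) = ennreal (tilted_Z th z)
     \<and> (\<integral>\<^sup>+ y. ennreal (tilted th False (y, z)) \<partial>mu0) = ennreal (tilted_Z th z)"
  using Qfam_AE_fibre_integrals[OF q0_Qfam] h_compatible
    AE_integrable_fibre[OF integrable_h_mult_q0[of True]] AE_integrable_fibre[OF integrable_h_mult_q0[of False]]
proof eventually_elim
  case (elim z)
  have eq: "(\<lambda>y. tilted th a (y, z)) = (\<lambda>y. qm q0 a (y, z)
      + th * (h (y, a, z) * qm q0 a (y, z)))" for a
    by (auto simp: tilted_def algebra_simps)
  have v: "(\<integral>\<^sup>+ y. ennreal (tilted th a (y, z)) \<partial>muY a)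
      = ennreal ((\<integral> y. qm q0 a (y, z) \<partial>muY a) + th * (\<integral> y. h (y, a, z) * qm q0 a (y, z) \<partial>muY a))" for a
  proof -
    have i: "integrable (muY a) (\<lambda>y. tilted th a (y, z))"
      unfolding eq using elim by (cases a) (auto simp: muY_simps)
    then have "(\<integral>\<^sup>+ y. ennreal (tilted th a (y, z)) \<partial>muY a)
        = ennreal (\<integral> y. tilted th a (y, z) \<partial>muY a)"
      using tilted_nonneg[OF th] by (intro nn_integral_eq_integral) auto
    also have "(\<integral> y. tilted th a (y, z) \<partial>muY a)
        = (\<integral> y. qm q0 a (y, z) \<partial>muY a) + th * (\<integral> y. h (y, a, z) * qm q0 a (y, z) \<partial>muY a)"
      unfolding eq using elim by (cases a) (auto simp: muY_simps)
    finally show ?thesis .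
  qed
  have "(\<integral>\<^sup>+ y. ennreal (tilted th True (y, z)) \<partial>mu1)
      = (\<integral>\<^sup>+ y. ennreal (tilted th False (y, z)) \<partial>mu0)"
    using v[of True] v[of False] elim by (simp add: muY_simps)
  moreover have "(\<integral>\<^sup>+ y. ennreal (tilted th True (y, z)) \<partial>mu1) = ennreal (tilted_Z th z)"
    using v[of True] unfolding tilted_Z_def by (simp add: muY_simps)
  ultimately show ?case by simp
qed

lemma AE_nn_integral_tilted_joint_Y0:
  assumes th: "\<bar>th\<bar> \<le> 1 / (2 * C)"
  shows "AE x in nu True. (\<integral>\<^sup>+ y0. ennreal (tilted_joint th (y0, fst x, snd x)) \<partial>mu0)
      = ennreal (tilted th True x)"
proof (rule AE_nu_fibres)
  interpret M0: sigma_finite_measure mu0 by (rule sigma_finite_mu0)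
  have "(\<lambda>x. \<integral>\<^sup>+ y0. ennreal (tilted_joint th (y0, fst x, snd x)) \<partial>mu0) \<in> borel_measurable (nu True)"
    by (simp add: nu_eq muY_def) measurable
  then show "{x \<in> space (nu True). (\<integral>\<^sup>+ y0. ennreal (tilted_joint th (y0, fst x, snd x)) \<partial>mu0)
      = ennreal (tilted th True x)} \<in> sets (nu True)"
    by measurable
  show "AE z in muZ. AE y in muY True.
      (\<integral>\<^sup>+ y0. ennreal (tilted_joint th (y0, fst (y, z), snd (y, z))) \<partial>mu0)
          = ennreal (tilted th True (y, z))"
    using AE_tilted_fibre_masses[OF th]
  proof eventually_elim
    case (elim z)
    show ?case unfolding muY_simps tilted_joint_def fst_conv snd_conv
      using elim measurable_fibre[OF borel_measurable_tilted, of th True z]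
        measurable_fibre[OF borel_measurable_tilted, of th False z]
      by (intro AE_nn_integral_normalized_product)
          (simp_all add: muY_simps tilted_nonneg[OF th] tilted_Z_nonneg)
  qed
qed

lemma AE_nn_integral_tilted_joint_Y1:
  assumes th: "\<bar>th\<bar> \<le> 1 / (2 * C)"
  shows "AE x in nu False. (\<integral>\<^sup>+ y1. ennreal (tilted_joint th (fst x, y1, snd x)) \<partial>mu1)
      = ennreal (tilted th False x)"
proof (rule AE_nu_fibres)
  interpret M1: sigma_finite_measure mu1 by (rule sigma_finite_mu1)
  have "(\<lambda>x. \<integral>\<^sup>+ y1. ennreal (tilted_joint th (fst x, y1, snd x)) \<partial>mu1) \<in> borel_measurable (nu False)"
    by (simp add: nu_eq muY_def) measurable
  then show "{x \<in> space (nu False). (\<integral>\<^sup>+ y1. ennreal (tilted_joint th (fst x, y1, snd x)) \<partial>mu1)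
      = ennreal (tilted th False x)} \<in> sets (nu False)"
    by measurable
  show "AE z in muZ. AE y in muY False.
      (\<integral>\<^sup>+ y1. ennreal (tilted_joint th (fst (y, z), y1, snd (y, z))) \<partial>mu1)
          = ennreal (tilted th False (y, z))"
    using AE_tilted_fibre_masses[OF th]
  proof eventually_elim
    case (elim z)
    show ?case unfolding muY_simps tilted_joint_def fst_conv snd_conv mult.commute[of "tilted th False _"]
      using elim measurable_fibre[OF borel_measurable_tilted, of th True z]
        measurable_fibre[OF borel_measurable_tilted, of th False z]
      by (intro AE_nn_integral_normalized_product)
          (simp_all add: muY_simps tilted_nonneg[OF th] tilted_Z_nonneg)
  qed
qed

lemma AE_qmarg_tilted_joint:
  assumes th: "\<bar>th\<bar> \<le> 1 / (2 * C)"
  shows "AE x in nu a. qm (tilted_joint th) a x = tilted th a x"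
proof -
  have "AE x in nu True. qm (tilted_joint th) True x = tilted th True x"
    using AE_nn_integral_tilted_joint_Y0[OF th]
    by eventually_elim (simp add: qmarg_True tilted_nonneg[OF th])
  moreover have "AE x in nu False. qm (tilted_joint th) False x = tilted th False x"
    using AE_nn_integral_tilted_joint_Y1[OF th]
    by eventually_elim (simp add: qmarg_False tilted_nonneg[OF th])
  ultimately show ?thesis by (induct a) auto
qed

lemma AE_qmarg_tilted_joint_0: "AE x in nu a. qm (tilted_joint 0) a x = qm q0 a x"
  using AE_qmarg_tilted_joint[of 0 a] C_pos by (simp add: tilted_0)

lemma nn_integral_tilted_joint:
  assumes th: "\<bar>th\<bar> \<le> 1 / (2 * C)"
  shows "(\<integral>\<^sup>+ w. ennreal (tilted_joint th w) \<partial>muW) = 1"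
proof -
  have "(\<integral>\<^sup>+ w. ennreal (tilted_joint th w) \<partial>muW)
      = (\<integral>\<^sup>+ x. (\<integral>\<^sup>+ y0. ennreal (tilted_joint th (y0, fst x, snd x)) \<partial>mu0) \<partial>nu True)"
    by (rule nn_integral_muW_integrate_Y0) measurable
  also have "\<dots> = (\<integral>\<^sup>+ x. ennreal (tilted th True x) \<partial>nu True)"
    using AE_nn_integral_tilted_joint_Y0[OF th] by (rule nn_integral_cong_AE)
  also have "\<dots> = 1"
    using integrable_tilted[OF th] integral_tilted[OF th] tilted_nonneg[OF th]
    by (subst nn_integral_eq_integral) auto
  finally show ?thesis .
qed

text \<open>Under the coupling \<open>Y(a)\<close> has the tilted marginal, which is at most \<open>3/2\<close> times that of
  \<open>q\<^sub>0\<close>.\<close>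

lemma nn_integral_sq_outcome_tilted_joint_finite:
  assumes th: "\<bar>th\<bar> \<le> 1 / (2 * C)"
  shows "(\<integral>\<^sup>+ w. ennreal ((fst (arm_proj a w))^2 * tilted_joint th w) \<partial>muW) < \<infinity>"
proof -
  have q0_mom: "(\<integral>\<^sup>+ w. ennreal ((fst (arm_proj a w))^2) * ennreal (q0 w) \<partial>muW) < \<infinity>"
    using q0_Qfam QfamD(2)[OF q0_Qfam]
    by (cases a) (simp_all add: Qfam_def arm_proj_def ennreal_mult[symmetric])
  have "(\<integral>\<^sup>+ w. ennreal ((fst (arm_proj a w))^2 * tilted_joint th w) \<partial>muW)
      = (\<integral>\<^sup>+ w. ennreal ((fst (arm_proj a w))^2) * ennreal (tilted_joint th w) \<partial>muW)"
    using tilted_joint_nonneg[OF th] by (intro nn_integral_cong) (simp add: ennreal_mult)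
  also have "\<dots> = (\<integral>\<^sup>+ x. ennreal ((fst x)^2) * ennreal (qm (tilted_joint th) a x) \<partial>nu a)"
    using nn_integral_tilted_joint[OF th] by (intro nn_integral_qmarg_eq[symmetric]) auto
  also have "\<dots> = (\<integral>\<^sup>+ x. ennreal ((fst x)^2) * ennreal (tilted th a x) \<partial>nu a)"
    using AE_qmarg_tilted_joint[OF th, of a] by (intro nn_integral_cong_AE) (auto elim!: eventually_mono)
  also have "\<dots> \<le> (\<integral>\<^sup>+ x. ennreal (3 / 2) * (ennreal ((fst x)^2) * ennreal (qm q0 a x)) \<partial>nu a)"
  proof (intro nn_integral_mono)
    fix x
    have "ennreal (tilted th a x) \<le> ennreal (3 / 2) * ennreal (qm q0 a x)"
      using tilted_le[OF th] by (simp add: ennreal_mult[symmetric] qmarg_nonneg ennreal_leI)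
    then show "ennreal ((fst x)^2) * ennreal (tilted th a x)
        \<le> ennreal (3 / 2) * (ennreal ((fst x)^2) * ennreal (qm q0 a x))"
      by (simp add: mult_left_mono mult.left_commute)
  qed
  also have "\<dots> = ennreal (3 / 2) * (\<integral>\<^sup>+ x. ennreal ((fst x)^2) * ennreal (qm q0 a x) \<partial>nu a)"
    by (rule nn_integral_cmult) measurable
  also have "\<dots> \<le> ennreal (3 / 2) * (\<integral>\<^sup>+ w. ennreal ((fst (arm_proj a w))^2) * ennreal (q0 w) \<partial>muW)"
    using QfamD(1)[OF q0_Qfam] by (intro mult_left_mono nn_integral_qmarg_le) auto
  also have "\<dots> < \<infinity>" using q0_mom by (simp add: ennreal_mult_less_top)
  finally show ?thesis .
qed

lemma tilted_joint_Qfam: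
  assumes th: "\<bar>th\<bar> \<le> 1 / (2 * C)"
  shows "tilted_joint th \<in> Qfam mu0 mu1 muZ"
  using nn_integral_sq_outcome_tilted_joint_finite[OF th, of False]
    nn_integral_sq_outcome_tilted_joint_finite[OF th, of True]
  by (simp add: Qfam_def tilted_joint_nonneg[OF th] nn_integral_tilted_joint[OF th] arm_proj_def)

lemma Parm_sq_pos: "\<exists>a. Parm a (\<lambda>w. (h w)^2) \<noteq> 0"
  using h_nonzero by (auto simp: Pnn_eq_Parm)

lemma integrable_h_sq_weighted: "integrable (nu a) (\<lambda>x. (h (fst x, a, snd x))^2 * qm q0 a x * pwz a (snd x))"
proof (rule Bochner_Integration.integrable_bound[where f="\<lambda>x. C^2 * qm q0 a x"])
  show "integrable (nu a) (\<lambda>x. C^2 * qm q0 a x)" using integrable_q0 by simp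
  show "(\<lambda>x. (h (fst x, a, snd x))^2 * qm q0 a x * pwz a (snd x)) \<in> borel_measurable (nu a)"
      by measurable
  show "AE x in nu a. norm ((h (fst x, a, snd x))^2 * qm q0 a x * pwz a (snd x))
      \<le> norm (C^2 * qm q0 a x)"
  proof (intro AE_I2)
    fix x
    have h2: "(h (fst x, a, snd x))^2 \<le> C^2"
      using h_bounded[of "(fst x, a, snd x)"] by (metis abs_ge_zero power2_abs power_mono)
    have p: "0 \<le> pwz a (snd x)" "pwz a (snd x) \<le> 1"
        using pw_pos[of a "snd x"] pw_le_1[of a "snd x"] by auto
    have "(h (fst x, a, snd x))^2 * qm q0 a x * pwz a (snd x) \<le> (h (fst x, a, snd x))^2 * qm q0 a x"
      using p qmarg_nonneg[of q0 a x] by (simp add: mult_left_le)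
    also have "\<dots> \<le> C^2 * qm q0 a x" using h2 qmarg_nonneg[of q0 a x] by (rule mult_right_mono)
    finally show "norm ((h (fst x, a, snd x))^2 * qm q0 a x * pwz a (snd x))
        \<le> norm (C^2 * qm q0 a x)"
      using p qmarg_nonneg[of q0 a x] by simp
  qed
qed

definition line_params :: "(nat \<Rightarrow> real) set" where
  "line_params = {th \<in> Rd 1. \<bar>th 0\<bar> < 1 / (2 * C)}"

definition line_density :: "(nat \<Rightarrow> real) \<Rightarrow> real \<times> real \<times> (real^'k) \<Rightarrow> real" where
  "line_density th = tilted_joint (th 0)"

definition line_deriv :: "bool \<Rightarrow> nat \<Rightarrow> real \<times> (real^'k) \<Rightarrow> real" where
  "line_deriv a j x = (if j = 0 then h (fst x, a, snd x) * sqrt (qm q0 a x) / 2 else 0)"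

lemma score_line_deriv:
  "score mu0 mu1 q0 line_deriv 0 (y, a, z) = (if 0 < qm q0 a (y, z) then h (y, a, z) else 0)"
  by (simp add: score_def line_deriv_def)

lemma line_params_bound: "th \<in> line_params \<Longrightarrow> \<bar>th 0\<bar> \<le> 1 / (2 * C)"
  by (simp add: line_params_def)

lemma line_params_open:
  "\<forall>th\<in>line_params. \<exists>r>0. \<forall>th'\<in>Rd 1. normd 1 (\<lambda>i. th' i - th i) < r \<longrightarrow> th' \<in> line_params"
proof
  fix th assume th: "th \<in> line_params"
  define r where "r = 1 / (2 * C) - \<bar>th 0\<bar>"
  have "\<forall>th'\<in>Rd 1. normd 1 (\<lambda>i. th' i - th i) < r \<longrightarrow> th' \<in> line_params"
  proof (intro ballI impI)
    fix th' assume "th' \<in> Rd 1" and "normd 1 (\<lambda>i. th' i - th i) < r"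
    then have "\<bar>th' 0\<bar> < 1 / (2 * C)" unfolding r_def normd_def by simp
    then show "th' \<in> line_params" using \<open>th' \<in> Rd 1\<close> by (simp add: line_params_def)
  qed
  moreover have "r > 0" using th by (simp add: line_params_def r_def)
  ultimately show "\<exists>r>0. \<forall>th'\<in>Rd 1. normd 1 (\<lambda>i. th' i - th i) < r \<longrightarrow> th' \<in> line_params" by blast
qed

lemma line_identifiable:
  "\<forall>th\<in>line_params. (\<forall>a. AE x in nu a. qm (line_density th) a x * pwz a (snd x)
      = qm q0 a x * pwz a (snd x))
      \<longleftrightarrow> th = (\<lambda>_. 0)"
proof (intro ballI iffI)
  fix th assume "th \<in> line_params" "th = (\<lambda>_. 0)"
  then show "\<forall>a. AE x in nu a. qm (line_density th) a x * pwz a (snd x) = qm q0 a x * pwz a (snd x)"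
    using AE_qmarg_tilted_joint_0 by (simp add: line_density_def) (blast intro: eventually_mono)
next
  fix th assume th: "th \<in> line_params"
    and A: "\<forall>a. AE x in nu a. qm (line_density th) a x * pwz a (snd x) = qm q0 a x * pwz a (snd x)"
  have "th 0 = 0"
  proof (rule ccontr)
    assume t0: "th 0 \<noteq> 0"
    have "Parm a (\<lambda>w. (h w)^2) = 0" for a
    proof -
      have "AE x in nu a. (h (fst x, a, snd x))^2 * qm q0 a x * pwz a (snd x) = 0"
        using A[rule_format, of a] AE_qmarg_tilted_joint[OF line_params_bound[OF th], of a]
      proof eventually_elim
        case (elim x)
        then have "tilted (th 0) a x = qm q0 a x" using pw_pos[of a "snd x"]
            by (simp add: line_density_def)
        then have "th 0 * (h (fst x, a, snd x) * qm q0 a x) = 0"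
            by (simp add: tilted_def algebra_simps)
        then show ?case using t0 by (simp add: power2_eq_square)
      qed
      then show ?thesis unfolding Parm_def by (subst nn_integral_cong_AE[where v="\<lambda>_. 0"])
          (auto elim!: eventually_mono)
    qed
    then show False using Parm_sq_pos by blast
  qed
  moreover have "\<forall>i\<ge>1. th i = 0" using th by (auto simp: line_params_def Rd_def)
  ultimately show "th = (\<lambda>_. 0)" by (intro ext) (metis less_one not_le)
qed

lemma line_deriv_L2:
  "\<forall>a. \<forall>j<1. line_deriv a j \<in> borel_measurable (nu a)
      \<and> (\<integral>\<^sup>+ x. ennreal ((line_deriv a j x)^2) \<partial>nu a) < \<infinity>"
proof (intro allI impI conjI)
  fix a and j :: nat assume "j < 1"
  then have j0: "j = 0" by simp
  show "line_deriv a j \<in> borel_measurable (nu a)" unfolding j0 line_deriv_def[abs_def]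
      by simp measurable
  have "(\<integral>\<^sup>+ x. ennreal ((line_deriv a j x)^2) \<partial>nu a)
      \<le> (\<integral>\<^sup>+ x. ennreal (C^2 / 4) * ennreal (qm q0 a x) \<partial>nu a)"
  proof (intro nn_integral_mono)
    fix x
    have h2: "(h (fst x, a, snd x))^2 \<le> C^2"
      using h_bounded[of "(fst x, a, snd x)"] by (metis abs_ge_zero power2_abs power_mono)
    have "(line_deriv a j x)^2 = (h (fst x, a, snd x))^2 * qm q0 a x / 4"
      unfolding j0 line_deriv_def using qmarg_nonneg[of q0 a x]
          by (simp add: power_mult_distrib power_divide)
    also have "\<dots> \<le> C^2 / 4 * qm q0 a x"
      using h2 qmarg_nonneg[of q0 a x] by (simp add: mult_right_mono)
    finally have "ennreal ((line_deriv a j x)^2) \<le> ennreal (C^2 / 4 * qm q0 a x)"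
        by (rule ennreal_leI)
    also have "\<dots> = ennreal (C^2 / 4) * ennreal (qm q0 a x)"
        by (rule ennreal_mult) (auto simp: qmarg_nonneg)
    finally show "ennreal ((line_deriv a j x)^2) \<le> ennreal (C^2 / 4) * ennreal (qm q0 a x)" .
  qed
  also have "\<dots> = ennreal (C^2 / 4) * (\<integral>\<^sup>+ x. ennreal (qm q0 a x) \<partial>nu a)"
    by (rule nn_integral_cmult) measurable
  also have "\<dots> < \<infinity>" using Qfam_nn_integral_qmarg[OF q0_Qfam, of a] by simp
  finally show "(\<integral>\<^sup>+ x. ennreal ((line_deriv a j x)^2) \<partial>nu a) < \<infinity>" .
qed

lemma line_remainder_le:
  assumes th: "\<bar>t\<bar> \<le> 1 / (2 * C)"
  shows "(\<integral>\<^sup>+ x. ennreal ((sqrt (tilted t a x) - sqrt (qm q0 a x) - t * line_deriv a 0 x)^2) \<partial>nu a)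
    \<le> ennreal (t^4 * C^4 / 4)"
proof -
  have "(\<integral>\<^sup>+ x. ennreal ((sqrt (tilted t a x) - sqrt (qm q0 a x) - t * line_deriv a 0 x)^2) \<partial>nu a)
      \<le> (\<integral>\<^sup>+ x. ennreal (t^4 * C^4 / 4) * ennreal (qm q0 a x) \<partial>nu a)"
  proof (intro nn_integral_mono)
    fix x
    let ?u = "t * h (fst x, a, snd x)"
    have "-1 \<le> ?u" using tilt_factor_bounds(1)[OF th, of "(fst x, a, snd x)"] by simp
    from sqrt_mult_one_plus_remainder_sq[OF qmarg_nonneg this]
    have "(sqrt (tilted t a x) - sqrt (qm q0 a x) - t * line_deriv a 0 x)^2 \<le> qm q0 a x * ?u^4 / 4"
      by (simp add: tilted_def line_deriv_def algebra_simps)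
    also have "\<dots> \<le> qm q0 a x * (t^4 * C^4) / 4"
    proof -
      have "\<bar>?u\<bar> \<le> \<bar>t\<bar> * C" unfolding abs_mult using h_bounded by (intro mult_left_mono) auto
      then have "\<bar>?u\<bar>^4 \<le> (\<bar>t\<bar> * C)^4" by (intro power_mono) auto
      then have "?u^4 \<le> t^4 * C^4" by (simp add: power_mult_distrib power_even_abs)
      then show ?thesis using qmarg_nonneg[of q0 a x]
          by (intro divide_right_mono mult_left_mono) auto
    qed
    finally have "ennreal ((sqrt (tilted t a x) - sqrt (qm q0 a x) - t * line_deriv a 0 x)^2)
        \<le> ennreal (t^4 * C^4 / 4 * qm q0 a x)" by (intro ennreal_leI) (simp add: algebra_simps)
    also have "\<dots> = ennreal (t^4 * C^4 / 4) * ennreal (qm q0 a x)"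
      by (rule ennreal_mult) (auto simp: qmarg_nonneg)
    finally show "ennreal ((sqrt (tilted t a x) - sqrt (qm q0 a x) - t * line_deriv a 0 x)^2)
        \<le> ennreal (t^4 * C^4 / 4) * ennreal (qm q0 a x)" .
  qed
  also have "\<dots> = ennreal (t^4 * C^4 / 4) * (\<integral>\<^sup>+ x. ennreal (qm q0 a x) \<partial>nu a)"
    by (rule nn_integral_cmult) measurable
  also have "\<dots> = ennreal (t^4 * C^4 / 4)" using Qfam_nn_integral_qmarg[OF q0_Qfam, of a] by simp
  finally show ?thesis .
qed

lemma line_dqm:
  "\<forall>a. \<forall>e>0. \<exists>del>0. \<forall>th\<in>line_params. \<bar>th 0\<bar> < del \<longrightarrow>
   (\<integral>\<^sup>+ x. ennreal ((sqrt (qm (line_density th) a x) - sqrt (qm (line_density (\<lambda>_. 0)) a x)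
      - th 0 * line_deriv a 0 x)^2) \<partial>nu a) \<le> ennreal (e * (th 0)^2)"
proof (intro allI impI)
  fix a and e :: real assume e: "e > 0"
  define del where "del = 2 * sqrt e / C^2"
  have "(\<integral>\<^sup>+ x. ennreal ((sqrt (qm (line_density th) a x) - sqrt (qm (line_density (\<lambda>_. 0)) a x)
      - th 0 * line_deriv a 0 x)^2) \<partial>nu a) \<le> ennreal (e * (th 0)^2)"
    if th: "th \<in> line_params" and small: "\<bar>th 0\<bar> < del" for th
  proof -
    define t where "t = th 0"
    have tb: "\<bar>t\<bar> \<le> 1 / (2 * C)" using line_params_bound[OF th] by (simp add: t_def)
    have "(\<integral>\<^sup>+ x. ennreal ((sqrt (qm (line_density th) a x) - sqrt (qm (line_density (\<lambda>_. 0)) a x)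
        - th 0 * line_deriv a 0 x)^2) \<partial>nu a)
      = (\<integral>\<^sup>+ x. ennreal ((sqrt (tilted t a x) - sqrt (qm q0 a x) - t * line_deriv a 0 x)^2) \<partial>nu a)"
      using AE_qmarg_tilted_joint[OF tb, of a] AE_qmarg_tilted_joint_0[of a]
      by (intro nn_integral_cong_AE, eventually_elim) (simp add: line_density_def t_def)
    also have "\<dots> \<le> ennreal (t^4 * C^4 / 4)" by (rule line_remainder_le[OF tb])
    also have "\<dots> \<le> ennreal (e * t^2)"
    proof (intro ennreal_leI)
      have "\<bar>t\<bar>^2 \<le> del^2" using small by (intro power_mono) (auto simp: t_def)
      also have "del^2 = 4 * e / C^4" using e C_pos
          by (simp add: del_def power_divide power_mult_distrib)
      finally have "t^2 * C^4 / 4 \<le> e" using C_pos by (simp add: field_simps)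
      then have "t^2 * (t^2 * C^4 / 4) \<le> t^2 * e" by (intro mult_left_mono) auto
      then show "t^4 * C^4 / 4 \<le> e * t^2" by (simp add: power4_eq_xxxx power2_eq_square algebra_simps)
    qed
    finally show ?thesis by (simp add: t_def)
  qed
  moreover have "del > 0" using e C_pos by (simp add: del_def)
  ultimately show "\<exists>del>0. \<forall>th\<in>line_params. \<bar>th 0\<bar> < del \<longrightarrow>
   (\<integral>\<^sup>+ x. ennreal ((sqrt (qm (line_density th) a x) - sqrt (qm (line_density (\<lambda>_. 0)) a x)
      - th 0 * line_deriv a 0 x)^2) \<partial>nu a) \<le> ennreal (e * (th 0)^2)" by blast
qed

lemma line_information_pos:
  "Pint mu0 mu1 muZ ppi S q0 (\<lambda>w. score mu0 mu1 q0 line_deriv 0 w * score mu0 mu1 q0 line_deriv 0 w) \<noteq> 0"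
proof -
  define I where "I a = (\<integral>x. (h (fst x, a, snd x))^2 * qm q0 a x * pwz a (snd x) \<partial>nu a)" for a
  have nn: "0 \<le> (h (fst x, a, snd x))^2 * qm q0 a x * pwz a (snd x)" for a x
    using pw_pos[of a "snd x"] qmarg_nonneg[of q0 a x] by simp
  have I0: "0 \<le> I a" for a unfolding I_def using nn by simp
  have eq: "score mu0 mu1 q0 line_deriv 0 (fst x, a, snd x) * score mu0 mu1 q0 line_deriv 0 (fst x, a, snd x)
      * qm q0 a x * pwz a (snd x) = (h (fst x, a, snd x))^2 * qm q0 a x * pwz a (snd x)" for a x
    using qmarg_nonneg[of q0 a x] by (auto simp: score_line_deriv power2_eq_square)
  have P: "Pint mu0 mu1 muZ ppi S q0 (\<lambda>w. score mu0 mu1 q0 line_deriv 0 w * score mu0 mu1 q0 line_deriv 0 w)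
      = I False + I True"
    unfolding Pint_def I_def by (simp add: UNIV_bool eq)
  obtain a where "Parm a (\<lambda>w. (h w)^2) \<noteq> 0" using Parm_sq_pos by blast
  moreover have "Parm a (\<lambda>w. (h w)^2) = ennreal (I a)"
    unfolding Parm_def I_def using integrable_h_sq_weighted[of a] nn
        by (intro nn_integral_eq_integral) auto
  ultimately have "I a > 0" using I0[of a] by simp
  then show ?thesis unfolding P using I0[of True] I0[of False] by (cases a) auto
qed

lemma regular_submodel_line: "regular_submodel mu0 mu1 muZ ppi S q0 1
    line_params (\<lambda>_. 0) line_density line_deriv"
  unfolding regular_submodel_def
proof (intro conjI)
  show "line_params \<subseteq> Rd 1" by (auto simp: line_params_def)
  show "(\<lambda>_. 0) \<in> line_params" using C_pos by (simp add: line_params_def Rd_def)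
  show "\<forall>th\<in>line_params. line_density th \<in> Qfam mu0 mu1 muZ"
    using tilted_joint_Qfam line_params_bound by (simp add: line_density_def)
  show "\<forall>a. \<forall>e>0. \<exists>del>0. \<forall>th\<in>line_params. normd 1 (\<lambda>i. th i - 0) < del \<longrightarrow>
      (\<integral>\<^sup>+ x. ennreal ((sqrt (qm (line_density th) a x) - sqrt (qm (line_density (\<lambda>_. 0)) a x)
          - (\<Sum>j<1. (th j - 0) * line_deriv a j x))\<^sup>2) \<partial>nu a)
      \<le> ennreal (e * (normd 1 (\<lambda>i. th i - 0))\<^sup>2)"
    using line_dqm by (simp add: normd_def)
  show "\<forall>c::nat \<Rightarrow> real.
      (\<forall>i<1. (\<Sum>j<1. Pint mu0 mu1 muZ ppi S q0
         (\<lambda>w. score mu0 mu1 q0 line_deriv i w * score mu0 mu1 q0 line_deriv j w) * c j) = 0)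
      \<longrightarrow> (\<forall>j<1. c j = 0)"
    using line_information_pos by simp
qed (use line_params_open line_identifiable line_deriv_L2 in simp_all)

lemma score_line_in_scores: "score mu0 mu1 q0 line_deriv 0 \<in> scores mu0 mu1 muZ ppi S q0"
  unfolding scores_def using regular_submodel_line by force

end

section \<open>Approximation by recentred clippings\<close>

locale tangent_candidate = stratified_design mu0 mu1 muZ S nS ppi q0
  for mu0 mu1 :: "real measure" and muZ :: "(real^'k) measure"
    and S nS ppi q0 +
  fixes h :: "real \<times> bool \<times> (real^'k) \<Rightarrow> real"
  assumes h_cc: "h \<in> centered_compatible"
begin

lemma h_L2P: "h \<in> L2P0"
  using h_cc by (rule centered_compatibleD)

lemma h_measurable[measurable]: "(\<lambda>x. h (fst x, a, snd x)) \<in> borel_measurable (nu a)"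
  by (rule L2P_borel_measurable[OF h_L2P])

lemma h_centered: "(\<integral>x. h (fst x, a, snd x) * qm q0 a x \<partial>nu a) = 0"
  using h_cc by (rule centered_compatibleD)

lemma h_compatible: "AE z in muZ. (\<integral> y. h (y, True, z) * qm q0 True (y, z) \<partial>mu1)
    = (\<integral> y. h (y, False, z) * qm q0 False (y, z) \<partial>mu0)"
  using h_cc by (rule centered_compatibleD)

lemma integrable_h_sq: "integrable (nu a) (\<lambda>x. (h (fst x, a, snd x))^2 * qm q0 a x)"
  by (rule L2P_integrable_sq[OF h_L2P])

lemma integrable_h: "integrable (nu a) (\<lambda>x. h (fst x, a, snd x) * qm q0 a x)"
  by (rule L2P_integrable[OF h_L2P])

definition clip :: "real \<Rightarrow> bool \<Rightarrow> real \<times> (real^'k) \<Rightarrow> real" where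
  "clip N a x = max (- N) (min N (h (fst x, a, snd x)))"

definition fibre_mass :: "bool \<Rightarrow> (real^'k) \<Rightarrow> real" where
  "fibre_mass a z = enn2real (\<integral>\<^sup>+ y. ennreal (qm q0 a (y, z)) \<partial>muY a)"

definition fibre_clip :: "real \<Rightarrow> bool \<Rightarrow> (real^'k) \<Rightarrow> real" where
  "fibre_clip N a z = (\<integral> y. clip N a (y, z) * qm q0 a (y, z) \<partial>muY a)"

definition clip_mean :: "real \<Rightarrow> real" where
  "clip_mean N = (\<integral> x. clip N True x * qm q0 True x \<partial>nu True)"

text \<open>Clip \<open>h\<close> at level \<open>N\<close>, then restore (a) and (b) exactly: on each arm subtract the conditional
  mean of the clipped function given \<open>Z\<close>, add back that of arm \<open>1\<close>, and subtract its overall mean.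
  Where a fibre has mass \<open>0\<close> the quotients are \<open>0\<close> by the convention \<open>x / 0 = 0\<close>, which does no harm
  because the fibre integrals vanish there too.\<close>

definition recentred :: "real \<Rightarrow> real \<times> bool \<times> (real^'k) \<Rightarrow> real" where
  "recentred N w = clip N (fst (snd w)) (fst w, snd (snd w))
   - fibre_clip N (fst (snd w)) (snd (snd w)) / fibre_mass (fst (snd w)) (snd (snd w))
   + fibre_clip N True (snd (snd w)) / fibre_mass True (snd (snd w)) - clip_mean N"

lemma recentred_on_arm: "recentred N (fst x, a, snd x)
    = clip N a x - fibre_clip N a (snd x) / fibre_mass a (snd x)
    + fibre_clip N True (snd x) / fibre_mass True (snd x) - clip_mean N"
  by (simp add: recentred_def)

lemma clip_bound: "0 \<le> N \<Longrightarrow> \<bar>clip N a x\<bar> \<le> N" by (auto simp: clip_def)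

lemma abs_clip_mult_q0_le:
  assumes "0 \<le> N"
  shows "\<bar>clip N a x * qm q0 a x\<bar> \<le> N * qm q0 a x"
proof -
  have "\<bar>clip N a x * qm q0 a x\<bar> = \<bar>clip N a x\<bar> * qm q0 a x" by (simp add: abs_mult qmarg_nonneg)
  also have "\<dots> \<le> N * qm q0 a x" by (rule mult_right_mono[OF clip_bound[OF assms] qmarg_nonneg])
  finally show ?thesis .
qed

lemma borel_measurable_clip[measurable]: "clip N a \<in> borel_measurable (nu a)"
  unfolding clip_def[abs_def] by measurable

lemma borel_measurable_fibre_mass[measurable]: "fibre_mass a \<in> borel_measurable muZ"
proof -
  have "(\<lambda>x. ennreal (qm q0 a x)) \<in> borel_measurable (nu a)" using borel_measurable_q0[of a]
      by measurable
  from borel_measurable_fibre_nn_integral[OF this] show ?thesis unfolding fibre_mass_def[abs_def]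
      by simp
qed

lemma borel_measurable_fibre_clip[measurable]: "fibre_clip N a \<in> borel_measurable muZ"
proof -
  have "(\<lambda>x. clip N a x * qm q0 a x) \<in> borel_measurable (nu a)" using borel_measurable_q0[of a]
      by measurable
  from borel_measurable_fibre_integral[OF this] show ?thesis unfolding fibre_clip_def[abs_def]
      by simp
qed

lemma measurable_snd_nu[measurable]: "snd \<in> measurable (nu a) muZ"
  by (simp add: nu_eq)

lemma borel_measurable_recentred: "(\<lambda>x. recentred N (fst x, a, snd x)) \<in> borel_measurable (nu a)"
  unfolding recentred_on_arm by measurable

lemma integrable_clip_mult_q0: "0 \<le> N \<Longrightarrow> integrable (nu a) (\<lambda>x. clip N a x * qm q0 a x)"
proof (rule Bochner_Integration.integrable_bound[where f="\<lambda>x. N * qm q0 a x"])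
  assume N: "0 \<le> N"
  show "integrable (nu a) (\<lambda>x. N * qm q0 a x)" using integrable_q0[of a] by simp
  show "(\<lambda>x. clip N a x * qm q0 a x) \<in> borel_measurable (nu a)" using borel_measurable_q0[of a]
      by measurable
  show "AE x in nu a. norm (clip N a x * qm q0 a x) \<le> norm (N * qm q0 a x)"
    using clip_bound[OF N] qmarg_nonneg N by (intro AE_I2) (auto simp: abs_mult intro!: mult_right_mono)
qed

lemma abs_fibre_clip_div_le:
  assumes N: "0 \<le> N"
  shows "\<bar>fibre_clip N a z / fibre_mass a z\<bar> \<le> N"
proof (cases "fibre_mass a z = 0")
  case True
  then show ?thesis using N by simp
next
  case False
  then have fin: "(\<integral>\<^sup>+ y. ennreal (qm q0 a (y, z)) \<partial>muY a) \<noteq> \<infinity>" by (auto simp: fibre_mass_def)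
  have qm': "(\<lambda>y. qm q0 a (y, z)) \<in> borel_measurable (muY a)"
      by (rule measurable_fibre[OF borel_measurable_q0])
  have iq: "integrable (muY a) (\<lambda>y. qm q0 a (y, z))"
    using fin qm' by (intro integrableI_nonneg) (auto simp: qmarg_nonneg less_top)
  have mzv: "fibre_mass a z = (\<integral> y. qm q0 a (y, z) \<partial>muY a)"
    unfolding fibre_mass_def using iq by (subst nn_integral_eq_integral) (auto simp: qmarg_nonneg)
  have mp: "0 < fibre_mass a z" using False by (simp add: fibre_mass_def enn2real_nonneg less_le)
  have tm: "(\<lambda>y. clip N a (y, z)) \<in> borel_measurable (muY a)"
      by (rule measurable_fibre[OF borel_measurable_clip])
  have it: "integrable (muY a) (\<lambda>y. N * qm q0 a (y, z))" using iq by simp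
  have "\<bar>fibre_clip N a z\<bar> \<le> (\<integral> y. N * qm q0 a (y, z) \<partial>muY a)"
    unfolding fibre_clip_def
  proof (rule integral_abs_bound_integral)
    show "integrable (muY a) (\<lambda>y. clip N a (y, z) * qm q0 a (y, z))"
      by (rule Bochner_Integration.integrable_bound[OF it])
         (use tm qm' clip_bound[OF N] qmarg_nonneg N in \<open>auto simp: abs_mult intro!: AE_I2 mult_right_mono\<close>)
    show "integrable (muY a) (\<lambda>y. N * qm q0 a (y, z))" by (rule it)
    show "\<And>y. y \<in> space (muY a) \<Longrightarrow> \<bar>clip N a (y, z) * qm q0 a (y, z)\<bar> \<le> N * qm q0 a (y, z)"
      using abs_clip_mult_q0_le[OF N] by blast
  qed
  also have "\<dots> = N * fibre_mass a z" using mzv by simp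
  finally show ?thesis using mp by (simp add: abs_div pos_divide_le_eq)
qed

lemma abs_clip_mean_le:
  assumes N: "0 \<le> N"
  shows "\<bar>clip_mean N\<bar> \<le> N"
proof -
  have "\<bar>clip_mean N\<bar> \<le> (\<integral> x. N * qm q0 True x \<partial>nu True)"
    unfolding clip_mean_def using integrable_clip_mult_q0[OF N, of True] integrable_q0[of True]
        abs_clip_mult_q0_le[OF N]
    by (intro integral_abs_bound_integral) auto
  also have "\<dots> = N" using integral_q0[of True] by simp
  finally show ?thesis .
qed

lemma abs_recentred_le:
  assumes N: "0 \<le> N"
  shows "\<bar>recentred N w\<bar> \<le> 4 * N"
proof -
  have "\<bar>recentred N w\<bar> \<le> \<bar>clip N (fst (snd w)) (fst w, snd (snd w))\<bar>
      + \<bar>fibre_clip N (fst (snd w)) (snd (snd w)) / fibre_mass (fst (snd w)) (snd (snd w))\<bar>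
      + \<bar>fibre_clip N True (snd (snd w)) / fibre_mass True (snd (snd w))\<bar> + \<bar>clip_mean N\<bar>"
    unfolding recentred_def by linarith
  also have "\<dots> \<le> N + N + N + N"
    using clip_bound[OF N] abs_fibre_clip_div_le[OF N] abs_clip_mean_le[OF N]
        by (intro add_mono) auto
  finally show ?thesis by simp
qed

lemma AE_fibre_mass_eq: "AE z in muZ. fibre_mass a z = (\<integral>y. qm q0 a (y, z) \<partial>muY a)"
  using AE_integrable_fibre[OF integrable_q0[of a]]
  by eventually_elim (simp add: fibre_mass_def nn_integral_eq_integral qmarg_nonneg)

lemma
  fixes F :: "(real^'k) \<Rightarrow> real"
  assumes [measurable]: "F \<in> borel_measurable muZ" and i: "integrable (nu a) (\<lambda>x. F (snd x) * qm q0 a x)"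
  shows integrable_mult_fibre_mass: "integrable muZ (\<lambda>z. F z * fibre_mass a z)"
    and integral_mult_fibre_mass: "(\<integral>x. F (snd x) * qm q0 a x \<partial>nu a)
        = (\<integral>z. F z * fibre_mass a z \<partial>muZ)"
proof -
  have ae: "AE z in muZ. (\<integral>y. F z * qm q0 a (y, z) \<partial>muY a) = F z * fibre_mass a z"
    using AE_fibre_mass_eq[of a] by eventually_elim simp
  have m: "(\<lambda>z. \<integral>y. F z * qm q0 a (y, z) \<partial>muY a) \<in> borel_measurable muZ"
    using borel_measurable_fibre_integral[OF borel_measurable_integrable[OF i]] by simp
  show "integrable muZ (\<lambda>z. F z * fibre_mass a z)"
    using integrable_fibre_integral[OF i] integrable_cong_AE[OF m _ ae] by simp
  show "(\<integral>x. F (snd x) * qm q0 a x \<partial>nu a) = (\<integral>z. F z * fibre_mass a z \<partial>muZ)"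
    using integral_fibre_integral[OF i] integral_cong_AE[OF m _ ae] by simp
qed

definition regular_fibre :: "real \<Rightarrow> (real^'k) \<Rightarrow> bool" where
  "regular_fibre N z \<longleftrightarrow> (\<forall>a. integrable (muY a) (\<lambda>y. qm q0 a (y, z))
      \<and> integrable (muY a) (\<lambda>y. h (y, a, z) * qm q0 a (y, z))
       \<and> integrable (muY a) (\<lambda>y. clip N a (y, z) * qm q0 a (y, z))
       \<and> integrable (muY a) (\<lambda>y. (h (y, a, z))^2 * qm q0 a (y, z)))
     \<and> (\<integral>y. qm q0 True (y, z) \<partial>mu1) = (\<integral>y. qm q0 False (y, z) \<partial>mu0)
     \<and> (\<integral> y. h (y, True, z) * qm q0 True (y, z) \<partial>mu1)
         = (\<integral> y. h (y, False, z) * qm q0 False (y, z) \<partial>mu0)"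

lemma AE_regular_fibre: "0 \<le> N \<Longrightarrow> AE z in muZ. regular_fibre N z"
proof -
  assume N: "0 \<le> N"
  have s1: "AE z in muZ. integrable (muY a) (\<lambda>y. h (y, a, z) * qm q0 a (y, z))" for a
    using AE_integrable_fibre[OF integrable_h[of a]] by simp
  have s2: "AE z in muZ. integrable (muY a) (\<lambda>y. clip N a (y, z) * qm q0 a (y, z))" for a
    using AE_integrable_fibre[OF integrable_clip_mult_q0[OF N, of a]] by simp
  have s3: "AE z in muZ. integrable (muY a) (\<lambda>y. (h (y, a, z))^2 * qm q0 a (y, z))" for a
    using AE_integrable_fibre[OF integrable_h_sq[of a]] by simp
  show ?thesis using Qfam_AE_fibre_integrals[OF q0_Qfam] h_compatible s1[of True] s1[of False]
      s2[of True] s2[of False]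
    s3[of True] s3[of False]
  proof eventually_elim
    case (elim z)
    have "\<forall>a. integrable (muY a) (\<lambda>y. qm q0 a (y, z))
        \<and> integrable (muY a) (\<lambda>y. h (y, a, z) * qm q0 a (y, z))
       \<and> integrable (muY a) (\<lambda>y. clip N a (y, z) * qm q0 a (y, z))
       \<and> integrable (muY a) (\<lambda>y. (h (y, a, z))^2 * qm q0 a (y, z))"
    proof
      fix a show "integrable (muY a) (\<lambda>y. qm q0 a (y, z))
          \<and> integrable (muY a) (\<lambda>y. h (y, a, z) * qm q0 a (y, z))
       \<and> integrable (muY a) (\<lambda>y. clip N a (y, z) * qm q0 a (y, z))
       \<and> integrable (muY a) (\<lambda>y. (h (y, a, z))^2 * qm q0 a (y, z))"
        using elim by (cases a) (simp_all add: muY_simps)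
    qed
    then show ?case using elim unfolding regular_fibre_def by blast
  qed
qed

lemma regular_fibre_mass:
  assumes g: "regular_fibre N z"
  shows "fibre_mass a z = (\<integral>y. qm q0 a (y, z) \<partial>muY a)" "fibre_mass True z = fibre_mass False z"
proof -
  have "fibre_mass b z = (\<integral>y. qm q0 b (y, z) \<partial>muY b)" for b
    using g unfolding fibre_mass_def regular_fibre_def
        by (subst nn_integral_eq_integral) (auto simp: qmarg_nonneg)
  then show "fibre_mass a z = (\<integral>y. qm q0 a (y, z) \<partial>muY a)" "fibre_mass True z = fibre_mass False z"
    using g by (auto simp: regular_fibre_def muY_simps)
qed

lemma regular_fibre_cancel:
  assumes g: "regular_fibre N z"
  shows "fibre_clip N a z / fibre_mass a z * fibre_mass a z = fibre_clip N a z"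
proof (cases "fibre_mass a z = 0")
  case False
  then show ?thesis by simp
next
  case True
  have iq: "integrable (muY a) (\<lambda>y. qm q0 a (y, z))" using g by (simp add: regular_fibre_def)
  have "(\<integral>y. qm q0 a (y, z) \<partial>muY a) = 0" using True regular_fibre_mass(1)[OF g, of a] by simp
  then have "AE y in muY a. qm q0 a (y, z) = 0"
    using iq by (subst (asm) integral_nonneg_eq_0_iff_AE) (auto simp: qmarg_nonneg)
  moreover have "(\<lambda>y. clip N a (y, z) * qm q0 a (y, z)) \<in> borel_measurable (muY a)"
    by (intro borel_measurable_times measurable_fibre[OF borel_measurable_clip]
        measurable_fibre[OF borel_measurable_q0])
  ultimately have "fibre_clip N a z = (\<integral>y. 0 \<partial>muY a)"
    unfolding fibre_clip_def by (intro integral_cong_AE) (auto elim!: eventually_mono)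
  then show ?thesis using True by simp
qed

lemma regular_fibre_integral_recentred:
  assumes N: "0 \<le> N" and g: "regular_fibre N z"
  shows "(\<integral>y. recentred N (y, a, z) * qm q0 a (y, z) \<partial>muY a)
      = fibre_clip N True z - clip_mean N * fibre_mass True z"
proof -
  have e: "(\<lambda>y. recentred N (y, a, z) * qm q0 a (y, z)) = (\<lambda>y. clip N a (y, z) * qm q0 a (y, z)
      + (fibre_clip N True z / fibre_mass True z - fibre_clip N a z / fibre_mass a z - clip_mean N)
          * qm q0 a (y, z))"
    by (auto simp: recentred_def algebra_simps)
  have it: "integrable (muY a) (\<lambda>y. clip N a (y, z) * qm q0 a (y, z))"
    and iq: "integrable (muY a) (\<lambda>y. qm q0 a (y, z))" using g by (auto simp: regular_fibre_def)
  have "(\<integral>y. recentred N (y, a, z) * qm q0 a (y, z) \<partial>muY a)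
      = fibre_clip N a z + (fibre_clip N True z / fibre_mass True z - fibre_clip N a z / fibre_mass a z - clip_mean N) * fibre_mass a z"
    unfolding e using it iq regular_fibre_mass(1)[OF g, of a] by (simp add: fibre_clip_def)
  also have "\<dots> = fibre_clip N a z + fibre_clip N True z / fibre_mass True z * fibre_mass a z
      - fibre_clip N a z / fibre_mass a z * fibre_mass a z - clip_mean N * fibre_mass a z"
    by (simp add: algebra_simps)
  also have "\<dots> = fibre_clip N True z - clip_mean N * fibre_mass True z"
    using regular_fibre_cancel[OF g, of a]
        regular_fibre_cancel[OF g, of True] regular_fibre_mass(2)[OF g] by (cases a) auto
  finally show ?thesis .
qed

lemma recentred_compatible:
  assumes N: "0 \<le> N"
  shows "AE z in muZ. (\<integral> y. recentred N (y, True, z) * qm q0 True (y, z) \<partial>mu1)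
                   = (\<integral> y. recentred N (y, False, z) * qm q0 False (y, z) \<partial>mu0)"
  using AE_regular_fibre[OF N]
proof eventually_elim
  case (elim z)
  show ?case using regular_fibre_integral_recentred[OF N elim, of True]
      regular_fibre_integral_recentred[OF N elim, of False] by (simp add: muY_simps)
qed

lemma integrable_recentred_mult_q0:
  assumes N: "0 \<le> N"
  shows "integrable (nu a) (\<lambda>x. recentred N (fst x, a, snd x) * qm q0 a x)"
proof (rule Bochner_Integration.integrable_bound[where f="\<lambda>x. 4 * N * qm q0 a x"])
  show "integrable (nu a) (\<lambda>x. 4 * N * qm q0 a x)" using integrable_q0[of a] by simp
  show "(\<lambda>x. recentred N (fst x, a, snd x) * qm q0 a x) \<in> borel_measurable (nu a)"
    using borel_measurable_recentred[of N a] borel_measurable_q0[of a] by measurable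
  show "AE x in nu a. norm (recentred N (fst x, a, snd x) * qm q0 a x) \<le> norm (4 * N * qm q0 a x)"
  proof (intro AE_I2)
    fix x
    have "\<bar>recentred N (fst x, a, snd x) * qm q0 a x\<bar>
        = \<bar>recentred N (fst x, a, snd x)\<bar> * qm q0 a x" by (simp add: abs_mult qmarg_nonneg)
    also have "\<dots> \<le> 4 * N * qm q0 a x" by (rule mult_right_mono[OF abs_recentred_le[OF N] qmarg_nonneg])
    finally show "norm (recentred N (fst x, a, snd x) * qm q0 a x) \<le> norm (4 * N * qm q0 a x)"
      using N qmarg_nonneg[of q0 a x] by simp
  qed
qed

lemma recentred_centered:
  assumes N: "0 \<le> N"
  shows "(\<integral>x. recentred N (fst x, a, snd x) * qm q0 a x \<partial>nu a) = 0"
proof -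
  have mass: "integrable muZ (fibre_mass True)" "(\<integral>z. fibre_mass True z \<partial>muZ) = 1"
    using integrable_mult_fibre_mass[of "\<lambda>_. 1" True] integral_mult_fibre_mass[of "\<lambda>_. 1" True]
      integrable_q0[of True] integral_q0[of True] by simp_all
  have clip: "integrable muZ (fibre_clip N True)" "(\<integral>z. fibre_clip N True z \<partial>muZ) = clip_mean N"
    using integrable_fibre_integral[OF integrable_clip_mult_q0[OF N, of True]]
      integral_fibre_integral[OF integrable_clip_mult_q0[OF N, of True]]
    by (simp_all add: fibre_clip_def[abs_def] clip_mean_def)
  have "(\<integral>x. recentred N (fst x, a, snd x) * qm q0 a x \<partial>nu a)
      = (\<integral>z. (\<integral>y. recentred N (y, a, z) * qm q0 a (y, z) \<partial>muY a) \<partial>muZ)"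
    using integral_fibre_integral[OF integrable_recentred_mult_q0[OF N, of a]] by simp
  also have "\<dots> = (\<integral>z. fibre_clip N True z - clip_mean N * fibre_mass True z \<partial>muZ)"
  proof (rule integral_cong_AE)
    have "(\<lambda>x. recentred N (fst x, a, snd x) * qm q0 a x) \<in> borel_measurable (nu a)"
      using borel_measurable_recentred[of N a] by measurable
    from borel_measurable_fibre_integral[OF this]
    show "(\<lambda>z. \<integral>y. recentred N (y, a, z) * qm q0 a (y, z) \<partial>muY a) \<in> borel_measurable muZ" by simp
    show "AE z in muZ. (\<integral>y. recentred N (y, a, z) * qm q0 a (y, z) \<partial>muY a)
        = fibre_clip N True z - clip_mean N * fibre_mass True z"
      using AE_regular_fibre[OF N] by
          (auto elim!: eventually_mono simp: regular_fibre_integral_recentred[OF N])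
  qed simp
  also have "\<dots> = 0" using mass clip by simp
  finally show ?thesis .
qed

lemma clip_diff_sq_le_sq: "0 \<le> N \<Longrightarrow> (h (fst x, a, snd x) - clip N a x)^2 \<le> (h (fst x, a, snd x))^2"
  unfolding clip_def by (rule clip_diff_sq_le)

lemma integrable_clip_err:
  assumes N: "0 \<le> N"
  shows "integrable (nu a) (\<lambda>x. (h (fst x, a, snd x) - clip N a x)^2 * qm q0 a x)"
proof (rule Bochner_Integration.integrable_bound[OF integrable_h_sq[of a]])
  show "(\<lambda>x. (h (fst x, a, snd x) - clip N a x)^2 * qm q0 a x) \<in> borel_measurable (nu a)"
    using borel_measurable_q0[of a] by measurable
  show "AE x in nu a. norm ((h (fst x, a, snd x) - clip N a x)^2 * qm q0 a x)
      \<le> norm ((h (fst x, a, snd x))^2 * qm q0 a x)"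
    by (intro AE_I2) (unfold real_norm_def, intro abs_sq_mult_mono clip_diff_sq_le_sq[OF N] qmarg_nonneg)
qed

definition clip_err :: "real \<Rightarrow> bool \<Rightarrow> real" where
  "clip_err N a = (\<integral>x. (h (fst x, a, snd x) - clip N a x)^2 * qm q0 a x \<partial>nu a)"

lemma clip_err_nonneg: "0 \<le> clip_err N a"
  unfolding clip_err_def by (intro Bochner_Integration.integral_nonneg
      mult_nonneg_nonneg zero_le_power2 qmarg_nonneg)

lemma clip_mean_sq_le:
  assumes N: "0 \<le> N"
  shows "(clip_mean N)^2 \<le> clip_err N True"
proof -
  have "clip_mean N = (\<integral>x. clip N True x * qm q0 True x \<partial>nu True)
      - (\<integral>x. h (fst x, True, snd x) * qm q0 True x \<partial>nu True)"
    using h_centered[of True] by (simp add: clip_mean_def)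
  also have "\<dots> = (\<integral>x. (clip N True x - h (fst x, True, snd x)) * qm q0 True x \<partial>nu True)"
    using integrable_clip_mult_q0[OF N, of True] integrable_h[of True]
        by (simp add: left_diff_distrib)
  finally have k: "clip_mean N = (\<integral>x. (clip N True x - h (fst x, True, snd x)) * qm q0 True x \<partial>nu True)" .
  have fm: "(\<lambda>x. clip N True x - h (fst x, True, snd x)) \<in> borel_measurable (nu True)" by measurable
  have i2: "integrable (nu True) (\<lambda>x. (clip N True x - h (fst x, True, snd x))^2 * qm q0 True x)"
    using integrable_clip_err[OF N, of True] by (simp add: power2_commute)
  have "(clip_mean N)^2 \<le> (\<integral>x. (clip N True x - h (fst x, True, snd x))^2 * qm q0 True x \<partial>nu True)
      * (\<integral>x. qm q0 True x \<partial>nu True)"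
    unfolding k by (rule weighted_Cauchy_Schwarz(2)[OF fm qmarg_nonneg integrable_q0 i2])
  then show ?thesis using integral_q0[of True] by (simp add: clip_err_def power2_commute)
qed

definition fibre_clip_err :: "real \<Rightarrow> bool \<Rightarrow> (real^'k) \<Rightarrow> real" where
  "fibre_clip_err N a z = (\<integral>y. (h (y, a, z) - clip N a (y, z))^2 * qm q0 a (y, z) \<partial>muY a)"

lemma fibre_clip_err_integral: "0 \<le> N \<Longrightarrow> (\<integral>z. fibre_clip_err N a z \<partial>muZ) = clip_err N a" "0 \<le> N
    \<Longrightarrow> integrable muZ (fibre_clip_err N a)"
  using integrable_fibre_integral[OF integrable_clip_err, of N a]
      integral_fibre_integral[OF integrable_clip_err, of N a]
  by (simp_all add: fibre_clip_err_def[abs_def] clip_err_def)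

lemma regular_fibre_clip_deviation_sq_le:
  assumes N: "0 \<le> N" and g: "regular_fibre N z"
  shows "(\<integral>y. (clip N b (y, z) - h (y, b, z)) * qm q0 b (y, z) \<partial>muY b)^2
      \<le> fibre_clip_err N b z * fibre_mass True z"
proof -
  have "(\<lambda>y. h (y, b, z)) \<in> borel_measurable (muY b)"
      using measurable_fibre[OF h_measurable[of b], of z] by simp
  then have fm: "(\<lambda>y. clip N b (y, z) - h (y, b, z)) \<in> borel_measurable (muY b)"
    using measurable_fibre[OF borel_measurable_clip[of N b], of z] by measurable
  have iq: "integrable (muY b) (\<lambda>y. qm q0 b (y, z))" using g by (simp add: regular_fibre_def)
  have i2: "integrable (muY b) (\<lambda>y. (clip N b (y, z) - h (y, b, z))^2 * qm q0 b (y, z))"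
  proof (rule Bochner_Integration.integrable_bound[where f="\<lambda>y. (h (y, b, z))^2 * qm q0 b (y, z)"])
    show "integrable (muY b) (\<lambda>y. (h (y, b, z))^2 * qm q0 b (y, z))" using g
        by (simp add: regular_fibre_def)
    show "(\<lambda>y. (clip N b (y, z) - h (y, b, z))^2 * qm q0 b (y, z)) \<in> borel_measurable (muY b)"
      using fm measurable_fibre[OF borel_measurable_q0[of b], of z] by measurable
    show "AE y in muY b. norm ((clip N b (y, z) - h (y, b, z))^2 * qm q0 b (y, z))
        \<le> norm ((h (y, b, z))^2 * qm q0 b (y, z))"
    proof (intro AE_I2)
      fix y
      have "(clip N b (y, z) - h (y, b, z))^2 \<le> (h (y, b, z))^2"
        using clip_diff_sq_le_sq[OF N, where x="(y, z)" and a=b] by (simp add: power2_commute)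
      then show "norm ((clip N b (y, z) - h (y, b, z))^2 * qm q0 b (y, z))
          \<le> norm ((h (y, b, z))^2 * qm q0 b (y, z))"
        unfolding real_norm_def by (rule abs_sq_mult_mono[OF _ qmarg_nonneg])
    qed
  qed
  have "(\<integral>y. (clip N b (y, z) - h (y, b, z)) * qm q0 b (y, z) \<partial>muY b)^2
      \<le> (\<integral>y. (clip N b (y, z) - h (y, b, z))^2 * qm q0 b (y, z) \<partial>muY b) * (\<integral>y. qm q0 b (y, z) \<partial>muY b)"
    by (rule weighted_Cauchy_Schwarz(2)[OF fm qmarg_nonneg iq i2])
  also have "(\<integral>y. qm q0 b (y, z) \<partial>muY b) = fibre_mass True z"
    using regular_fibre_mass(1)[OF g, of b] regular_fibre_mass(2)[OF g] by (cases b) auto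
  also have "(\<integral>y. (clip N b (y, z) - h (y, b, z))^2 * qm q0 b (y, z) \<partial>muY b) = fibre_clip_err N b z"
    by (simp add: fibre_clip_err_def power2_commute)
  finally show ?thesis .
qed

lemma regular_fibre_gap_sq_le:
  assumes N: "0 \<le> N" and g: "regular_fibre N z"
  shows "(fibre_clip N a z / fibre_mass a z - fibre_clip N True z / fibre_mass True z)^2 * fibre_mass a z
    \<le> 2 * fibre_clip_err N a z + 2 * fibre_clip_err N True z"
proof -
  define m where "m = fibre_mass True z"
  have mam: "fibre_mass a z = m" using regular_fibre_mass(2)[OF g] by (cases a) (auto simp: m_def)
  have m0: "0 \<le> m" by (simp add: m_def fibre_mass_def enn2real_nonneg)
  have ez0: "0 \<le> fibre_clip_err N b z" for b
    unfolding fibre_clip_err_def by (intro Bochner_Integration.integral_nonneg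
        mult_nonneg_nonneg zero_le_power2 qmarg_nonneg)
  define dl where "dl b = (\<integral>y. (clip N b (y, z) - h (y, b, z)) * qm q0 b (y, z) \<partial>muY b)" for b
  have cs: "(dl b)^2 \<le> fibre_clip_err N b z * m" for b
    unfolding dl_def m_def by (rule regular_fibre_clip_deviation_sq_le[OF N g])
  txt \<open>Condition (b) makes the fibre means of \<open>h\<close> agree, so only the clipping errors remain.\<close>
  define H where "H = (\<integral> y. h (y, True, z) * qm q0 True (y, z) \<partial>mu1)"
  have cH: "fibre_clip N b z = dl b + H" for b
  proof -
    have "integrable (muY b) (\<lambda>y. h (y, b, z) * qm q0 b (y, z))"
      "integrable (muY b) (\<lambda>y. clip N b (y, z) * qm q0 b (y, z))" using g
          by (auto simp: regular_fibre_def)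
    then have "dl b = fibre_clip N b z - (\<integral> y. h (y, b, z) * qm q0 b (y, z) \<partial>muY b)"
      unfolding dl_def fibre_clip_def by (simp add: left_diff_distrib)
    moreover have "(\<integral> y. h (y, b, z) * qm q0 b (y, z) \<partial>muY b) = H"
      using g by (cases b) (auto simp: regular_fibre_def H_def muY_simps)
    ultimately show ?thesis by simp
  qed
  show ?thesis
  proof (cases "m = 0")
    case True
    then show ?thesis using mam ez0[of a] ez0[of True] by simp
  next
    case False
    then have mp: "0 < m" using m0 by simp
    have "(fibre_clip N a z / fibre_mass a z - fibre_clip N True z / fibre_mass True z)^2 * fibre_mass a z
        = (dl a - dl True)^2 / m"
      unfolding mam m_def[symmetric] cH using mp by (simp add: power2_eq_square field_simps)
    also have "\<dots> \<le> (2 * (dl a)^2 + 2 * (dl True)^2) / m"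
    proof (intro divide_right_mono)
      have "0 \<le> (dl a + dl True)^2" by simp
      then show "(dl a - dl True)^2 \<le> 2 * (dl a)^2 + 2 * (dl True)^2"
          by (simp add: power2_eq_square algebra_simps)
    qed (use m0 in simp)
    also have "\<dots> \<le> (2 * (fibre_clip_err N a z * m) + 2 * (fibre_clip_err N True z * m)) / m"
      using cs[of a] cs[of True] mp by (intro divide_right_mono add_mono mult_left_mono) auto
    also have "\<dots> = 2 * fibre_clip_err N a z + 2 * fibre_clip_err N True z" using mp
        by (simp add: field_simps)
    finally show ?thesis .
  qed
qed

definition fibre_gap :: "real \<Rightarrow> bool \<Rightarrow> (real^'k) \<Rightarrow> real" where
  "fibre_gap N a z = fibre_clip N a z / fibre_mass a z - fibre_clip N True z / fibre_mass True z"

lemma abs_fibre_gap_le: "0 \<le> N \<Longrightarrow> \<bar>fibre_gap N a z\<bar> \<le> 2 * N"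
  unfolding fibre_gap_def using abs_fibre_clip_div_le[of N a z] abs_fibre_clip_div_le[of N True z]
      by linarith

lemma borel_measurable_fibre_gap[measurable]: "fibre_gap N a \<in> borel_measurable muZ"
  unfolding fibre_gap_def[abs_def] by measurable

lemma integrable_fibre_gap_sq:
  assumes N: "0 \<le> N"
  shows "integrable (nu a) (\<lambda>x. (fibre_gap N a (snd x))^2 * qm q0 a x)"
proof (rule Bochner_Integration.integrable_bound[where f="\<lambda>x. (2 * N)^2 * qm q0 a x"])
  show "integrable (nu a) (\<lambda>x. (2 * N)^2 * qm q0 a x)" using integrable_q0[of a] by simp
  show "(\<lambda>x. (fibre_gap N a (snd x))^2 * qm q0 a x) \<in> borel_measurable (nu a)" by measurable
  have "(fibre_gap N a z)^2 \<le> (2 * N)^2" for z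
    using abs_fibre_gap_le[OF N, of a z] by (metis abs_ge_zero power2_abs power_mono)
  then show "AE x in nu a. norm ((fibre_gap N a (snd x))^2 * qm q0 a x)
      \<le> norm ((2 * N)^2 * qm q0 a x)"
    by (intro AE_I2) (simp only: real_norm_def abs_sq_mult_mono qmarg_nonneg)
qed

lemma integral_fibre_gap_sq_le:
  assumes N: "0 \<le> N"
  shows "(\<integral>x. (fibre_gap N a (snd x))^2 * qm q0 a x \<partial>nu a) \<le> 2 * clip_err N a + 2 * clip_err N True"
proof -
  note i = integrable_fibre_gap_sq[OF N, of a]
  have "(\<integral>x. (fibre_gap N a (snd x))^2 * qm q0 a x \<partial>nu a)
      = (\<integral>z. (fibre_gap N a z)^2 * fibre_mass a z \<partial>muZ)"
    by (rule integral_mult_fibre_mass[OF _ i]) measurable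
  also have "\<dots> \<le> (\<integral>z. 2 * fibre_clip_err N a z + 2 * fibre_clip_err N True z \<partial>muZ)"
  proof (rule integral_mono_AE)
    show "integrable muZ (\<lambda>z. (fibre_gap N a z)^2 * fibre_mass a z)"
      by (rule integrable_mult_fibre_mass[OF _ i]) measurable
    show "integrable muZ (\<lambda>z. 2 * fibre_clip_err N a z + 2 * fibre_clip_err N True z)"
      using fibre_clip_err_integral(2)[OF N] by simp
    show "AE z in muZ. (fibre_gap N a z)^2 * fibre_mass a z \<le> 2 * fibre_clip_err N a z
        + 2 * fibre_clip_err N True z"
      using AE_regular_fibre[OF N] by eventually_elim (simp add: regular_fibre_gap_sq_le[OF N] fibre_gap_def)
  qed
  also have "\<dots> = 2 * clip_err N a + 2 * clip_err N True" using fibre_clip_err_integral[OF N] by simp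
  finally show ?thesis .
qed

lemma Parm_recentred_error_le:
  assumes N: "0 \<le> N"
  shows "Parm a (\<lambda>w. (h w - recentred N w)^2) \<le> ennreal (9 * clip_err N a + 9 * clip_err N True)"
proof -
  define B where "B x = 3 * ((h (fst x, a, snd x) - clip N a x)^2 * qm q0 a x)
      + 3 * ((fibre_gap N a (snd x))^2 * qm q0 a x)
     + 3 * (clip_mean N)^2 * qm q0 a x" for x
  have iB: "integrable (nu a) B" unfolding B_def using integrable_clip_err[OF N, of a]
      integrable_fibre_gap_sq[OF N, of a] integrable_q0[of a] by simp
  have B0: "0 \<le> B x" for x unfolding B_def by (intro add_nonneg_nonneg mult_nonneg_nonneg)
      (auto simp: qmarg_nonneg)
  have intB: "(\<integral>x. B x \<partial>nu a) = 3 * clip_err N a + 3 * (\<integral>x. (fibre_gap N a (snd x))^2 * qm q0 a x \<partial>nu a)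
      + 3 * (clip_mean N)^2"
    unfolding B_def clip_err_def using integrable_clip_err[OF N, of a]
        integrable_fibre_gap_sq[OF N, of a] integrable_q0 integral_q0[of a] by simp
  have pt: "(h (fst x, a, snd x) - recentred N (fst x, a, snd x))^2 * qm q0 a x \<le> B x" for x
  proof -
    have e: "h (fst x, a, snd x) - recentred N (fst x, a, snd x)
        = (h (fst x, a, snd x) - clip N a x) + fibre_gap N a (snd x) + clip_mean N"
      by (simp add: recentred_on_arm fibre_gap_def)
    have "(h (fst x, a, snd x) - recentred N (fst x, a, snd x))^2
        \<le> 3 * ((h (fst x, a, snd x) - clip N a x)^2 + (fibre_gap N a (snd x))^2 + (clip_mean N)^2)"
      unfolding e by (rule sq_sum3_le)
    then have "(h (fst x, a, snd x) - recentred N (fst x, a, snd x))^2 * qm q0 a x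
        \<le> 3 * ((h (fst x, a, snd x) - clip N a x)^2 + (fibre_gap N a (snd x))^2
            + (clip_mean N)^2) * qm q0 a x"
      by (rule mult_right_mono[OF _ qmarg_nonneg])
    then show ?thesis by (simp add: B_def algebra_simps)
  qed
  have "Parm a (\<lambda>w. (h w - recentred N w)^2)
      \<le> (\<integral>\<^sup>+ x. ennreal ((h (fst x, a, snd x) - recentred N (fst x, a, snd x))^2 * qm q0 a x) \<partial>nu a)"
    by (rule Parm_le) simp
  also have "\<dots> \<le> (\<integral>\<^sup>+ x. ennreal (B x) \<partial>nu a)" by (intro nn_integral_mono ennreal_leI pt)
  also have "\<dots> = ennreal (\<integral>x. B x \<partial>nu a)" using iB B0 by (intro nn_integral_eq_integral) auto
  also have "\<dots> \<le> ennreal (9 * clip_err N a + 9 * clip_err N True)"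
  proof (intro ennreal_leI)
    have "(\<integral>x. B x \<partial>nu a) \<le> 3 * clip_err N a + 3 * (2 * clip_err N a + 2 * clip_err N True)
        + 3 * clip_err N True"
      unfolding intB by (intro add_mono order_refl mult_left_mono integral_fibre_gap_sq_le[OF N]
          clip_mean_sq_le[OF N]) simp_all
    then show "(\<integral>x. B x \<partial>nu a) \<le> 9 * clip_err N a + 9 * clip_err N True" by simp
  qed
  finally show ?thesis .
qed

lemma Pnn_recentred_error_le:
  assumes N: "0 \<le> N"
  shows "Pnn0 (\<lambda>w. (h w - recentred N w)^2) \<le> ennreal (27 * (clip_err N False + clip_err N True))"
proof -
  have "Pnn0 (\<lambda>w. (h w - recentred N w)^2)
      \<le> ennreal (9 * clip_err N False + 9 * clip_err N True) + ennreal (9 * clip_err N True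
          + 9 * clip_err N True)"
    unfolding Pnn_eq_Parm by (intro add_mono Parm_recentred_error_le[OF N])
  also have "\<dots> = ennreal (9 * clip_err N False + 27 * clip_err N True)"
    using clip_err_nonneg[of N False] clip_err_nonneg[of N True]
        by (simp add: ennreal_plus[symmetric] del: ennreal_plus)
  also have "\<dots> \<le> ennreal (27 * (clip_err N False + clip_err N True))"
    using clip_err_nonneg[of N False] by (intro ennreal_leI) simp
  finally show ?thesis .
qed

lemma clip_err_tendsto_0: "(\<lambda>n. clip_err (real n) a) \<longlonglongrightarrow> 0"
proof -
  have "(\<lambda>n. \<integral>x. (h (fst x, a, snd x) - clip (real n) a x)^2 * qm q0 a x \<partial>nu a) \<longlonglongrightarrow> (\<integral>x. 0 \<partial>nu a)"
  proof (rule integral_dominated_convergence[where w="\<lambda>x. (h (fst x, a, snd x))^2 * qm q0 a x"])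
    show "(\<lambda>x. 0::real) \<in> borel_measurable (nu a)" by simp
    show "(\<lambda>x. (h (fst x, a, snd x) - clip (real n) a x)^2 * qm q0 a x) \<in> borel_measurable (nu a)" for n
      using borel_measurable_q0[of a] by measurable
    show "integrable (nu a) (\<lambda>x. (h (fst x, a, snd x))^2 * qm q0 a x)" by (rule integrable_h_sq)
    show "AE x in nu a. (\<lambda>n. (h (fst x, a, snd x) - clip (real n) a x)^2 * qm q0 a x) \<longlonglongrightarrow> 0"
    proof (intro AE_I2)
      fix x
      obtain n0 :: nat where n0: "\<bar>h (fst x, a, snd x)\<bar> \<le> real n0" using real_arch_simple by blast
      have "\<forall>n\<ge>n0. (h (fst x, a, snd x) - clip (real n) a x)^2 * qm q0 a x = 0"
      proof (intro allI impI)
        fix n assume "n \<ge> n0"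
        then have "\<bar>h (fst x, a, snd x)\<bar> \<le> real n" using n0 by linarith
        then have "clip (real n) a x = h (fst x, a, snd x)" by (auto simp: clip_def)
        then show "(h (fst x, a, snd x) - clip (real n) a x)^2 * qm q0 a x = 0" by simp
      qed
      then have "eventually (\<lambda>n. (h (fst x, a, snd x) - clip (real n) a x)^2 * qm q0 a x
          = 0) sequentially"
        using eventually_sequentially by blast
      then show "(\<lambda>n. (h (fst x, a, snd x) - clip (real n) a x)^2 * qm q0 a x) \<longlonglongrightarrow> 0"
        by (rule tendsto_eventually)
    qed
    show "AE x in nu a. norm ((h (fst x, a, snd x) - clip (real n) a x)^2 * qm q0 a x)
        \<le> (h (fst x, a, snd x))^2 * qm q0 a x" for n
    proof (intro AE_I2)
      fix x
      have "\<bar>(h (fst x, a, snd x) - clip (real n) a x)^2 * qm q0 a x\<bar>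
          \<le> \<bar>(h (fst x, a, snd x))^2 * qm q0 a x\<bar>"
        by (rule abs_sq_mult_mono[OF clip_diff_sq_le_sq qmarg_nonneg]) simp
      then show "norm ((h (fst x, a, snd x) - clip (real n) a x)^2 * qm q0 a x)
          \<le> (h (fst x, a, snd x))^2 * qm q0 a x"
        using qmarg_nonneg[of q0 a x] by simp
    qed
  qed
  then show ?thesis by (simp add: clip_err_def)
qed

lemma recentred_approx:
  assumes ep: "e > 0"
  shows "\<exists>N>0. Pnn0 (\<lambda>w. (h w - recentred N w)^2) < ennreal e"
proof -
  have "(\<lambda>n. 27 * (clip_err (real n) False + clip_err (real n) True)) \<longlonglongrightarrow> 27 * (0 + 0)"
    by (intro tendsto_intros clip_err_tendsto_0)
  then have "eventually (\<lambda>n. 27 * (clip_err (real n) False + clip_err (real n) True)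
      < e) sequentially"
    using ep by (intro order_tendstoD(2)) auto
  then obtain n0 where n0: "\<forall>n\<ge>n0. 27 * (clip_err (real n) False + clip_err (real n) True) < e"
    unfolding eventually_sequentially by blast
  define n where "n = Suc n0"
  have np: "real n > 0" by (simp add: n_def)
  have "Pnn0 (\<lambda>w. (h w - recentred (real n) w)^2) \<le> ennreal (27 * (clip_err (real n) False
      + clip_err (real n) True))"
    using np by (intro Pnn_recentred_error_le) simp
  also have "\<dots> < ennreal e"
    using n0[rule_format, of n] clip_err_nonneg[of "real n" False] clip_err_nonneg[of "real n" True] ep
    by (subst ennreal_less_iff) (auto simp: n_def)
  finally show ?thesis using np by blast
qed

end

section \<open>The tangent space\<close>

context stratified_design
begin

lemma scores_subset_centered_compatible: "scores mu0 mu1 muZ ppi S q0 \<subseteq> centered_compatible"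
  unfolding scores_def using score_in_centered_compatible by blast

lemma tangent_space_subset: "tangent_space mu0 mu1 muZ ppi S q0 \<subseteq> centered_compatible"
proof
  fix h assume h: "h \<in> tangent_space mu0 mu1 muZ ppi S q0"
  show "h \<in> centered_compatible"
  proof (rule centered_compatible_closed)
    show "h \<in> L2P0" using h by (simp add: tangent_space_def)
    fix e :: real assume "e > 0"
    then obtain g where "g \<in> lin_span (scores mu0 mu1 muZ ppi S q0)"
      and "Pnn0 (\<lambda>w. (h w - g w)^2) < ennreal e"
      using h by (auto simp: tangent_space_def)
    then show "\<exists>g\<in>centered_compatible. Pnn0 (\<lambda>w. (h w - g w)^2) < ennreal e"
      using lin_span_subset_centered_compatible[OF scores_subset_centered_compatible] by blast
  qed
qed

text \<open>A direction vanishing in \<open>L\<^sub>2(P\<^sub>0)\<close> gives no identifiable submodel, so it is matched by the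
  zero function instead of a score.\<close>

lemma bounded_direction_in_score_span:
  assumes g_meas: "\<And>a. (\<lambda>x. g (fst x, a, snd x)) \<in> borel_measurable (nu a)"
    and g_bd: "\<And>w. \<bar>g w\<bar> \<le> C" and C: "0 < C"
    and g_cen: "\<And>a. (\<integral>x. g (fst x, a, snd x) * qm q0 a x \<partial>nu a) = 0"
    and g_comp: "AE z in muZ. (\<integral> y. g (y, True, z) * qm q0 True (y, z) \<partial>mu1)
                   = (\<integral> y. g (y, False, z) * qm q0 False (y, z) \<partial>mu0)"
  obtains s where "s \<in> lin_span (scores mu0 mu1 muZ ppi S q0)"
    "\<And>a. AE x in nu a. qm q0 a x \<noteq> 0 \<longrightarrow> s (fst x, a, snd x) = g (fst x, a, snd x)"
proof (cases "Pnn0 (\<lambda>w. (g w)^2) = 0")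
  case True
  have "AE x in nu a. qm q0 a x \<noteq> 0 \<longrightarrow> 0 = g (fst x, a, snd x)" for a
  proof -
    have "Parm a (\<lambda>w. (g w)^2) = 0" using True by (cases a) (simp_all add: Pnn_eq_Parm)
    then have "AE x in nu a. ennreal ((g (fst x, a, snd x))^2 * qm q0 a x * pwz a (snd x)) = 0"
      unfolding Parm_def using g_meas[of a] borel_measurable_pw_nu[of a]
      by (subst (asm) nn_integral_0_iff_AE) auto
    then show ?thesis
    proof eventually_elim
      case (elim x)
      have "0 \<le> (g (fst x, a, snd x))^2 * qm q0 a x * pwz a (snd x)"
        using pw_pos[of a "snd x"] qmarg_nonneg[of q0 a x] by simp
      then have "(g (fst x, a, snd x))^2 * qm q0 a x * pwz a (snd x) = 0"
        using elim by (simp add: ennreal_eq_0_iff)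
      then show ?case using pw_pos[of a "snd x"] by auto
    qed
  qed
  then show thesis using that[OF lin_span_zero] by blast
next
  case False
  interpret bounded_direction mu0 mu1 muZ S nS ppi q0 g C
    using g_meas g_bd C g_cen g_comp False by unfold_locales
  have "score mu0 mu1 q0 line_deriv 0 (fst x, a, snd x) = g (fst x, a, snd x)"
    if "qm q0 a x \<noteq> 0" for a x
    using that qmarg_nonneg[of q0 a x] score_line_deriv[of "fst x" a "snd x"] by simp
  then show thesis using that[OF lin_span_base[OF score_line_in_scores]] by blast
qed

end

context tangent_candidate
begin

lemma recentred_in_score_span:
  assumes N: "0 < N"
  obtains s where "s \<in> lin_span (scores mu0 mu1 muZ ppi S q0)"
    "\<And>a. AE x in nu a. qm q0 a x \<noteq> 0 \<longrightarrow> s (fst x, a, snd x) = recentred N (fst x, a, snd x)"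
proof (rule bounded_direction_in_score_span[of "recentred N" "4 * N"])
  show "0 < 4 * N" using N by simp
  show "\<bar>recentred N w\<bar> \<le> 4 * N" for w using N by (simp add: abs_recentred_le)
  show "(\<integral>x. recentred N (fst x, a, snd x) * qm q0 a x \<partial>nu a) = 0" for a
    using N by (simp add: recentred_centered)
  show "AE z in muZ. (\<integral>y. recentred N (y, True, z) * qm q0 True (y, z) \<partial>mu1)
      = (\<integral>y. recentred N (y, False, z) * qm q0 False (y, z) \<partial>mu0)"
    using N by (simp add: recentred_compatible)
qed (use that borel_measurable_recentred in auto)

end

context stratified_design
begin

lemma centered_compatible_subset_tangent_space:
  "centered_compatible \<subseteq> tangent_space mu0 mu1 muZ ppi S q0"
proof
  fix h assume h: "h \<in> centered_compatible"
  interpret tangent_candidate mu0 mu1 muZ S nS ppi q0 h by unfold_locales (rule h)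
  have "\<exists>g\<in>lin_span (scores mu0 mu1 muZ ppi S q0). Pnn0 (\<lambda>w. (h w - g w)^2) < ennreal e"
    if e: "e > 0" for e
  proof -
    obtain N where N: "N > 0" and P: "Pnn0 (\<lambda>w. (h w - recentred N w)^2) < ennreal e"
      using recentred_approx[OF e] by blast
    obtain s where s: "s \<in> lin_span (scores mu0 mu1 muZ ppi S q0)"
      and eq: "\<And>a. AE x in nu a.
        qm q0 a x \<noteq> 0 \<longrightarrow> s (fst x, a, snd x) = recentred N (fst x, a, snd x)"
      using recentred_in_score_span[OF N] by blast
    have "Parm a (\<lambda>w. (h w - s w)^2) = Parm a (\<lambda>w. (h w - recentred N w)^2)" for a
      using eq[of a] by (intro Parm_cong_AE_support) (auto elim!: eventually_mono)
    then have "Pnn0 (\<lambda>w. (h w - s w)^2) < ennreal e" using P by (simp add: Pnn_eq_Parm)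
    then show ?thesis using s by blast
  qed
  then show "h \<in> tangent_space mu0 mu1 muZ ppi S q0"
    using centered_compatibleD(1)[OF h] by (simp add: tangent_space_def)
qed

end

theorem lemma4:
  fixes mu0 mu1 :: "real measure" and muZ :: "(real^'k) measure"
    and S :: "(real^'k) \<Rightarrow> nat" and nS :: nat and ppi :: "nat \<Rightarrow> real"
    and q0 :: "real \<times> real \<times> (real^'k) \<Rightarrow> real"
  assumes "sigma_finite_measure mu0" "sigma_finite_measure mu1" "sigma_finite_measure muZ"
    and "sets mu0 = sets borel" "sets mu1 = sets borel" "sets muZ = sets borel"
    and "S \<in> measurable muZ (count_space UNIV)" "\<forall>z. S z \<in> {1..nS}"
    and "\<forall>s\<in>{1..nS}. 0 < ppi s \<and> ppi s < 1"
    and "q0 \<in> Qfam mu0 mu1 muZ"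
  shows "tangent_space mu0 mu1 muZ ppi S q0 =
    {h \<in> L2P mu0 mu1 muZ ppi S q0.
       (\<forall>a. (\<integral> x. h (fst x, a, snd x) * qmarg mu0 mu1 q0 a x \<partial>nuM mu0 mu1 muZ a) = 0) \<and>
       (AE z in muZ. (\<integral> y. h (y, True, z) * qmarg mu0 mu1 q0 True (y, z) \<partial>mu1)
                   = (\<integral> y. h (y, False, z) * qmarg mu0 mu1 q0 False (y, z) \<partial>mu0))}"
proof -
  interpret stratified_design mu0 mu1 muZ S nS ppi q0
    using assms by (simp add: stratified_design_def potential_outcomes_def stratified_design_axioms_def)
  show ?thesis
    using tangent_space_subset centered_compatible_subset_tangent_space
    unfolding centered_compatible_def by blast
qed

end
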